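(* Let $K\subseteq R\subseteq H$ be a tower of Hopf subalgebras in a finite-dimensional Hopf algebra $H$ over a field $k$. If the inclusion $R^+H\hookrightarrow H$ is split as a monomorphism of right $H$-modules, then the depths $d(Q^H_K)$ and $d(Q^H_R)$ (as right $H$-modules) are both finite.
   Context: For a Hopf subalgebra $B\subseteq H$, $B^+=\ker\varepsilon\cap B$ and $Q^H_B=H/B^+H$, a right $H$-module. mod-$H$ is a tensor category with tensor product $M\otimes N$ over $k$ and diagonal action $(m\otimes n)h=mh_{(1)}\otimes nh_{(2)}$; $Q^{\otimes n}$ denotes the $n$-fold tensor power and $Q^{\otimes 0}=k$ with trivial action via $\varepsilon$. Two modules $X,Y$ are similar ($X\sim Y$) if each is isomorphic to a direct summand of a finite direct sum of copies of the other. The depth $d(Q_H)$ of a module $Q$ is the least integer $n\ge0$ with $Q^{\otimes n}\sim Q^{\otimes(n+1)}$ in mod-$H$ (and $\infty$ if none exists). *)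

theory Defs
  imports Main "HOL-Library.Extended_Nat"
begin

text \<open>A finite-dimensional
Hopf algebra H of dimension n has basis e_0..e_(n-1); vectors are functions
nat => k vanishing outside the index range; matrices are functions nat => nat => k.\<close>

type_synonym 'k vect = "nat \<Rightarrow> 'k"
type_synonym 'k matr = "nat \<Rightarrow> nat \<Rightarrow> 'k"

definition vecs :: "nat \<Rightarrow> ('k::zero) vect set" where
  "vecs m = {v. \<forall>i\<ge>m. v i = 0}"

definition vm :: "nat \<Rightarrow> nat \<Rightarrow> ('k::comm_ring_1) vect \<Rightarrow> 'k matr \<Rightarrow> 'k vect" where
  "vm m m' v F = (\<lambda>q. if q < m' then (\<Sum>p<m. v p * F p q) else 0)"

definition kd :: "nat \<Rightarrow> nat \<Rightarrow> 'k::comm_ring_1" where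
  "kd a b = (if a = b then 1 else 0)"

text \<open>Structure constants:
  e_i e_j = sum_l hmul i j l e_l;  1 = sum_l hunit l e_l;
  Delta(e_l) = sum_(i,j) hcomul l i j e_i (x) e_j;  eps(e_l) = heps l;
  S(e_l) = sum_j hS l j e_j.\<close>
record 'k hopf =
  hdim :: nat
  hmul :: "nat \<Rightarrow> nat \<Rightarrow> nat \<Rightarrow> 'k"
  hunit :: "nat \<Rightarrow> 'k"
  hcomul :: "nat \<Rightarrow> nat \<Rightarrow> nat \<Rightarrow> 'k"
  heps :: "nat \<Rightarrow> 'k"
  hS :: "nat \<Rightarrow> nat \<Rightarrow> 'k"

definition hopf_algebra :: "('k::field) hopf \<Rightarrow> bool" where
  "hopf_algebra H \<longleftrightarrow> (let n = hdim H; c = hmul H; u = hunit H; d = hcomul H;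
       e = heps H; s = hS H in
    \<comment> \<open>associativity\<close>
    (\<forall>i<n. \<forall>j<n. \<forall>k<n. \<forall>m<n.
       (\<Sum>l<n. c i j l * c l k m) = (\<Sum>l<n. c j k l * c i l m)) \<and>
    \<comment> \<open>unit\<close>
    (\<forall>j<n. \<forall>m<n. (\<Sum>i<n. u i * c i j m) = kd j m \<and> (\<Sum>i<n. u i * c j i m) = kd j m) \<and>
    \<comment> \<open>coassociativity\<close>
    (\<forall>l<n. \<forall>a<n. \<forall>b<n. \<forall>x<n.
       (\<Sum>i<n. d l i x * d i a b) = (\<Sum>j<n. d l a j * d j b x)) \<and>
    \<comment> \<open>counit\<close>
    (\<forall>l<n. \<forall>j<n. (\<Sum>i<n. e i * d l i j) = kd l j \<and> (\<Sum>i<n. e i * d l j i) = kd l j) \<and>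
    \<comment> \<open>Delta is multiplicative and unital\<close>
    (\<forall>i<n. \<forall>j<n. \<forall>a<n. \<forall>b<n.
       (\<Sum>l<n. c i j l * d l a b) =
       (\<Sum>p<n. \<Sum>q<n. \<Sum>r<n. \<Sum>t<n. d i p q * d j r t * c p r a * c q t b)) \<and>
    (\<forall>a<n. \<forall>b<n. (\<Sum>l<n. u l * d l a b) = u a * u b) \<and>
    \<comment> \<open>eps is multiplicative and unital\<close>
    (\<forall>i<n. \<forall>j<n. (\<Sum>l<n. c i j l * e l) = e i * e j) \<and>
    (\<Sum>l<n. u l * e l) = 1 \<and>
    \<comment> \<open>antipode\<close>
    (\<forall>l<n. \<forall>m<n.
       (\<Sum>i<n. \<Sum>j<n. \<Sum>p<n. d l i j * s i p * c p j m) = e l * u m \<and>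
       (\<Sum>i<n. \<Sum>j<n. \<Sum>p<n. d l i j * s j p * c i p m) = e l * u m))"

definition emul :: "('k::field) hopf \<Rightarrow> 'k vect \<Rightarrow> 'k vect \<Rightarrow> 'k vect" where
  "emul H x y = (\<lambda>l. if l < hdim H then
      (\<Sum>i<hdim H. \<Sum>j<hdim H. x i * y j * hmul H i j l) else 0)"

definition eone :: "('k::field) hopf \<Rightarrow> 'k vect" where
  "eone H = (\<lambda>l. if l < hdim H then hunit H l else 0)"

definition eeps :: "('k::field) hopf \<Rightarrow> 'k vect \<Rightarrow> 'k" where
  "eeps H x = (\<Sum>l<hdim H. x l * heps H l)"

definition eS :: "('k::field) hopf \<Rightarrow> 'k vect \<Rightarrow> 'k vect" where
  "eS H x = (\<lambda>j. if j < hdim H then (\<Sum>l<hdim H. x l * hS H l j) else 0)"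

text \<open>coefficient matrix of Delta(x) in H (x) H\<close>
definition ecomul :: "('k::field) hopf \<Rightarrow> 'k vect \<Rightarrow> 'k matr" where
  "ecomul H x = (\<lambda>a b. \<Sum>l<hdim H. x l * hcomul H l a b)"

definition subspace_of :: "nat \<Rightarrow> ('k::field) vect set \<Rightarrow> bool" where
  "subspace_of n B \<longleftrightarrow> B \<subseteq> vecs n \<and> (\<lambda>_. 0) \<in> B \<and>
     (\<forall>x\<in>B. \<forall>y\<in>B. (\<lambda>i. x i + y i) \<in> B) \<and> (\<forall>a. \<forall>x\<in>B. (\<lambda>i. a * x i) \<in> B)"

text \<open>M (an n x n coefficient matrix) lies in B (x) B, i.e. is a finite sum of
elementary tensors of elements of B\<close>
definition in_tensor2 :: "nat \<Rightarrow> ('k::field) vect set \<Rightarrow> 'k matr \<Rightarrow> bool" where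
  "in_tensor2 n B M \<longleftrightarrow> (\<exists>(m::nat) (x::nat \<Rightarrow> 'k vect) y. (\<forall>t<m. x t \<in> B \<and> y t \<in> B) \<and>
      (\<forall>a<n. \<forall>b<n. M a b = (\<Sum>t<m. x t a * y t b)))"

definition hopf_subalg :: "('k::field) hopf \<Rightarrow> 'k vect set \<Rightarrow> bool" where
  "hopf_subalg H B \<longleftrightarrow> subspace_of (hdim H) B \<and> eone H \<in> B \<and>
     (\<forall>x\<in>B. \<forall>y\<in>B. emul H x y \<in> B) \<and>
     (\<forall>x\<in>B. in_tensor2 (hdim H) B (ecomul H x)) \<and>
     (\<forall>x\<in>B. eS H x \<in> B)"

definition bplus :: "('k::field) hopf \<Rightarrow> 'k vect set \<Rightarrow> 'k vect set" where
  "bplus H B = {b \<in> B. eeps H b = 0}"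

definition lin_span :: "('k::field) vect set \<Rightarrow> 'k vect set" where
  "lin_span S = {v. \<exists>(m::nat) (c::nat \<Rightarrow> 'k) f. (\<forall>t<m. f t \<in> S) \<and> v = (\<lambda>i. \<Sum>t<m. c t * f t i)}"

definition bplusH :: "('k::field) hopf \<Rightarrow> 'k vect set \<Rightarrow> 'k vect set" where
  "bplusH H B = lin_span {emul H b h | b h. b \<in> bplus H B \<and> h \<in> vecs (hdim H)}"

text \<open>A module of dimension mdim; act l is the matrix of the right action of e_l:
(v . e_l)_q = sum_p v_p * act l p q.\<close>
record 'k hmod =
  mdim :: nat
  act :: "nat \<Rightarrow> nat \<Rightarrow> nat \<Rightarrow> 'k"

definition is_rmod :: "('k::field) hopf \<Rightarrow> 'k hmod \<Rightarrow> bool" where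
  "is_rmod H M \<longleftrightarrow>
    (\<forall>i<hdim H. \<forall>j<hdim H. \<forall>p<mdim M. \<forall>q<mdim M.
       (\<Sum>l<hdim H. hmul H i j l * act M l p q) = (\<Sum>r<mdim M. act M i p r * act M j r q)) \<and>
    (\<forall>p<mdim M. \<forall>q<mdim M. (\<Sum>l<hdim H. hunit H l * act M l p q) = kd p q)"

definition mhom :: "('k::field) hopf \<Rightarrow> 'k hmod \<Rightarrow> 'k hmod \<Rightarrow> 'k matr \<Rightarrow> bool" where
  "mhom H X Y F \<longleftrightarrow> (\<forall>l<hdim H. \<forall>p<mdim X. \<forall>r<mdim Y.
     (\<Sum>q<mdim Y. F p q * act Y l q r) = (\<Sum>q<mdim X. act X l p q * F q r))"

definition regmod :: "('k::field) hopf \<Rightarrow> 'k hmod" where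
  "regmod H = \<lparr>mdim = hdim H, act = (\<lambda>l p q. hmul H p l q)\<rparr>"

definition trivmod :: "('k::field) hopf \<Rightarrow> 'k hmod" where
  "trivmod H = \<lparr>mdim = 1, act = (\<lambda>l p q. heps H l)\<rparr>"

text \<open>M (x) N over k with diagonal action; basis index of m_p (x) n_q is p * dim N + q\<close>
definition tensmod :: "('k::field) hopf \<Rightarrow> 'k hmod \<Rightarrow> 'k hmod \<Rightarrow> 'k hmod" where
  "tensmod H M N = \<lparr>mdim = mdim M * mdim N,
     act = (\<lambda>l a b. \<Sum>i<hdim H. \<Sum>j<hdim H. hcomul H l i j *
        act M i (a div mdim N) (b div mdim N) * act N j (a mod mdim N) (b mod mdim N))\<rparr>"

text \<open>direct sum of r copies of M; index t * dim M + p is p in copy t\<close>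
definition dsumpow :: "('k::field) hmod \<Rightarrow> nat \<Rightarrow> 'k hmod" where
  "dsumpow M r = \<lparr>mdim = r * mdim M,
     act = (\<lambda>l a b. if a div mdim M = b div mdim M
                    then act M l (a mod mdim M) (b mod mdim M) else 0)\<rparr>"

fun tpow :: "('k::field) hopf \<Rightarrow> 'k hmod \<Rightarrow> nat \<Rightarrow> 'k hmod" where
  "tpow H Q 0 = trivmod H"
| "tpow H Q (Suc k) = tensmod H (tpow H Q k) Q"

definition summand_of :: "('k::field) hopf \<Rightarrow> 'k hmod \<Rightarrow> 'k hmod \<Rightarrow> bool" where
  "summand_of H X Y \<longleftrightarrow> (\<exists>r F G. mhom H X (dsumpow Y r) F \<and> mhom H (dsumpow Y r) X G \<and>
     (\<forall>p<mdim X. \<forall>p'<mdim X. (\<Sum>q<r * mdim Y. F p q * G q p') = kd p p'))"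

definition similar :: "('k::field) hopf \<Rightarrow> 'k hmod \<Rightarrow> 'k hmod \<Rightarrow> bool" where
  "similar H X Y \<longleftrightarrow> summand_of H X Y \<and> summand_of H Y X"

definition depth :: "('k::field) hopf \<Rightarrow> 'k hmod \<Rightarrow> enat" where
  "depth H Q = (if \<exists>n. similar H (tpow H Q n) (tpow H Q (Suc n))
     then enat (LEAST n. similar H (tpow H Q n) (tpow H Q (Suc n))) else \<infinity>)"

text \<open>Q is (isomorphic to) Q^H_B = H / B^+H: a right module Q with a surjective
module map H_H -> Q whose kernel is B^+H.\<close>
definition is_quot_mod :: "('k::field) hopf \<Rightarrow> 'k vect set \<Rightarrow> 'k hmod \<Rightarrow> bool" where
  "is_quot_mod H B Q \<longleftrightarrow> is_rmod H Q \<and>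
    (\<exists>P. mhom H (regmod H) Q P \<and>
       (\<forall>w\<in>vecs (mdim Q). \<exists>v\<in>vecs (hdim H). vm (hdim H) (mdim Q) v P = w) \<and>
       (\<forall>v\<in>vecs (hdim H). vm (hdim H) (mdim Q) v P = (\<lambda>_. 0) \<longleftrightarrow> v \<in> bplusH H B))"

text \<open>the inclusion B^+H -> H splits as a monomorphism of right H-modules:
there is a module endomorphism P of H_H with image in B^+H, identity on B^+H\<close>
definition split_incl :: "('k::field) hopf \<Rightarrow> 'k vect set \<Rightarrow> bool" where
  "split_incl H B \<longleftrightarrow> (\<exists>P. mhom H (regmod H) (regmod H) P \<and>
     (\<forall>v\<in>vecs (hdim H). vm (hdim H) (hdim H) v P \<in> bplusH H B) \<and>
     (\<forall>v\<in>bplusH H B. vm (hdim H) (hdim H) v P = v))"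

end

theory Submission
  imports Defs "HOL-Library.Function_Algebras"
begin

(* Since the inclusion R^+H -> H splits, Q_R = H/R^+H is a direct summand of H_H, hence projective.
   The map h |-> pi_K(h_(1)) (x) pi_R(h_(2)) vanishes on K^+H because pi_R restricts to eps on
   K <= R, so it induces Q_K -> Q_K (x) Q_R, which id (x) eps splits. As X (x) H is free for every
   module X, X (x) P is projective whenever P is; hence Q_K is projective too.
   For a projective Q with a surjection onto the trivial module, each Q^(n+1) is projective and a
   direct summand of Q^(n+2). Their traces in H_H therefore increase and must stabilize inside the
   finite-dimensional H; once the trace of Q^(n+2) lies in that of Q^(n+1), projectivity makes
   Q^(n+2) a summand of a multiple of Q^(n+1), so Q^(n+1) ~ Q^(n+2) and the depth is finite. *)

section \<open>Coordinate matrix calculus\<close>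

definition matmul :: "nat \<Rightarrow> ('k::comm_ring_1) matr \<Rightarrow> 'k matr \<Rightarrow> 'k matr" where
  "matmul k A B = (\<lambda>p r. \<Sum>q<k. A p q * B q r)"

lemma matmul_assoc: "matmul k2 (matmul k1 A B) C = matmul k1 A (matmul k2 B C)"
  unfolding matmul_def
  by (auto simp: sum_distrib_left sum_distrib_right mult.assoc intro!: ext sum.swap[THEN trans] sum.cong)

lemma matmul_cong_right:
  assumes "\<And>q. q < k \<Longrightarrow> B q r = B' q r"
  shows "matmul k A B p r = matmul k A B' p r"
  using assms unfolding matmul_def by (auto intro: sum.cong)

lemma matmul_cong_left:
  assumes "\<And>q. q < k \<Longrightarrow> A p q = A' p q"
  shows "matmul k A B p r = matmul k A' B p r"
  using assms unfolding matmul_def by (auto intro: sum.cong)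

lemma kd_sym: "kd a b = kd b a" unfolding kd_def by auto

lemma sum_kd_left: "b < k \<Longrightarrow> (\<Sum>q<k. kd b q * f q) = (f b :: 'k::comm_ring_1)"
proof -
  assume b: "b < k"
  have "(\<Sum>q<k. kd b q * f q) = (\<Sum>q<k. if b = q then f q else 0)"
    by (rule sum.cong) (auto simp: kd_def)
  then show ?thesis using b by (simp add: sum.delta)
qed
lemma sum_kd_right: "b < k \<Longrightarrow> (\<Sum>q<k. f q * kd q b) = (f b :: 'k::comm_ring_1)"
proof -
  assume b: "b < k"
  have "(\<Sum>q<k. f q * kd q b) = (\<Sum>q<k. if q = b then f q else 0)"
    by (rule sum.cong) (auto simp: kd_def)
  then show ?thesis using b by (simp add: sum.delta')
qed

lemma matmul_kd_left: "p < k \<Longrightarrow> matmul k kd A p r = A p r"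
  unfolding matmul_def by (simp add: sum_kd_left)
lemma matmul_kd_right: "r < k \<Longrightarrow> matmul k A kd p r = A p r"
  unfolding matmul_def by (simp add: sum_kd_right)

lemma sum_kd_left': "b < k \<Longrightarrow> (\<Sum>q<k. kd q b * f q) = (f b :: 'k::comm_ring_1)"
  using sum_kd_left[of b k f] by (simp add: kd_sym)
lemma sum_kd_right': "b < k \<Longrightarrow> (\<Sum>q<k. f q * kd b q) = (f b :: 'k::comm_ring_1)"
  using sum_kd_right[of b k f] by (simp add: kd_sym)
lemma sum_lessThan_mult:
  fixes f :: "nat \<Rightarrow> 'a::comm_monoid_add"
  shows "(\<Sum>q<m*d. f q) = (\<Sum>t<m. \<Sum>p<d. f (t*d + p))"
proof (induction m)
  case 0 then show ?case by simp
next
  case (Suc m)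
  have "(\<Sum>q<Suc m*d. f q) = (\<Sum>q<m*d. f q) + (\<Sum>q\<in>{m*d..<m*d+d}. f q)"
    by (simp add: add.commute sum.atLeastLessThan_concat[symmetric] lessThan_atLeast0 sum.atLeastLessThan_concat)
  also have "(\<Sum>q\<in>{m*d..<m*d+d}. f q) = (\<Sum>p<d. f (m*d + p))"
    by (simp add: sum.shift_bounds_nat_ivl[where k="m*d" and m=0, simplified] lessThan_atLeast0 add.commute)
  finally show ?case using Suc by simp
qed

lemma sum_lessThan_mult_divmod:
  fixes f :: "nat \<Rightarrow> nat \<Rightarrow> 'a::comm_monoid_add"
  shows "(\<Sum>q<m*d. f (q div d) (q mod d)) = (\<Sum>t<m. \<Sum>p<d. f t p)"
  by (subst sum_lessThan_mult) (auto intro!: sum.cong)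

lemma less_mult_div_bound: "(a::nat) < m * d \<Longrightarrow> a div d < m"
  by (simp add: less_mult_imp_div_less)
lemma less_mult_mod_bound: "(a::nat) < m * d \<Longrightarrow> a mod d < d"
  by (metis mod_less_divisor mult_0_right neq0_conv not_less0)
lemmas less_mult_divmod_bounds = less_mult_div_bound less_mult_mod_bound
lemma kd_divmod: "kd (a::nat) b = (if a div m = b div m then kd (a mod m) (b mod m) else (0::'k::comm_ring_1))"
  unfolding kd_def by (auto) (metis div_mult_mod_eq)

lemma sum_swap_in2:
  "(\<Sum>p\<in>P. \<Sum>x\<in>X. \<Sum>y\<in>Y. f p x y) =
   (\<Sum>x\<in>X. \<Sum>y\<in>Y. \<Sum>p\<in>P. (f p x y::'a::comm_monoid_add))"
  by (rule trans[OF sum.swap], rule sum.cong[OF refl], rule sum.swap)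
lemma sum_swap_in3:
  "(\<Sum>p\<in>P. \<Sum>x\<in>X. \<Sum>y\<in>Y. \<Sum>z\<in>Z. f p x y z) =
   (\<Sum>x\<in>X. \<Sum>y\<in>Y. \<Sum>z\<in>Z. \<Sum>p\<in>P. (f p x y z::'a::comm_monoid_add))"
  by (rule trans[OF sum.swap], rule sum.cong[OF refl], rule sum_swap_in2)
lemma sum_swap_in4:
  "(\<Sum>p\<in>P. \<Sum>x\<in>X. \<Sum>y\<in>Y. \<Sum>z\<in>Z. \<Sum>w\<in>W. f p x y z w) =
   (\<Sum>x\<in>X. \<Sum>y\<in>Y. \<Sum>z\<in>Z. \<Sum>w\<in>W. \<Sum>p\<in>P. (f p x y z w::'a::comm_monoid_add))"
  by (rule trans[OF sum.swap], rule sum.cong[OF refl], rule sum_swap_in3)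
lemma sum_swap_2_4: "(\<Sum>p\<in>P. \<Sum>q\<in>Q. \<Sum>x\<in>X. \<Sum>y\<in>Y. \<Sum>z\<in>Z. \<Sum>w\<in>W. f p q x y z w) =
   (\<Sum>x\<in>X. \<Sum>y\<in>Y. \<Sum>z\<in>Z. \<Sum>w\<in>W. \<Sum>p\<in>P. \<Sum>q\<in>Q. (f p q x y z w::'a::comm_monoid_add))"
proof -
  have "(\<Sum>p\<in>P. \<Sum>q\<in>Q. \<Sum>x\<in>X. \<Sum>y\<in>Y. \<Sum>z\<in>Z. \<Sum>w\<in>W. f p q x y z w) =
        (\<Sum>p\<in>P. \<Sum>x\<in>X. \<Sum>y\<in>Y. \<Sum>z\<in>Z. \<Sum>w\<in>W. \<Sum>q\<in>Q. f p q x y z w)"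
    by (rule sum.cong[OF refl], rule sum_swap_in4)
  also have "\<dots> = (\<Sum>x\<in>X. \<Sum>y\<in>Y. \<Sum>z\<in>Z. \<Sum>w\<in>W. \<Sum>p\<in>P. \<Sum>q\<in>Q. f p q x y z w)"
    by (rule sum_swap_in4)
  finally show ?thesis .
qed

lemma sum_product_2_2: "(\<Sum>x\<in>X. \<Sum>y\<in>Y. F x y) * (\<Sum>z\<in>Z. \<Sum>w\<in>W. G z w) =
   (\<Sum>x\<in>X. \<Sum>y\<in>Y. \<Sum>z\<in>Z. \<Sum>w\<in>W. (F x y * G z w :: 'a::comm_semiring_0))"
  unfolding sum_product by (rule sum.cong[OF refl], rule sum.swap)

lemma sum_product_scaled: "k * (\<Sum>s\<in>S. f s) * (\<Sum>t\<in>T. g t) = (\<Sum>s\<in>S. \<Sum>t\<in>T. k * f s * (g t::'a::comm_semiring_0))"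
  by (simp only: mult.assoc sum_product) (simp add: sum_distrib_left mult.assoc)

lemma sum_mult_swap: "(\<Sum>q\<in>Q. (\<Sum>r\<in>R. a r * b r q) * c q) = (\<Sum>r\<in>R. a r * (\<Sum>q\<in>Q. b r q * (c q :: 'a::comm_semiring_0)))"
  unfolding sum_distrib_left sum_distrib_right by (rule trans[OF sum.swap]) (simp add: mult_ac)
lemma sum_mult_swap': "(\<Sum>s\<in>S. a s * (\<Sum>m\<in>M. b m * C m s)) = (\<Sum>m\<in>M. b m * (\<Sum>s\<in>S. a s * (C m s :: 'a::comm_semiring_0)))"
  unfolding sum_distrib_left sum_distrib_right by (rule trans[OF sum.swap]) (simp add: mult_ac)

lemma sum_blocks:
  fixes f g :: "nat \<Rightarrow> 'k::comm_ring_1"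
  assumes "a1 < m"
  shows "(\<Sum>q<m*d. (if a1 = q div d then f (q mod d) else 0) * (if q div d = r1 then g (q mod d) else 0))
       = (if a1 = r1 then (\<Sum>p<d. f p * g p) else 0)"
proof -
  have "(\<Sum>q<m*d. (if a1 = q div d then f (q mod d) else 0) * (if q div d = r1 then g (q mod d) else 0))
     = (\<Sum>t<m. \<Sum>p<d. (if a1 = t then f p else 0) * (if t = r1 then g p else 0))"
    by (rule sum_lessThan_mult_divmod[where f="\<lambda>t p. (if a1 = t then f p else 0) * (if t = r1 then g p else 0)"])
  also have "\<dots> = (\<Sum>t<m. if a1 = t then (if a1 = r1 then (\<Sum>p<d. f p * g p) else 0) else 0)"
    by (intro sum.cong refl) auto
  also have "\<dots> = (if a1 = r1 then (\<Sum>p<d. f p * g p) else 0)"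
    using assms by (simp add: sum.delta)
  finally show ?thesis .
qed

lemma div_eq_iff_div_mod_mult:
  fixes a b m r :: nat
  assumes "0 < m"
  shows "(a div m = b div m) \<longleftrightarrow> (a div (r * m) = b div (r * m) \<and> a mod (r * m) div m = b mod (r * m) div m)"
proof -
  have e1: "\<And>x. x div (r * m) = x div m div r" by (simp add: div_mult2_eq mult.commute)
  have e2: "x mod (r * m) div m = x div m mod r" for x
  proof -
    have "x mod (r * m) = m * (x div m mod r) + x mod m" by (simp add: mod_mult2_eq mult.commute)
    then show ?thesis using assms by simp
  qed
  show ?thesis unfolding e1 e2 by (metis div_mult_mod_eq)
qed

lemma mult_add_div_eq: "q < (d::nat) \<Longrightarrow> (t * d + q) div d = t" by simp
lemma mult_add_mod_eq: "q < (d::nat) \<Longrightarrow> (t * d + q) mod d = q" by simp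

lemma mult_add_less_mult: "p < (a::nat) \<Longrightarrow> q < d \<Longrightarrow> p * d + q < a * d"
proof -
  assume "p < a" "q < d"
  then have "p * d + q < (p + 1) * d" by simp
  also have "\<dots> \<le> a * d" using \<open>p < a\<close> by (intro mult_le_mono1) simp
  finally show ?thesis .
qed

lemma sum_split_add: "(\<Sum>q<a+b. g q) = (\<Sum>q<a. g q) + (\<Sum>q<b. g (a + q :: nat))"
  by (induction b) (simp_all add: add.assoc)

lemma vm_matmul: "vm m m' (vm k m v A) B = vm k m' v (matmul m A B)"
  unfolding vm_def matmul_def
  by (auto simp: sum_distrib_left sum_distrib_right mult_ac intro!: ext sum.swap[THEN trans] sum.cong)

lemma vm_cong_mat:
  assumes "\<And>p q. p < k \<Longrightarrow> q < m \<Longrightarrow> A p q = B p q"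
  shows "vm k m v A = vm k m v B"
  using assms unfolding vm_def by (auto intro!: ext sum.cong)

lemma vm_vecs: "vm k m v A \<in> vecs m" unfolding vm_def vecs_def by auto

definition unit_vec :: "nat \<Rightarrow> ('k::comm_ring_1) vect" where
  "unit_vec q = (\<lambda>i. if i = q then 1 else 0)"

lemma unit_vec_vecs: "q < k \<Longrightarrow> unit_vec q \<in> vecs k" unfolding unit_vec_def vecs_def by auto

lemma vm_unit_vec: "q < k \<Longrightarrow> vm k m (unit_vec q) A = (\<lambda>y. if y < m then A q y else 0)"
  unfolding vm_def unit_vec_def by (auto intro!: ext simp: if_distrib[of "\<lambda>x. x * _"] sum.delta' cong: if_cong)

lemma mat_eq_rows:
  assumes "\<And>x. x < k \<Longrightarrow> vm k m (unit_vec x) M = vm k m (unit_vec x) N" "x < k" "y < m"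
  shows "M x y = N x y"
proof -
  have "vm k m (unit_vec x) M y = vm k m (unit_vec x) N y" using assms(1)[OF assms(2)] by simp
  then show ?thesis using assms(2,3) by (simp add: vm_unit_vec)
qed

lemma vm_lincomb: "vm k m (\<lambda>i. a * v i + b * w i) A = (\<lambda>y. a * vm k m v A y + b * vm k m w A (y::nat))"
  unfolding vm_def by (auto intro!: ext simp: sum.distrib sum_distrib_left distrib_left distrib_right mult_ac)

lemma vm_diff: "vm k m (\<lambda>i. v i - w i) A = (\<lambda>y. vm k m v A y - vm k m w A y)"
  unfolding vm_def by (auto intro!: ext simp: sum_subtractf algebra_simps)

lemma vm_sum: "vm k m (\<lambda>i. \<Sum>t\<in>T. c t * L t i) A = (\<lambda>y. \<Sum>t\<in>T. c t * vm k m (L t) A y)"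
  unfolding vm_def
  by (auto intro!: ext simp: sum_distrib_left sum_distrib_right mult_ac intro: sum.swap[THEN trans])

lemma vecs_diff:
  "(v::'k::comm_ring_1 vect) \<in> vecs k \<Longrightarrow> w \<in> vecs k \<Longrightarrow> (\<lambda>i. v i - w i) \<in> vecs k"
  unfolding vecs_def by auto

lemma vecs_sum:
  "(\<And>t. t \<in> T \<Longrightarrow> L t \<in> vecs k) \<Longrightarrow> (\<lambda>i. \<Sum>t\<in>T. (c t::'k::comm_ring_1) * L t i) \<in> vecs k"
  unfolding vecs_def by auto

lemma vm_kd: "v \<in> vecs k \<Longrightarrow> vm k k v kd = v"
proof (rule ext)
  fix q assume v: "v \<in> vecs k"
  show "vm k k v kd q = v q"
  proof (cases "q < k")
    case True then show ?thesis by (simp add: vm_def sum_kd_right)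
  next
    case False then show ?thesis using v by (simp add: vm_def vecs_def)
  qed
qed

lemma vm_vecs_eq: "w \<in> vecs m \<Longrightarrow> (\<And>y. y < m \<Longrightarrow> vm k m v A y = w y) \<Longrightarrow> vm k m v A = w"
  unfolding vecs_def vm_def by (auto intro!: ext)

lemma vecs_shift: "w \<in> vecs (m2 * d) \<Longrightarrow> (\<lambda>p. if p < m1 * d then 0 else w (p - m1 * d)) \<in> vecs ((m1 + m2) * d)"
  unfolding vecs_def by (auto simp: add_mult_distrib)

lemma vecs_mono: "w \<in> vecs a \<Longrightarrow> a \<le> b \<Longrightarrow> w \<in> vecs b" unfolding vecs_def by auto

lemma unit_vec_eq_kd: "unit_vec p = kd p" unfolding unit_vec_def kd_def by auto

lemma subspace_of_diff_scale:
  assumes "subspace_of n B" "x \<in> B" "y \<in> B"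
  shows "(\<lambda>i. x i - a * y i) \<in> B"
proof -
  have sc: "\<forall>a. \<forall>x\<in>B. (\<lambda>i. a * x i) \<in> B"
    using assms(1) unfolding subspace_of_def by (elim conjE) assumption
  have ad: "\<forall>x\<in>B. \<forall>y\<in>B. (\<lambda>i. x i + y i) \<in> B"
    using assms(1) unfolding subspace_of_def by (elim conjE) assumption
  have 1: "(\<lambda>i. (- a) * y i) \<in> B" using sc assms(3) by blast
  have "(\<lambda>i. x i + (\<lambda>i. (- a) * y i) i) \<in> B" using bspec[OF bspec[OF ad assms(2)] 1] .
  then show ?thesis by simp
qed

lemma eeps_lin: "eeps H (\<lambda>i. x i - c * y i) = eeps H x - c * eeps H y"
  unfolding eeps_def by (simp add: left_diff_distrib sum_subtractf sum_distrib_left mult.assoc)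


lemma hopf_subalg_vecs: "hopf_subalg H B \<Longrightarrow> B \<subseteq> vecs (hdim H)"
  unfolding hopf_subalg_def subspace_of_def by blast


section \<open>Module maps and direct summands\<close>

lemma mdim_dsumpow[simp]: "mdim (dsumpow X m) = m * mdim X" by (simp add: dsumpow_def)
lemma mdim_tensmod[simp]: "mdim (tensmod H X Y) = mdim X * mdim Y" by (simp add: tensmod_def)
lemma mdim_regmod[simp]: "mdim (regmod H) = hdim H" by (simp add: regmod_def)
lemma mdim_trivmod[simp]: "mdim (trivmod H) = 1" by (simp add: trivmod_def)

lemma act_regmod: "act (regmod H) l p q = hmul H p l q" by (simp add: regmod_def)
lemma act_dsumpow_regmod: "act (dsumpow (regmod H) a) l x q = (if x div hdim H = q div hdim H then hmul H (x mod hdim H) l (q mod hdim H) else 0)"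
  by (simp add: dsumpow_def regmod_def)

lemma mhom_iff_matmul:
  "mhom H X Y F \<longleftrightarrow> (\<forall>l<hdim H. \<forall>p<mdim X. \<forall>r<mdim Y.
     matmul (mdim Y) F (act Y l) p r = matmul (mdim X) (act X l) F p r)"
  unfolding mhom_def matmul_def by simp

lemma mhom_comp:
  assumes "mhom H X Y F" "mhom H Y Z G"
  shows "mhom H X Z (matmul (mdim Y) F G)"
  unfolding mhom_iff_matmul
proof (intro allI impI)
  fix l p r assume l: "l < hdim H" and p: "p < mdim X" and r: "r < mdim Z"
  have "matmul (mdim Z) (matmul (mdim Y) F G) (act Z l) p r = matmul (mdim Y) F (matmul (mdim Z) G (act Z l)) p r"
    by (simp add: matmul_assoc)
  also have "\<dots> = matmul (mdim Y) F (matmul (mdim Y) (act Y l) G) p r"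
    by (rule matmul_cong_right) (use assms(2) l r in \<open>auto simp: mhom_iff_matmul\<close>)
  also have "\<dots> = matmul (mdim Y) (matmul (mdim Y) F (act Y l)) G p r"
    by (simp add: matmul_assoc)
  also have "\<dots> = matmul (mdim Y) (matmul (mdim X) (act X l) F) G p r"
    by (rule matmul_cong_left) (use assms(1) l p in \<open>auto simp: mhom_iff_matmul\<close>)
  also have "\<dots> = matmul (mdim X) (act X l) (matmul (mdim Y) F G) p r"
    by (simp add: matmul_assoc)
  finally show "matmul (mdim Z) (matmul (mdim Y) F G) (act Z l) p r = matmul (mdim X) (act X l) (matmul (mdim Y) F G) p r" .
qed

lemma mhom_kd: "mhom H X X kd"
  unfolding mhom_def by (simp add: sum_kd_left sum_kd_right)

lemma mhom_cong_target:
  assumes "mhom H X Y F" "mdim Y' = mdim Y"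
    "\<And>l p q. l < hdim H \<Longrightarrow> p < mdim Y \<Longrightarrow> q < mdim Y \<Longrightarrow> act Y' l p q = act Y l p q"
  shows "mhom H X Y' F"
  using assms unfolding mhom_def by auto

lemma mhom_cong_source:
  assumes "mhom H X Y F" "mdim X' = mdim X"
    "\<And>l p q. l < hdim H \<Longrightarrow> p < mdim X \<Longrightarrow> q < mdim X \<Longrightarrow> act X' l p q = act X l p q"
  shows "mhom H X' Y F"
  using assms unfolding mhom_def by auto

definition is_summand :: "('k::field) hopf \<Rightarrow> 'k hmod \<Rightarrow> 'k hmod \<Rightarrow> bool" where
  "is_summand H X Y \<longleftrightarrow> (\<exists>F G. mhom H X Y F \<and> mhom H Y X G \<and>
     (\<forall>p<mdim X. \<forall>p'<mdim X. matmul (mdim Y) F G p p' = kd p p'))"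

lemma summand_of_iff_is_summand: "summand_of H X Y \<longleftrightarrow> (\<exists>r. is_summand H X (dsumpow Y r))"
  unfolding summand_of_def is_summand_def matmul_def by (simp add: dsumpow_def)

lemma is_summand_trans:
  assumes "is_summand H X Y" "is_summand H Y Z"
  shows "is_summand H X Z"
proof -
  obtain F G where F: "mhom H X Y F" and G: "mhom H Y X G" and FG: "\<forall>p<mdim X. \<forall>p'<mdim X. matmul (mdim Y) F G p p' = kd p p'"
    using assms(1) unfolding is_summand_def by blast
  obtain F2 G2 where F2: "mhom H Y Z F2" and G2: "mhom H Z Y G2" and FG2: "\<forall>p<mdim Y. \<forall>p'<mdim Y. matmul (mdim Z) F2 G2 p p' = kd p p'"
    using assms(2) unfolding is_summand_def by blast
  have "mhom H X Z (matmul (mdim Y) F F2)" using mhom_comp[OF F F2] .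
  moreover have "mhom H Z X (matmul (mdim Y) G2 G)" using mhom_comp[OF G2 G] .
  moreover have "\<forall>p<mdim X. \<forall>p'<mdim X. matmul (mdim Z) (matmul (mdim Y) F F2) (matmul (mdim Y) G2 G) p p' = kd p p'"
  proof (intro allI impI)
    fix p p' assume p: "p < mdim X" and p': "p' < mdim X"
    have "matmul (mdim Z) (matmul (mdim Y) F F2) (matmul (mdim Y) G2 G) p p' = matmul (mdim Y) F (matmul (mdim Y) (matmul (mdim Z) F2 G2) G) p p'"
      by (simp add: matmul_assoc)
    also have "\<dots> = matmul (mdim Y) F (matmul (mdim Y) kd G) p p'"
      by (rule matmul_cong_right, rule matmul_cong_left) (use FG2 in auto)
    also have "\<dots> = matmul (mdim Y) F G p p'"
      by (rule matmul_cong_right) (simp add: matmul_kd_left)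
    finally show "matmul (mdim Z) (matmul (mdim Y) F F2) (matmul (mdim Y) G2 G) p p' = kd p p'" using FG p p' by simp
  qed
  ultimately show ?thesis unfolding is_summand_def by blast
qed

declare is_summand_trans[trans]

lemma is_summand_reindex:
  assumes dim: "mdim Y = mdim X" and bij: "bij_betw \<sigma> {..<mdim X} {..<mdim X}"
    and act: "\<And>l p q. l < hdim H \<Longrightarrow> p < mdim X \<Longrightarrow> q < mdim X \<Longrightarrow> act Y l (\<sigma> p) (\<sigma> q) = act X l p q"
  shows "is_summand H X Y"
proof -
  let ?d = "mdim X"
  define F :: "'a matr" where "F = (\<lambda>p q. kd (\<sigma> p) q)"
  define G :: "'a matr" where "G = (\<lambda>q p. kd q (\<sigma> p))"
  have sig: "\<And>p. p < ?d \<Longrightarrow> \<sigma> p < ?d" using bij by (auto simp: bij_betw_def)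
  have reidx: "\<And>g. (\<Sum>q<?d. g (\<sigma> q)) = (\<Sum>q<?d. g q)"
    using sum.reindex_bij_betw[OF bij] by blast
  have "mhom H X Y F"
    unfolding mhom_def
  proof (intro allI impI)
    fix l p r assume l: "l < hdim H" and p: "p < ?d" and r: "r < mdim Y"
    have "(\<Sum>q<mdim Y. F p q * act Y l q r) = act Y l (\<sigma> p) r"
      unfolding F_def dim using sig[OF p] by (simp add: sum_kd_left)
    moreover have "(\<Sum>q<?d. act X l p q * F q r) = act Y l (\<sigma> p) r"
    proof -
      have "(\<Sum>q<?d. act X l p q * F q r) = (\<Sum>q<?d. act Y l (\<sigma> p) (\<sigma> q) * kd (\<sigma> q) r)"
        by (rule sum.cong) (auto simp: F_def act l p)
      also have "\<dots> = (\<Sum>q<?d. act Y l (\<sigma> p) q * kd q r)"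
        using reidx[of "\<lambda>q. act Y l (\<sigma> p) q * kd q r"] .
      finally show ?thesis using r dim by (simp add: sum_kd_right)
    qed
    ultimately show "(\<Sum>q<mdim Y. F p q * act Y l q r) = (\<Sum>q<mdim X. act X l p q * F q r)" by simp
  qed
  moreover have "mhom H Y X G"
    unfolding mhom_def
  proof (intro allI impI)
    fix l q r assume l: "l < hdim H" and q: "q < mdim Y" and r: "r < ?d"
    have "(\<Sum>p<?d. G q p * act X l p r) = (\<Sum>p<?d. kd q (\<sigma> p) * act Y l (\<sigma> p) (\<sigma> r))"
      by (rule sum.cong) (auto simp: G_def act l r)
    also have "\<dots> = (\<Sum>p<?d. kd q p * act Y l p (\<sigma> r))"
      using reidx[of "\<lambda>p. kd q p * act Y l p (\<sigma> r)"] .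
    also have "\<dots> = act Y l q (\<sigma> r)" using q dim by (simp add: sum_kd_left)
    also have "\<dots> = (\<Sum>p<mdim Y. act Y l q p * G p r)"
      unfolding G_def using sig[OF r] dim by (simp add: sum_kd_right)
    finally show "(\<Sum>p<mdim X. G q p * act X l p r) = (\<Sum>p<mdim Y. act Y l q p * G p r)" by simp
  qed
  moreover have "\<forall>p<?d. \<forall>p'<?d. matmul (mdim Y) F G p p' = kd p p'"
  proof (intro allI impI)
    fix p p' assume p: "p < ?d" and p': "p' < ?d"
    have "matmul (mdim Y) F G p p' = kd (\<sigma> p) (\<sigma> p')"
      unfolding matmul_def F_def G_def using sig[OF p] dim by (simp add: sum_kd_left)
    also have "\<dots> = kd p p'" using bij p p' unfolding kd_def bij_betw_def inj_on_def by auto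
    finally show "matmul (mdim Y) F G p p' = kd p p'" .
  qed
  ultimately show ?thesis unfolding is_summand_def by blast
qed

lemma is_summand_same_act:
  assumes "mdim Y = mdim X"
    and "\<And>l p q. l < hdim H \<Longrightarrow> p < mdim X \<Longrightarrow> q < mdim X \<Longrightarrow> act Y l p q = act X l p q"
  shows "is_summand H X Y" "is_summand H Y X"
  using is_summand_reindex[of Y X id H] is_summand_reindex[of X Y id H] assms by auto

lemma mhom_inverse:
  assumes F: "mhom H X Y F"
    and FG: "\<forall>p<mdim X. \<forall>p'<mdim X. matmul (mdim Y) F G p p' = kd p p'"
    and GF: "\<forall>q<mdim Y. \<forall>q'<mdim Y. matmul (mdim X) G F q q' = kd q q'"
  shows "mhom H Y X G"
  unfolding mhom_iff_matmul
proof (intro allI impI)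
  fix l q r assume l: "l < hdim H" and q: "q < mdim Y" and r: "r < mdim X"
  have "matmul (mdim X) G (act X l) q r = matmul (mdim X) G (matmul (mdim Y) (matmul (mdim X) (act X l) F) G) q r"
  proof (rule matmul_cong_right)
    fix p assume p: "p < mdim X"
    have "matmul (mdim Y) (matmul (mdim X) (act X l) F) G p r = matmul (mdim X) (act X l) (matmul (mdim Y) F G) p r"
      by (simp add: matmul_assoc)
    also have "\<dots> = matmul (mdim X) (act X l) kd p r"
      by (rule matmul_cong_right) (use FG r in auto)
    also have "\<dots> = act X l p r" using r by (simp add: matmul_kd_right)
    finally show "act X l p r = matmul (mdim Y) (matmul (mdim X) (act X l) F) G p r" by simp
  qed
  also have "\<dots> = matmul (mdim X) G (matmul (mdim Y) (matmul (mdim Y) F (act Y l)) G) q r"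
    by (rule matmul_cong_right, rule matmul_cong_left) (use F l in \<open>auto simp: mhom_iff_matmul\<close>)
  also have "\<dots> = matmul (mdim Y) (matmul (mdim X) G F) (matmul (mdim Y) (act Y l) G) q r"
    by (simp add: matmul_assoc)
  also have "\<dots> = matmul (mdim Y) kd (matmul (mdim Y) (act Y l) G) q r"
    by (rule matmul_cong_left) (use GF q in auto)
  also have "\<dots> = matmul (mdim Y) (act Y l) G q r" using q by (simp add: matmul_kd_left)
  finally show "matmul (mdim X) G (act X l) q r = matmul (mdim Y) (act Y l) G q r" .
qed

definition blockdiag :: "nat \<Rightarrow> nat \<Rightarrow> ('k::comm_ring_1) matr \<Rightarrow> 'k matr" where
  "blockdiag dX dY F = (\<lambda>a b. if a div dX = b div dY then F (a mod dX) (b mod dY) else 0)"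

lemma blockdiag_mhom:
  assumes "mhom H X Y F"
  shows "mhom H (dsumpow X m) (dsumpow Y m) (blockdiag (mdim X) (mdim Y) F)"
  unfolding mhom_def
proof (intro allI impI)
  fix l a r assume l: "l < hdim H" and a: "a < mdim (dsumpow X m)" and r: "r < mdim (dsumpow Y m)"
  have a': "a < m * mdim X" and r': "r < m * mdim Y" using a r by (auto simp: dsumpow_def)
  have "(\<Sum>q<mdim (dsumpow Y m). blockdiag (mdim X) (mdim Y) F a q * act (dsumpow Y m) l q r)
      = (\<Sum>q<m * mdim Y. (if a div mdim X = q div mdim Y then F (a mod mdim X) (q mod mdim Y) else 0) *
           (if q div mdim Y = r div mdim Y then act Y l (q mod mdim Y) (r mod mdim Y) else 0))"
    by (simp add: blockdiag_def dsumpow_def)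
  also have "\<dots> = (if a div mdim X = r div mdim Y then (\<Sum>p<mdim Y. F (a mod mdim X) p * act Y l p (r mod mdim Y)) else 0)"
    by (rule sum_blocks) (use a' less_mult_divmod_bounds in auto)
  also have "\<dots> = (if a div mdim X = r div mdim Y then (\<Sum>p<mdim X. act X l (a mod mdim X) p * F p (r mod mdim Y)) else 0)"
    using assms l a' r' less_mult_divmod_bounds unfolding mhom_def by auto
  also have "\<dots> = (\<Sum>q<m * mdim X. (if a div mdim X = q div mdim X then act X l (a mod mdim X) (q mod mdim X) else 0) *
           (if q div mdim X = r div mdim Y then F (q mod mdim X) (r mod mdim Y) else 0))"
    by (rule sum_blocks[symmetric]) (use a' less_mult_divmod_bounds in auto)
  also have "\<dots> = (\<Sum>q<mdim (dsumpow X m). act (dsumpow X m) l a q * blockdiag (mdim X) (mdim Y) F q r)"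
    by (simp add: blockdiag_def dsumpow_def)
  finally show "(\<Sum>q<mdim (dsumpow Y m). blockdiag (mdim X) (mdim Y) F a q * act (dsumpow Y m) l q r)
      = (\<Sum>q<mdim (dsumpow X m). act (dsumpow X m) l a q * blockdiag (mdim X) (mdim Y) F q r)" .
qed

lemma matmul_blockdiag:
  assumes "a < m * dX"
  shows "matmul (m * dY) (blockdiag dX dY F) (blockdiag dY dZ G) a b =
         (if a div dX = b div dZ then matmul dY F G (a mod dX) (b mod dZ) else 0)"
proof -
  have "matmul (m * dY) (blockdiag dX dY F) (blockdiag dY dZ G) a b =
     (\<Sum>q<m * dY. (if a div dX = q div dY then F (a mod dX) (q mod dY) else 0) *
           (if q div dY = b div dZ then G (q mod dY) (b mod dZ) else 0))"
    by (simp add: matmul_def blockdiag_def)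
  also have "\<dots> = (if a div dX = b div dZ then matmul dY F G (a mod dX) (b mod dZ) else 0)"
    by (subst sum_blocks) (use assms less_mult_divmod_bounds in \<open>auto simp: matmul_def\<close>)
  finally show ?thesis .
qed

lemma is_summand_dsumpow:
  assumes "is_summand H X Y"
  shows "is_summand H (dsumpow X m) (dsumpow Y m)"
proof -
  obtain F G where F: "mhom H X Y F" and G: "mhom H Y X G" and FG: "\<forall>p<mdim X. \<forall>p'<mdim X. matmul (mdim Y) F G p p' = kd p p'"
    using assms unfolding is_summand_def by blast
  have "\<forall>p<m * mdim X. \<forall>p'<m * mdim X. matmul (m * mdim Y) (blockdiag (mdim X) (mdim Y) F) (blockdiag (mdim Y) (mdim X) G) p p' = kd p p'"
  proof (intro allI impI)
    fix p p' assume p: "p < m * mdim X" and p': "p' < m * mdim X"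
    show "matmul (m * mdim Y) (blockdiag (mdim X) (mdim Y) F) (blockdiag (mdim Y) (mdim X) G) p p' = kd p p'"
      using matmul_blockdiag[OF p, of "mdim Y" F "mdim X" G p'] FG less_mult_divmod_bounds[OF p] less_mult_divmod_bounds[OF p'] by (simp add: kd_divmod[of p p' "mdim X"])
  qed
  then show ?thesis unfolding is_summand_def using blockdiag_mhom[OF F, of m] blockdiag_mhom[OF G, of m]
    by (intro exI[of _ "blockdiag (mdim X) (mdim Y) F"] exI[of _ "blockdiag (mdim Y) (mdim X) G"]) (simp add: mdim_dsumpow)
qed

lemma dsumpow_dsumpow_summand:
  "is_summand H (dsumpow (dsumpow Y r) s) (dsumpow Y (s * r))"
  "is_summand H (dsumpow Y (s * r)) (dsumpow (dsumpow Y r) s)"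
proof -
  let ?m = "mdim Y"
  have act: "act (dsumpow Y (s * r)) l a b = act (dsumpow (dsumpow Y r) s) l a b"
    if a: "a < mdim (dsumpow (dsumpow Y r) s)" for l a b
  proof -
    have m: "0 < ?m" using a by (cases "?m = 0") auto
    have "(a mod (r * ?m)) mod ?m = a mod ?m" "(b mod (r * ?m)) mod ?m = b mod ?m"
      by (simp_all add: mod_mod_cancel)
    then show ?thesis using div_eq_iff_div_mod_mult[OF m, of a b r] by (auto simp: dsumpow_def)
  qed
  have dim: "mdim (dsumpow Y (s * r)) = mdim (dsumpow (dsumpow Y r) s)" by simp
  show "is_summand H (dsumpow (dsumpow Y r) s) (dsumpow Y (s * r))"
    by (rule is_summand_same_act(1)[OF dim]) (use act in auto)
  show "is_summand H (dsumpow Y (s * r)) (dsumpow (dsumpow Y r) s)"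
    by (rule is_summand_same_act(2)[OF dim]) (use act in auto)
qed

lemma dsumpow_one_summand:
  "is_summand H X (dsumpow X 1)" "is_summand H (dsumpow X 1) X"
proof -
  have dim: "mdim (dsumpow X 1) = mdim X" by simp
  have act: "act (dsumpow X 1) l a b = act X l a b" if "a < mdim X" "b < mdim X" for l a b
    using that by (simp add: dsumpow_def)
  show "is_summand H X (dsumpow X 1)" by (rule is_summand_same_act(1)[OF dim]) (use act in auto)
  show "is_summand H (dsumpow X 1) X" by (rule is_summand_same_act(2)[OF dim]) (use act in auto)
qed

lemma tensmod_dsumpow_summand:
  "is_summand H (tensmod H X (dsumpow Y r)) (dsumpow (tensmod H X Y) r)"
proof -
  let ?dX = "mdim X" and ?dY = "mdim Y"
  let ?N = "?dX * (r * ?dY)"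
  define \<sigma> where "\<sigma> = (\<lambda>a. (a mod (r * ?dY)) div ?dY * (?dX * ?dY) + (a div (r * ?dY) * ?dY + (a mod (r * ?dY)) mod ?dY))"
  have comp: "a div (r * ?dY) < ?dX" "(a mod (r * ?dY)) div ?dY < r" "(a mod (r * ?dY)) mod ?dY < ?dY"
    if "a < ?N" for a
  proof -
    show "a div (r * ?dY) < ?dX" using that by (simp add: less_mult_imp_div_less mult.commute)
    have rdy: "0 < r * ?dY" using that by (cases "r * ?dY = 0") auto
    have "a mod (r * ?dY) < r * ?dY" using rdy by simp
    then show "(a mod (r * ?dY)) div ?dY < r" by (simp add: less_mult_imp_div_less)
    show "(a mod (r * ?dY)) mod ?dY < ?dY" using rdy by (cases "?dY = 0") auto
  qed
  have inner_lt: "a div (r * ?dY) * ?dY + (a mod (r * ?dY)) mod ?dY < ?dX * ?dY" if "a < ?N" for a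
    using mult_add_less_mult[OF comp(1)[OF that] comp(3)[OF that]] .
  have sdiv: "\<sigma> a div (?dX * ?dY) = (a mod (r * ?dY)) div ?dY" if "a < ?N" for a
    unfolding \<sigma>_def by (rule mult_add_div_eq[OF inner_lt[OF that]])
  have smod: "\<sigma> a mod (?dX * ?dY) = a div (r * ?dY) * ?dY + (a mod (r * ?dY)) mod ?dY" if "a < ?N" for a
    unfolding \<sigma>_def by (rule mult_add_mod_eq[OF inner_lt[OF that]])
  have smd: "(\<sigma> a mod (?dX * ?dY)) div ?dY = a div (r * ?dY)" "(\<sigma> a mod (?dX * ?dY)) mod ?dY = (a mod (r * ?dY)) mod ?dY"
    if "a < ?N" for a
    using smod[OF that] comp(3)[OF that] by simp_all
  have slt: "\<sigma> a < ?N" if "a < ?N" for a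
  proof -
    have "\<sigma> a < r * (?dX * ?dY)" unfolding \<sigma>_def using mult_add_less_mult[OF comp(2)[OF that] inner_lt[OF that]] by simp
    then show ?thesis by (simp add: mult_ac)
  qed
  have inj: "inj_on \<sigma> {..<?N}"
  proof (rule inj_onI)
    fix a b assume a: "a \<in> {..<?N}" and b: "b \<in> {..<?N}" and e: "\<sigma> a = \<sigma> b"
    have a': "a < ?N" and b': "b < ?N" using a b by auto
    have 1: "(a mod (r * ?dY)) div ?dY = (b mod (r * ?dY)) div ?dY" using sdiv[OF a'] sdiv[OF b'] e by simp
    have 2: "a div (r * ?dY) = b div (r * ?dY)" using smd(1)[OF a'] smd(1)[OF b'] e by simp
    have 3: "(a mod (r * ?dY)) mod ?dY = (b mod (r * ?dY)) mod ?dY" using smd(2)[OF a'] smd(2)[OF b'] e by simp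
    have "a mod (r * ?dY) = b mod (r * ?dY)" using 1 3 by (metis div_mult_mod_eq)
    then show "a = b" using 2 by (metis div_mult_mod_eq)
  qed
  have bij: "bij_betw \<sigma> {..<?N} {..<?N}"
    unfolding bij_betw_def using inj endo_inj_surj[of "{..<?N}" \<sigma>] slt by auto
  show ?thesis
  proof (rule is_summand_reindex)
    show "mdim (dsumpow (tensmod H X Y) r) = mdim (tensmod H X (dsumpow Y r))" by (simp add: mult_ac)
    show "bij_betw \<sigma> {..<mdim (tensmod H X (dsumpow Y r))} {..<mdim (tensmod H X (dsumpow Y r))}"
      using bij by simp
    fix l a b assume l: "l < hdim H" and a: "a < mdim (tensmod H X (dsumpow Y r))" and b: "b < mdim (tensmod H X (dsumpow Y r))"
    have a': "a < ?N" and b': "b < ?N" using a b by auto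
    show "act (dsumpow (tensmod H X Y) r) l (\<sigma> a) (\<sigma> b) = act (tensmod H X (dsumpow Y r)) l a b"
      using sdiv[OF a'] sdiv[OF b'] smd[OF a'] smd[OF b']
      by (simp add: dsumpow_def tensmod_def if_distrib[of "\<lambda>x. _ * x"] sum.If_cases)
  qed
qed

definition id_tensor :: "nat \<Rightarrow> nat \<Rightarrow> ('k::comm_ring_1) matr \<Rightarrow> 'k matr" where
  "id_tensor dY dY' G = (\<lambda>a b. kd (a div dY) (b div dY') * G (a mod dY) (b mod dY'))"

lemma matmul_id_tensor:
  assumes "a < dX * dY"
  shows "matmul (dX * dY') (id_tensor dY dY' F) (id_tensor dY' dZ G) a b = kd (a div dY) (b div dZ) * matmul dY' F G (a mod dY) (b mod dZ)"
proof -
  have a1: "a div dY < dX" using assms by (simp add: less_mult_imp_div_less)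
  have "matmul (dX * dY') (id_tensor dY dY' F) (id_tensor dY' dZ G) a b =
      (\<Sum>q1<dX. \<Sum>q2<dY'. kd (a div dY) q1 * (kd q1 (b div dZ) * (F (a mod dY) q2 * G q2 (b mod dZ))))"
    unfolding matmul_def id_tensor_def by (subst sum_lessThan_mult) (simp add: mult_ac)
  also have "\<dots> = (\<Sum>q1<dX. kd (a div dY) q1 * (kd q1 (b div dZ) * matmul dY' F G (a mod dY) (b mod dZ)))"
    by (simp add: matmul_def sum_distrib_left)
  also have "\<dots> = kd (a div dY) (b div dZ) * matmul dY' F G (a mod dY) (b mod dZ)"
    using a1 by (simp add: sum_kd_left)
  finally show ?thesis .
qed

definition projective :: "('k::field) hopf \<Rightarrow> 'k hmod \<Rightarrow> bool" where
  "projective H P \<longleftrightarrow> (\<exists>a. is_summand H P (dsumpow (regmod H) a))"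

lemma projective_summand: "is_summand H X P \<Longrightarrow> projective H P \<Longrightarrow> projective H X"
  unfolding projective_def using is_summand_trans by blast

section \<open>Tensor products and free modules\<close>

(* The module map H^a -> Y sending the unit of the t-th copy of H to y t. *)
definition free_map :: "('k::field) hopf \<Rightarrow> 'k hmod \<Rightarrow> (nat \<Rightarrow> 'k vect) \<Rightarrow> 'k matr" where
  "free_map H Y y = (\<lambda>x q. \<Sum>r<mdim Y. y (x div hdim H) r * act Y (x mod hdim H) r q)"

lemma free_map_mhom:
  assumes Y: "is_rmod H Y"
  shows "mhom H (dsumpow (regmod H) a) Y (free_map H Y y)"
  unfolding mhom_def
proof (intro allI impI)
  let ?n = "hdim H" and ?dY = "mdim Y" and ?Ha = "dsumpow (regmod H) a"
  let ?c = "hmul H" and ?g = "free_map H Y y"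
  have YA: "\<And>i j p q. i < ?n \<Longrightarrow> j < ?n \<Longrightarrow> p < ?dY \<Longrightarrow> q < ?dY \<Longrightarrow>
       (\<Sum>s<?dY. act Y i p s * act Y j s q) = (\<Sum>l<?n. ?c i j l * act Y l p q)"
    using Y unfolding is_rmod_def by simp
  have aHa: "\<And>l x q. act ?Ha l x q = (if x div ?n = q div ?n then ?c (x mod ?n) l (q mod ?n) else 0)"
    by (simp add: dsumpow_def regmod_def)
  fix l x r assume l: "l < ?n" and x: "x < mdim ?Ha" and r: "r < ?dY"
  have x': "x < a * ?n" using x by simp
  have x1: "x div ?n < a" and x2: "x mod ?n < ?n" using less_mult_divmod_bounds[OF x'] by auto
  have "(\<Sum>q<?dY. ?g x q * act Y l q r) = (\<Sum>s<?dY. y (x div ?n) s * (\<Sum>q<?dY. act Y (x mod ?n) s q * act Y l q r))"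
    unfolding free_map_def by (rule sum_mult_swap)
  also have "\<dots> = (\<Sum>s<?dY. y (x div ?n) s * (\<Sum>m<?n. ?c (x mod ?n) l m * act Y m s r))"
    by (intro sum.cong refl) (simp add: YA x2 l r)
  also have "\<dots> = (\<Sum>m<?n. ?c (x mod ?n) l m * ?g (x div ?n * ?n + m) r)"
    unfolding free_map_def by (subst sum_mult_swap') (auto intro!: sum.cong)
  also have "\<dots> = (\<Sum>q<a * ?n. act ?Ha l x q * ?g q r)"
  proof -
    have "(\<Sum>q<a * ?n. act ?Ha l x q * ?g q r) = (\<Sum>t<a. \<Sum>m<?n. act ?Ha l x (t * ?n + m) * ?g (t * ?n + m) r)"
      by (rule sum_lessThan_mult)
    also have "\<dots> = (\<Sum>t<a. if x div ?n = t then (\<Sum>m<?n. ?c (x mod ?n) l m * ?g (t * ?n + m) r) else 0)"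
      by (intro sum.cong refl) (auto simp: aHa)
    also have "\<dots> = (\<Sum>m<?n. ?c (x mod ?n) l m * ?g (x div ?n * ?n + m) r)"
      using x1 by (simp add: sum.delta)
    finally show ?thesis by simp
  qed
  finally show "(\<Sum>q<mdim Y. ?g x q * act Y l q r) = (\<Sum>q<mdim ?Ha. act ?Ha l x q * ?g q r)" by simp
qed

(* x_p (x) h |-> x_p h_(1) (x) h_(2), from the copy p of H in H^(dim X) to X (x) H;
   the inverse uses S(h_(1)) in place of h_(1). *)
definition free_iso :: "('k::field) hopf \<Rightarrow> 'k hmod \<Rightarrow> 'k matr" where
  "free_iso H X = (\<lambda>x y. \<Sum>i<hdim H.
     hcomul H (x mod hdim H) i (y mod hdim H) * act X i (x div hdim H) (y div hdim H))"

definition free_iso_inv :: "('k::field) hopf \<Rightarrow> 'k hmod \<Rightarrow> 'k matr" where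
  "free_iso_inv H X = (\<lambda>x y. \<Sum>i<hdim H. hcomul H (x mod hdim H) i (y mod hdim H) *
     (\<Sum>s<hdim H. hS H i s * act X s (x div hdim H) (y div hdim H)))"

(* h |-> PX(h_(1)) (x) PY(h_(2)), into a tensor product whose second factor has dimension d. *)
definition diag_map :: "('k::field) hopf \<Rightarrow> nat \<Rightarrow> 'k matr \<Rightarrow> 'k matr \<Rightarrow> 'k matr" where
  "diag_map H d PX PY = (\<lambda>a z. \<Sum>i<hdim H. \<Sum>j<hdim H.
     hcomul H a i j * PX i (z div d) * PY j (z mod d))"

context
  fixes H :: "('k::field) hopf"
  assumes hopf: "hopf_algebra H"
begin

lemmas hopf_laws = hopf[unfolded hopf_algebra_def Let_def]

lemma hopf_unit_left:
  "j < hdim H \<Longrightarrow> m < hdim H \<Longrightarrow> (\<Sum>i<hdim H. hunit H i * hmul H i j m) = kd j m"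
  using hopf_laws[THEN conjunct2, THEN conjunct1] by blast

lemma hopf_unit_right:
  "j < hdim H \<Longrightarrow> m < hdim H \<Longrightarrow> (\<Sum>i<hdim H. hunit H i * hmul H j i m) = kd j m"
  using hopf_laws[THEN conjunct2, THEN conjunct1] by blast

lemma hopf_coassoc:
  "l < hdim H \<Longrightarrow> a < hdim H \<Longrightarrow> b < hdim H \<Longrightarrow> x < hdim H \<Longrightarrow>
   (\<Sum>i<hdim H. hcomul H l i x * hcomul H i a b) = (\<Sum>j<hdim H. hcomul H l a j * hcomul H j b x)"
  using hopf_laws[THEN conjunct2, THEN conjunct2, THEN conjunct1] by blast

lemma hopf_counit_left:
  "l < hdim H \<Longrightarrow> j < hdim H \<Longrightarrow> (\<Sum>i<hdim H. heps H i * hcomul H l i j) = kd l j"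
  using hopf_laws[THEN conjunct2, THEN conjunct2, THEN conjunct2, THEN conjunct1] by blast

lemma hopf_counit_right:
  "l < hdim H \<Longrightarrow> j < hdim H \<Longrightarrow> (\<Sum>i<hdim H. heps H i * hcomul H l j i) = kd l j"
  using hopf_laws[THEN conjunct2, THEN conjunct2, THEN conjunct2, THEN conjunct1] by blast

lemma hopf_comul_mult:
  "i < hdim H \<Longrightarrow> j < hdim H \<Longrightarrow> a < hdim H \<Longrightarrow> b < hdim H \<Longrightarrow>
   (\<Sum>l<hdim H. hmul H i j l * hcomul H l a b) =
   (\<Sum>p<hdim H. \<Sum>q<hdim H. \<Sum>r<hdim H. \<Sum>t<hdim H.
      hcomul H i p q * hcomul H j r t * hmul H p r a * hmul H q t b)"
  using hopf_laws[THEN conjunct2, THEN conjunct2, THEN conjunct2, THEN conjunct2, THEN conjunct1] by blast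

lemma hopf_comul_unit:
  "a < hdim H \<Longrightarrow> b < hdim H \<Longrightarrow> (\<Sum>l<hdim H. hunit H l * hcomul H l a b) = hunit H a * hunit H b"
  using hopf_laws[THEN conjunct2, THEN conjunct2, THEN conjunct2, THEN conjunct2, THEN conjunct2, THEN conjunct1] by blast

lemma hopf_eps_mult:
  "i < hdim H \<Longrightarrow> j < hdim H \<Longrightarrow> (\<Sum>l<hdim H. hmul H i j l * heps H l) = heps H i * heps H j"
  using hopf_laws[THEN conjunct2, THEN conjunct2, THEN conjunct2, THEN conjunct2, THEN conjunct2, THEN conjunct2, THEN conjunct1] by blast

lemma hopf_eps_unit: "(\<Sum>l<hdim H. hunit H l * heps H l) = 1"
  using hopf_laws[THEN conjunct2, THEN conjunct2, THEN conjunct2, THEN conjunct2, THEN conjunct2, THEN conjunct2, THEN conjunct2, THEN conjunct1] by blast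

lemma hopf_antipode_left:
  "l < hdim H \<Longrightarrow> m < hdim H \<Longrightarrow>
   (\<Sum>i<hdim H. \<Sum>j<hdim H. \<Sum>p<hdim H. hcomul H l i j * hS H i p * hmul H p j m) = heps H l * hunit H m"
  using hopf_laws[THEN conjunct2, THEN conjunct2, THEN conjunct2, THEN conjunct2, THEN conjunct2, THEN conjunct2, THEN conjunct2, THEN conjunct2] by blast

lemma hopf_antipode_right:
  "l < hdim H \<Longrightarrow> m < hdim H \<Longrightarrow>
   (\<Sum>i<hdim H. \<Sum>j<hdim H. \<Sum>p<hdim H. hcomul H l i j * hS H j p * hmul H i p m) = heps H l * hunit H m"
  using hopf_laws[THEN conjunct2, THEN conjunct2, THEN conjunct2, THEN conjunct2, THEN conjunct2, THEN conjunct2, THEN conjunct2, THEN conjunct2] by blast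

lemma trivmod_rmod: "is_rmod H (trivmod H)"
  unfolding is_rmod_def trivmod_def
  using hopf_eps_mult hopf_eps_unit by (simp add: kd_def mult.commute)
lemma dsumpow_rmod:
  assumes M: "is_rmod H M"
  shows "is_rmod H (dsumpow M r)"
proof -
  let ?m = "mdim M"
  have A1: "\<And>i j p q. i < hdim H \<Longrightarrow> j < hdim H \<Longrightarrow> p < ?m \<Longrightarrow> q < ?m \<Longrightarrow>
       (\<Sum>l<hdim H. hmul H i j l * act M l p q) = (\<Sum>s<?m. act M i p s * act M j s q)"
    using M unfolding is_rmod_def by blast
  have A2: "\<And>p q. p < ?m \<Longrightarrow> q < ?m \<Longrightarrow> (\<Sum>l<hdim H. hunit H l * act M l p q) = kd p q"
    using M unfolding is_rmod_def by blast
  show ?thesis unfolding is_rmod_def dsumpow_def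
  proof (simp, intro conjI allI impI)
    fix i j a b assume i: "i < hdim H" and j: "j < hdim H" and a: "a < r * ?m" and b: "b < r * ?m"
    have "(\<Sum>s<r * ?m. (if a div ?m = s div ?m then act M i (a mod ?m) (s mod ?m) else 0) *
                 (if s div ?m = b div ?m then act M j (s mod ?m) (b mod ?m) else 0))
        = (\<Sum>t<r. \<Sum>p<?m. (if a div ?m = t then act M i (a mod ?m) p else 0) *
                 (if t = b div ?m then act M j p (b mod ?m) else 0))"
      by (rule sum_lessThan_mult_divmod[where f = "\<lambda>t p. (if a div ?m = t then act M i (a mod ?m) p else 0) *
                 (if t = b div ?m then act M j p (b mod ?m) else 0)"])
    also have "\<dots> = (\<Sum>t<r. if t = a div ?m then (if a div ?m = b div ?m then (\<Sum>p<?m. act M i (a mod ?m) p * act M j p (b mod ?m)) else 0) else 0)"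
      by (rule sum.cong) auto
    also have "\<dots> = (if a div ?m = b div ?m then (\<Sum>p<?m. act M i (a mod ?m) p * act M j p (b mod ?m)) else 0)"
      using less_mult_divmod_bounds(1)[OF a] by (simp add: sum.delta')
    also have "\<dots> = (\<Sum>l<hdim H. hmul H i j l * (if a div ?m = b div ?m then act M l (a mod ?m) (b mod ?m) else 0))"
      using A1[OF i j less_mult_divmod_bounds(2)[OF a] less_mult_divmod_bounds(2)[OF b]] by simp
    finally show "(\<Sum>l<hdim H. hmul H i j l * (if a div ?m = b div ?m then act M l (a mod ?m) (b mod ?m) else 0)) =
         (\<Sum>s<r * ?m. (if a div ?m = s div ?m then act M i (a mod ?m) (s mod ?m) else 0) *
                 (if s div ?m = b div ?m then act M j (s mod ?m) (b mod ?m) else 0))" by simp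
  next
    fix a b assume a: "a < r * ?m" and b: "b < r * ?m"
    have "(\<Sum>l<hdim H. hunit H l * (if a div ?m = b div ?m then act M l (a mod ?m) (b mod ?m) else 0))
       = (if a div ?m = b div ?m then kd (a mod ?m) (b mod ?m) else 0)"
      using A2[OF less_mult_divmod_bounds(2)[OF a] less_mult_divmod_bounds(2)[OF b]] by simp
    also have "\<dots> = kd a b" by (simp add: kd_divmod[of a b ?m])
    finally show "(\<Sum>l<hdim H. hunit H l * (if a div ?m = b div ?m then act M l (a mod ?m) (b mod ?m) else 0)) = kd a b" .
  qed
qed

lemma tensmod_act_mult:
  assumes M: "is_rmod H M" and N: "is_rmod H N"
    and i: "i < hdim H" and j: "j < hdim H" and a: "a < mdim M * mdim N" and b: "b < mdim M * mdim N"
  shows "(\<Sum>l<hdim H. hmul H i j l * act (tensmod H M N) l a b) =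
    (\<Sum>s<mdim M * mdim N. act (tensmod H M N) i a s * act (tensmod H M N) j s b)"
proof -
  let ?n = "hdim H" and ?dM = "mdim M" and ?dN = "mdim N"
  let ?c = "hmul H" and ?d = "hcomul H" and ?u = "hunit H"
  let ?A = "act M" and ?B = "act N"
  have MA: "\<And>i j p q. i < ?n \<Longrightarrow> j < ?n \<Longrightarrow> p < ?dM \<Longrightarrow> q < ?dM \<Longrightarrow>
       (\<Sum>s<?dM. ?A i p s * ?A j s q) = (\<Sum>l<?n. ?c i j l * ?A l p q)"
    using M unfolding is_rmod_def by simp
  have NA: "\<And>i j p q. i < ?n \<Longrightarrow> j < ?n \<Longrightarrow> p < ?dN \<Longrightarrow> q < ?dN \<Longrightarrow>
       (\<Sum>s<?dN. ?B i p s * ?B j s q) = (\<Sum>l<?n. ?c i j l * ?B l p q)"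
    using N unfolding is_rmod_def by simp
  define T where "T = (\<lambda>l a b. \<Sum>i<?n. \<Sum>j<?n. ?d l i j * ?A i (a div ?dN) (b div ?dN) * ?B j (a mod ?dN) (b mod ?dN))"
  have actT: "act (tensmod H M N) = T" unfolding tensmod_def T_def by simp
  define a1 where "a1 = a div ?dN"
  define a2 where "a2 = a mod ?dN"
  define b1 where "b1 = b div ?dN"
  define b2 where "b2 = b mod ?dN"
  have a1: "a1 < ?dM" and a2: "a2 < ?dN" and b1: "b1 < ?dM" and b2: "b2 < ?dN"
    using a b less_mult_divmod_bounds unfolding a1_def a2_def b1_def b2_def by auto
  have "(\<Sum>s<?dM * ?dN. T i a s * T j s b) = (\<Sum>s1<?dM. \<Sum>s2<?dN. T i a (s1 * ?dN + s2) * T j (s1 * ?dN + s2) b)"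
    by (rule sum_lessThan_mult)
  also have "\<dots> = (\<Sum>s1<?dM. \<Sum>s2<?dN.
      (\<Sum>x<?n. \<Sum>y<?n. ?d i x y * ?A x a1 s1 * ?B y a2 s2) * (\<Sum>z<?n. \<Sum>w<?n. ?d j z w * ?A z s1 b1 * ?B w s2 b2))"
    by (rule sum.cong[OF refl], rule sum.cong[OF refl]) (simp add: T_def a1_def a2_def b1_def b2_def)
  also have "\<dots> = (\<Sum>s1<?dM. \<Sum>s2<?dN. \<Sum>x<?n. \<Sum>y<?n. \<Sum>z<?n. \<Sum>w<?n.
      ?d i x y * ?d j z w * (?A x a1 s1 * ?A z s1 b1) * (?B y a2 s2 * ?B w s2 b2))"
    by (simp only: sum_product_2_2) (simp add: mult_ac)
  also have "\<dots> = (\<Sum>x<?n. \<Sum>y<?n. \<Sum>z<?n. \<Sum>w<?n. \<Sum>s1<?dM. \<Sum>s2<?dN.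
      ?d i x y * ?d j z w * (?A x a1 s1 * ?A z s1 b1) * (?B y a2 s2 * ?B w s2 b2))"
    by (rule sum_swap_2_4)
  also have "\<dots> = (\<Sum>x<?n. \<Sum>y<?n. \<Sum>z<?n. \<Sum>w<?n.
      ?d i x y * ?d j z w * (\<Sum>s1<?dM. ?A x a1 s1 * ?A z s1 b1) * (\<Sum>s2<?dN. ?B y a2 s2 * ?B w s2 b2))"
    by (simp add: sum_distrib_left sum_distrib_right mult_ac)
  also have "\<dots> = (\<Sum>x<?n. \<Sum>y<?n. \<Sum>z<?n. \<Sum>w<?n.
      ?d i x y * ?d j z w * (\<Sum>p<?n. ?c x z p * ?A p a1 b1) * (\<Sum>q<?n. ?c y w q * ?B q a2 b2))"
    by (intro sum.cong refl) (simp add: MA NA a1 a2 b1 b2)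
  also have "\<dots> = (\<Sum>x<?n. \<Sum>y<?n. \<Sum>z<?n. \<Sum>w<?n. \<Sum>p<?n. \<Sum>q<?n.
      ?d i x y * ?d j z w * ?c x z p * ?c y w q * (?A p a1 b1 * ?B q a2 b2))"
    by (simp add: sum_distrib_left sum_distrib_right mult_ac)
  also have "\<dots> = (\<Sum>p<?n. \<Sum>q<?n. \<Sum>x<?n. \<Sum>y<?n. \<Sum>z<?n. \<Sum>w<?n.
      ?d i x y * ?d j z w * ?c x z p * ?c y w q * (?A p a1 b1 * ?B q a2 b2))"
    by (rule sum_swap_2_4[symmetric])
  also have "\<dots> = (\<Sum>p<?n. \<Sum>q<?n. (\<Sum>x<?n. \<Sum>y<?n. \<Sum>z<?n. \<Sum>w<?n.
      ?d i x y * ?d j z w * ?c x z p * ?c y w q) * (?A p a1 b1 * ?B q a2 b2))"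
    by (simp add: sum_distrib_left sum_distrib_right mult_ac)
  also have "\<dots> = (\<Sum>p<?n. \<Sum>q<?n. (\<Sum>l<?n. ?c i j l * ?d l p q) * (?A p a1 b1 * ?B q a2 b2))"
    by (intro sum.cong refl) (simp add: hopf_comul_mult[OF i j])
  also have "\<dots> = (\<Sum>p<?n. \<Sum>q<?n. \<Sum>l<?n. ?c i j l * ?d l p q * (?A p a1 b1 * ?B q a2 b2))"
    by (simp add: sum_distrib_left sum_distrib_right mult_ac)
  also have "\<dots> = (\<Sum>l<?n. \<Sum>p<?n. \<Sum>q<?n. ?c i j l * ?d l p q * (?A p a1 b1 * ?B q a2 b2))"
    by (rule sum_swap_in2[symmetric])
  also have "\<dots> = (\<Sum>l<?n. ?c i j l * T l a b)"
    by (simp add: T_def a1_def a2_def b1_def b2_def sum_distrib_left mult_ac)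
  finally show ?thesis unfolding actT by simp
qed

lemma tensmod_act_unit:
  assumes M: "is_rmod H M" and N: "is_rmod H N"
    and a: "a < mdim M * mdim N" and b: "b < mdim M * mdim N"
  shows "(\<Sum>l<hdim H. hunit H l * act (tensmod H M N) l a b) = kd a b"
proof -
  let ?n = "hdim H" and ?dM = "mdim M" and ?dN = "mdim N"
  let ?c = "hmul H" and ?d = "hcomul H" and ?u = "hunit H"
  let ?A = "act M" and ?B = "act N"
  have MU: "\<And>p q. p < ?dM \<Longrightarrow> q < ?dM \<Longrightarrow> (\<Sum>l<?n. ?u l * ?A l p q) = kd p q"
    using M unfolding is_rmod_def by blast
  have NU: "\<And>p q. p < ?dN \<Longrightarrow> q < ?dN \<Longrightarrow> (\<Sum>l<?n. ?u l * ?B l p q) = kd p q"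
    using N unfolding is_rmod_def by blast
  define T where "T = (\<lambda>l a b. \<Sum>i<?n. \<Sum>j<?n. ?d l i j * ?A i (a div ?dN) (b div ?dN) * ?B j (a mod ?dN) (b mod ?dN))"
  have actT: "act (tensmod H M N) = T" unfolding tensmod_def T_def by simp
  define a1 where "a1 = a div ?dN"
  define a2 where "a2 = a mod ?dN"
  define b1 where "b1 = b div ?dN"
  define b2 where "b2 = b mod ?dN"
  have a1: "a1 < ?dM" and a2: "a2 < ?dN" and b1: "b1 < ?dM" and b2: "b2 < ?dN"
    using a b less_mult_divmod_bounds unfolding a1_def a2_def b1_def b2_def by auto
  have "(\<Sum>l<?n. ?u l * T l a b) = (\<Sum>l<?n. \<Sum>p<?n. \<Sum>q<?n. ?u l * ?d l p q * (?A p a1 b1 * ?B q a2 b2))"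
    by (simp add: T_def a1_def a2_def b1_def b2_def sum_distrib_left mult_ac)
  also have "\<dots> = (\<Sum>p<?n. \<Sum>q<?n. \<Sum>l<?n. ?u l * ?d l p q * (?A p a1 b1 * ?B q a2 b2))"
    by (rule sum_swap_in2)
  also have "\<dots> = (\<Sum>p<?n. \<Sum>q<?n. (\<Sum>l<?n. ?u l * ?d l p q) * (?A p a1 b1 * ?B q a2 b2))"
    by (simp add: sum_distrib_right)
  also have "\<dots> = (\<Sum>p<?n. \<Sum>q<?n. (?u p * ?A p a1 b1) * (?u q * ?B q a2 b2))"
    by (intro sum.cong refl) (simp add: hopf_comul_unit mult_ac)
  also have "\<dots> = (\<Sum>p<?n. ?u p * ?A p a1 b1) * (\<Sum>q<?n. ?u q * ?B q a2 b2)"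
    by (simp add: sum_product)
  also have "\<dots> = kd a1 b1 * kd a2 b2" using MU[OF a1 b1] NU[OF a2 b2] by simp
  also have "\<dots> = kd a b" unfolding a1_def a2_def b1_def b2_def
    by (simp add: kd_divmod[of a b ?dN]) (simp add: kd_def)
  finally show ?thesis unfolding actT .
qed

lemma tensmod_rmod:
  assumes M: "is_rmod H M" and N: "is_rmod H N"
  shows "is_rmod H (tensmod H M N)"
  unfolding is_rmod_def mdim_tensmod
  using tensmod_act_mult[OF M N] tensmod_act_unit[OF M N] by simp

lemma act_tensmod_trivmod:
  assumes l: "l < hdim H"
  shows "act (tensmod H X (trivmod H)) l a b = act X l a b"
proof -
  have "act (tensmod H X (trivmod H)) l a b = (\<Sum>i<hdim H. \<Sum>j<hdim H. hcomul H l i j * act X i a b * heps H j)"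
    by (simp add: tensmod_def trivmod_def)
  also have "\<dots> = (\<Sum>i<hdim H. act X i a b * (\<Sum>j<hdim H. heps H j * hcomul H l i j))"
    by (simp add: sum_distrib_left mult_ac)
  also have "\<dots> = (\<Sum>i<hdim H. act X i a b * kd l i)"
    by (intro sum.cong refl) (use l in \<open>simp add: hopf_counit_right\<close>)
  also have "\<dots> = act X l a b" using l by (simp add: sum_kd_right')
  finally show ?thesis .
qed

lemma tpow_rmod: "is_rmod H Q \<Longrightarrow> is_rmod H (tpow H Q n)"
  by (induction n) (simp_all add: trivmod_rmod tensmod_rmod)

lemma hopf_antipode_coassoc_left:
  assumes x: "x < hdim H" and y: "y < hdim H" and t: "t < hdim H"
  shows "(\<Sum>b<hdim H. \<Sum>i<hdim H. \<Sum>j<hdim H. \<Sum>s<hdim H.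
           hcomul H x i b * hcomul H b j y * hS H i s * hmul H s j t) = hunit H t * kd x y"
proof -
  let ?n = "hdim H" and ?D = "hcomul H" and ?S = "hS H" and ?c = "hmul H"
  have "(\<Sum>b<?n. \<Sum>i<?n. \<Sum>j<?n. \<Sum>s<?n. ?D x i b * ?D b j y * ?S i s * ?c s j t)
      = (\<Sum>i<?n. \<Sum>j<?n. \<Sum>s<?n. \<Sum>b<?n. ?D x i b * ?D b j y * (?S i s * ?c s j t))"
    by (subst sum_swap_in3) (simp add: mult_ac)
  also have "\<dots> = (\<Sum>i<?n. \<Sum>j<?n. \<Sum>s<?n. (\<Sum>b<?n. ?D x i b * ?D b j y) * (?S i s * ?c s j t))"
    by (simp add: sum_distrib_right)
  also have "\<dots> = (\<Sum>i<?n. \<Sum>j<?n. \<Sum>s<?n. (\<Sum>i'<?n. ?D x i' y * ?D i' i j) * (?S i s * ?c s j t))"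
    by (intro sum.cong refl) (simp add: hopf_coassoc x y)
  also have "\<dots> = (\<Sum>i<?n. \<Sum>j<?n. \<Sum>s<?n. \<Sum>i'<?n. ?D x i' y * (?D i' i j * ?S i s * ?c s j t))"
    by (simp add: sum_distrib_left sum_distrib_right mult_ac)
  also have "\<dots> = (\<Sum>i'<?n. \<Sum>i<?n. \<Sum>j<?n. \<Sum>s<?n. ?D x i' y * (?D i' i j * ?S i s * ?c s j t))"
    by (rule sum_swap_in3[symmetric])
  also have "\<dots> = (\<Sum>i'<?n. ?D x i' y * (\<Sum>i<?n. \<Sum>j<?n. \<Sum>s<?n. ?D i' i j * ?S i s * ?c s j t))"
    by (simp add: sum_distrib_left)
  also have "\<dots> = (\<Sum>i'<?n. ?D x i' y * (heps H i' * hunit H t))"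
    by (intro sum.cong refl) (use t in \<open>simp add: hopf_antipode_left\<close>)
  also have "\<dots> = hunit H t * (\<Sum>i'<?n. heps H i' * ?D x i' y)"
    by (simp add: sum_distrib_left mult_ac)
  also have "\<dots> = hunit H t * kd x y"
    by (simp add: hopf_counit_left x y)
  finally show ?thesis .
qed

lemma hopf_antipode_coassoc_right:
  assumes x: "x < hdim H" and y: "y < hdim H" and t: "t < hdim H"
  shows "(\<Sum>b<hdim H. \<Sum>i<hdim H. \<Sum>j<hdim H. \<Sum>s<hdim H.
           hcomul H x i b * hcomul H b j y * hS H j s * hmul H i s t) = hunit H t * kd x y"
proof -
  let ?n = "hdim H" and ?D = "hcomul H" and ?S = "hS H" and ?c = "hmul H"
  have "(\<Sum>b<?n. \<Sum>i<?n. \<Sum>j<?n. \<Sum>s<?n. ?D x i b * ?D b j y * ?S j s * ?c i s t)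
      = (\<Sum>i<?n. \<Sum>j<?n. \<Sum>s<?n. \<Sum>b<?n. ?D x i b * ?D b j y * (?S j s * ?c i s t))"
    by (subst sum_swap_in3) (simp add: mult_ac)
  also have "\<dots> = (\<Sum>i<?n. \<Sum>j<?n. \<Sum>s<?n. (\<Sum>b<?n. ?D x i b * ?D b j y) * (?S j s * ?c i s t))"
    by (simp add: sum_distrib_right)
  also have "\<dots> = (\<Sum>i<?n. \<Sum>j<?n. \<Sum>s<?n. (\<Sum>i'<?n. ?D x i' y * ?D i' i j) * (?S j s * ?c i s t))"
    by (intro sum.cong refl) (simp add: hopf_coassoc x y)
  also have "\<dots> = (\<Sum>i<?n. \<Sum>j<?n. \<Sum>s<?n. \<Sum>i'<?n. ?D x i' y * (?D i' i j * ?S j s * ?c i s t))"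
    by (simp add: sum_distrib_left sum_distrib_right mult_ac)
  also have "\<dots> = (\<Sum>i'<?n. \<Sum>i<?n. \<Sum>j<?n. \<Sum>s<?n. ?D x i' y * (?D i' i j * ?S j s * ?c i s t))"
    by (rule sum_swap_in3[symmetric])
  also have "\<dots> = (\<Sum>i'<?n. ?D x i' y * (\<Sum>i<?n. \<Sum>j<?n. \<Sum>s<?n. ?D i' i j * ?S j s * ?c i s t))"
    by (simp add: sum_distrib_left)
  also have "\<dots> = (\<Sum>i'<?n. ?D x i' y * (heps H i' * hunit H t))"
    by (intro sum.cong refl) (use t in \<open>simp add: hopf_antipode_right\<close>)
  also have "\<dots> = hunit H t * (\<Sum>i'<?n. heps H i' * ?D x i' y)"
    by (simp add: sum_distrib_left mult_ac)
  also have "\<dots> = hunit H t * kd x y"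
    by (simp add: hopf_counit_left x y)
  finally show ?thesis .
qed

lemma matmul_free_iso_inv_free_iso:
  assumes X: "is_rmod H X" and x: "x < mdim X * hdim H" and y: "y < mdim X * hdim H"
  shows "matmul (mdim X * hdim H) (free_iso_inv H X) (free_iso H X) x y = kd x y"
proof -
  let ?n = "hdim H" and ?d = "mdim X"
  let ?c = "hmul H" and ?D = "hcomul H" and ?u = "hunit H" and ?S = "hS H"
  let ?X = "act X"
  have XA: "\<And>i j p q. i < ?n \<Longrightarrow> j < ?n \<Longrightarrow> p < ?d \<Longrightarrow> q < ?d \<Longrightarrow>
       (\<Sum>s<?d. ?X i p s * ?X j s q) = (\<Sum>l<?n. ?c i j l * ?X l p q)"
    using X unfolding is_rmod_def by simp
  have XU: "\<And>p q. p < ?d \<Longrightarrow> q < ?d \<Longrightarrow> (\<Sum>l<?n. ?u l * ?X l p q) = kd p q"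
    using X unfolding is_rmod_def by blast
  define x1 where "x1 = x div ?n"
  define x2 where "x2 = x mod ?n"
  define y1 where "y1 = y div ?n"
  define y2 where "y2 = y mod ?n"
  have x1: "x1 < ?d" and x2: "x2 < ?n" and y1: "y1 < ?d" and y2: "y2 < ?n"
    using x y less_mult_divmod_bounds unfolding x1_def x2_def y1_def y2_def by auto
  have "matmul (?d * ?n) (free_iso_inv H X) (free_iso H X) x y = (\<Sum>p'<?d. \<Sum>b<?n. free_iso_inv H X x (p' * ?n + b) * free_iso H X (p' * ?n + b) y)"
    unfolding matmul_def by (rule sum_lessThan_mult)
  also have "\<dots> = (\<Sum>p'<?d. \<Sum>b<?n. (\<Sum>i<?n. ?D x2 i b * (\<Sum>s<?n. ?S i s * ?X s x1 p')) * (\<Sum>j<?n. ?D b j y2 * ?X j p' y1))"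
    by (intro sum.cong refl) (simp add: free_iso_inv_def free_iso_def x1_def x2_def y1_def y2_def)
  also have "\<dots> = (\<Sum>p'<?d. \<Sum>b<?n. \<Sum>i<?n. \<Sum>j<?n. \<Sum>s<?n. ?D x2 i b * ?S i s * ?D b j y2 * (?X s x1 p' * ?X j p' y1))"
    by (simp only: sum_product) (simp only: sum_distrib_left sum_distrib_right mult_ac)
  also have "\<dots> = (\<Sum>b<?n. \<Sum>i<?n. \<Sum>j<?n. \<Sum>s<?n. \<Sum>p'<?d. ?D x2 i b * ?S i s * ?D b j y2 * (?X s x1 p' * ?X j p' y1))"
    by (rule sum_swap_in4)
  also have "\<dots> = (\<Sum>b<?n. \<Sum>i<?n. \<Sum>j<?n. \<Sum>s<?n. ?D x2 i b * ?S i s * ?D b j y2 * (\<Sum>p'<?d. ?X s x1 p' * ?X j p' y1))"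
    by (simp add: sum_distrib_left)
  also have "\<dots> = (\<Sum>b<?n. \<Sum>i<?n. \<Sum>j<?n. \<Sum>s<?n. ?D x2 i b * ?S i s * ?D b j y2 * (\<Sum>t<?n. ?c s j t * ?X t x1 y1))"
    by (intro sum.cong refl) (simp add: XA x1 y1)
  also have "\<dots> = (\<Sum>b<?n. \<Sum>i<?n. \<Sum>j<?n. \<Sum>s<?n. \<Sum>t<?n. ?D x2 i b * ?D b j y2 * ?S i s * ?c s j t * ?X t x1 y1)"
    by (simp add: sum_distrib_left mult_ac)
  also have "\<dots> = (\<Sum>t<?n. \<Sum>b<?n. \<Sum>i<?n. \<Sum>j<?n. \<Sum>s<?n. ?D x2 i b * ?D b j y2 * ?S i s * ?c s j t * ?X t x1 y1)"
    by (rule sum_swap_in4[symmetric])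
  also have "\<dots> = (\<Sum>t<?n. (\<Sum>b<?n. \<Sum>i<?n. \<Sum>j<?n. \<Sum>s<?n. ?D x2 i b * ?D b j y2 * ?S i s * ?c s j t) * ?X t x1 y1)"
    by (simp add: sum_distrib_right)
  also have "\<dots> = (\<Sum>t<?n. (?u t * kd x2 y2) * ?X t x1 y1)"
    by (intro sum.cong refl) (simp add: hopf_antipode_coassoc_left x2 y2)
  also have "\<dots> = kd x2 y2 * (\<Sum>t<?n. ?u t * ?X t x1 y1)"
    by (simp add: sum_distrib_left mult_ac)
  also have "\<dots> = kd x2 y2 * kd x1 y1" by (simp add: XU x1 y1)
  also have "\<dots> = kd x y" unfolding x1_def x2_def y1_def y2_def
    by (simp add: kd_divmod[of x y ?n]) (simp add: kd_def)
  finally show ?thesis .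
qed

lemma matmul_free_iso_free_iso_inv:
  assumes X: "is_rmod H X" and x: "x < mdim X * hdim H" and y: "y < mdim X * hdim H"
  shows "matmul (mdim X * hdim H) (free_iso H X) (free_iso_inv H X) x y = kd x y"
proof -
  let ?n = "hdim H" and ?d = "mdim X"
  let ?c = "hmul H" and ?D = "hcomul H" and ?u = "hunit H" and ?S = "hS H"
  let ?X = "act X"
  have XA: "\<And>i j p q. i < ?n \<Longrightarrow> j < ?n \<Longrightarrow> p < ?d \<Longrightarrow> q < ?d \<Longrightarrow>
       (\<Sum>s<?d. ?X i p s * ?X j s q) = (\<Sum>l<?n. ?c i j l * ?X l p q)"
    using X unfolding is_rmod_def by simp
  have XU: "\<And>p q. p < ?d \<Longrightarrow> q < ?d \<Longrightarrow> (\<Sum>l<?n. ?u l * ?X l p q) = kd p q"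
    using X unfolding is_rmod_def by blast
  define x1 where "x1 = x div ?n"
  define x2 where "x2 = x mod ?n"
  define y1 where "y1 = y div ?n"
  define y2 where "y2 = y mod ?n"
  have x1: "x1 < ?d" and x2: "x2 < ?n" and y1: "y1 < ?d" and y2: "y2 < ?n"
    using x y less_mult_divmod_bounds unfolding x1_def x2_def y1_def y2_def by auto
  have "matmul (?d * ?n) (free_iso H X) (free_iso_inv H X) x y = (\<Sum>p'<?d. \<Sum>b<?n. free_iso H X x (p' * ?n + b) * free_iso_inv H X (p' * ?n + b) y)"
    unfolding matmul_def by (rule sum_lessThan_mult)
  also have "\<dots> = (\<Sum>p'<?d. \<Sum>b<?n. (\<Sum>i<?n. ?D x2 i b * ?X i x1 p') * (\<Sum>j<?n. ?D b j y2 * (\<Sum>s<?n. ?S j s * ?X s p' y1)))"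
    by (intro sum.cong refl) (simp add: free_iso_inv_def free_iso_def x1_def x2_def y1_def y2_def)
  also have "\<dots> = (\<Sum>p'<?d. \<Sum>b<?n. \<Sum>i<?n. \<Sum>j<?n. \<Sum>s<?n. ?D x2 i b * ?D b j y2 * ?S j s * (?X i x1 p' * ?X s p' y1))"
    by (simp only: sum_product) (simp only: sum_distrib_left sum_distrib_right mult_ac)
  also have "\<dots> = (\<Sum>b<?n. \<Sum>i<?n. \<Sum>j<?n. \<Sum>s<?n. \<Sum>p'<?d. ?D x2 i b * ?D b j y2 * ?S j s * (?X i x1 p' * ?X s p' y1))"
    by (rule sum_swap_in4)
  also have "\<dots> = (\<Sum>b<?n. \<Sum>i<?n. \<Sum>j<?n. \<Sum>s<?n. ?D x2 i b * ?D b j y2 * ?S j s * (\<Sum>p'<?d. ?X i x1 p' * ?X s p' y1))"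
    by (simp add: sum_distrib_left)
  also have "\<dots> = (\<Sum>b<?n. \<Sum>i<?n. \<Sum>j<?n. \<Sum>s<?n. ?D x2 i b * ?D b j y2 * ?S j s * (\<Sum>t<?n. ?c i s t * ?X t x1 y1))"
    by (intro sum.cong refl) (simp add: XA x1 y1)
  also have "\<dots> = (\<Sum>b<?n. \<Sum>i<?n. \<Sum>j<?n. \<Sum>s<?n. \<Sum>t<?n. ?D x2 i b * ?D b j y2 * ?S j s * ?c i s t * ?X t x1 y1)"
    by (simp add: sum_distrib_left mult_ac)
  also have "\<dots> = (\<Sum>t<?n. \<Sum>b<?n. \<Sum>i<?n. \<Sum>j<?n. \<Sum>s<?n. ?D x2 i b * ?D b j y2 * ?S j s * ?c i s t * ?X t x1 y1)"
    by (rule sum_swap_in4[symmetric])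
  also have "\<dots> = (\<Sum>t<?n. (\<Sum>b<?n. \<Sum>i<?n. \<Sum>j<?n. \<Sum>s<?n. ?D x2 i b * ?D b j y2 * ?S j s * ?c i s t) * ?X t x1 y1)"
    by (simp add: sum_distrib_right)
  also have "\<dots> = (\<Sum>t<?n. (?u t * kd x2 y2) * ?X t x1 y1)"
    by (intro sum.cong refl) (simp add: hopf_antipode_coassoc_right x2 y2)
  also have "\<dots> = kd x2 y2 * (\<Sum>t<?n. ?u t * ?X t x1 y1)"
    by (simp add: sum_distrib_left mult_ac)
  also have "\<dots> = kd x2 y2 * kd x1 y1" by (simp add: XU x1 y1)
  also have "\<dots> = kd x y" unfolding x1_def x2_def y1_def y2_def
    by (simp add: kd_divmod[of x y ?n]) (simp add: kd_def)
  finally show ?thesis .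
qed

lemma free_iso_mhom:
  assumes X: "is_rmod H X"
  shows "mhom H (dsumpow (regmod H) (mdim X)) (tensmod H X (regmod H)) (free_iso H X)"
  unfolding mhom_def mdim_tensmod mdim_dsumpow mdim_regmod
proof (intro allI impI)
  let ?n = "hdim H" and ?d = "mdim X"
  let ?c = "hmul H" and ?D = "hcomul H" and ?X = "act X"
  let ?TH = "tensmod H X (regmod H)" and ?Hd = "dsumpow (regmod H) ?d"
  have XA: "\<And>i j p q. i < ?n \<Longrightarrow> j < ?n \<Longrightarrow> p < ?d \<Longrightarrow> q < ?d \<Longrightarrow>
       (\<Sum>s<?d. ?X i p s * ?X j s q) = (\<Sum>l<?n. ?c i j l * ?X l p q)"
    using X unfolding is_rmod_def by simp
  have aTH: "\<And>l a b. act ?TH l a b = (\<Sum>j<?n. \<Sum>k<?n. ?D l j k * ?X j (a div ?n) (b div ?n) * ?c (a mod ?n) k (b mod ?n))"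
    by (simp add: tensmod_def regmod_def)
  have aHd: "\<And>l a b. act ?Hd l a b = (if a div ?n = b div ?n then ?c (a mod ?n) l (b mod ?n) else 0)"
    by (simp add: dsumpow_def regmod_def)
  fix l x y assume l: "l < ?n" and x: "x < ?d * ?n" and y: "y < ?d * ?n"
  define x1 where "x1 = x div ?n"
  define x2 where "x2 = x mod ?n"
  define y1 where "y1 = y div ?n"
  define y2 where "y2 = y mod ?n"
  have x1: "x1 < ?d" and x2: "x2 < ?n" and y1: "y1 < ?d" and y2: "y2 < ?n"
    using x y less_mult_divmod_bounds unfolding x1_def x2_def y1_def y2_def by auto
  have "(\<Sum>q<?d * ?n. (free_iso H X) x q * act ?TH l q y) = (\<Sum>p'<?d. \<Sum>b<?n. free_iso H X x (p' * ?n + b) * act ?TH l (p' * ?n + b) y)"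
    by (rule sum_lessThan_mult)
  also have "\<dots> = (\<Sum>p'<?d. \<Sum>b<?n. (\<Sum>i<?n. ?D x2 i b * ?X i x1 p') * (\<Sum>j<?n. \<Sum>k<?n. ?D l j k * ?X j p' y1 * ?c b k y2))"
    by (intro sum.cong refl) (simp add: aTH free_iso_def x1_def x2_def y1_def y2_def)
  also have "\<dots> = (\<Sum>p'<?d. \<Sum>b<?n. \<Sum>i<?n. \<Sum>j<?n. \<Sum>k<?n. ?D x2 i b * ?D l j k * ?c b k y2 * (?X i x1 p' * ?X j p' y1))"
    by (simp only: sum_product) (simp only: sum_distrib_left sum_distrib_right mult_ac)
  also have "\<dots> = (\<Sum>b<?n. \<Sum>i<?n. \<Sum>j<?n. \<Sum>k<?n. \<Sum>p'<?d. ?D x2 i b * ?D l j k * ?c b k y2 * (?X i x1 p' * ?X j p' y1))"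
    by (rule sum_swap_in4)
  also have "\<dots> = (\<Sum>b<?n. \<Sum>i<?n. \<Sum>j<?n. \<Sum>k<?n. ?D x2 i b * ?D l j k * ?c b k y2 * (\<Sum>p'<?d. ?X i x1 p' * ?X j p' y1))"
    by (simp add: sum_distrib_left)
  also have "\<dots> = (\<Sum>b<?n. \<Sum>i<?n. \<Sum>j<?n. \<Sum>k<?n. ?D x2 i b * ?D l j k * ?c b k y2 * (\<Sum>t<?n. ?c i j t * ?X t x1 y1))"
    by (intro sum.cong refl) (simp add: XA x1 y1)
  also have "\<dots> = (\<Sum>b<?n. \<Sum>i<?n. \<Sum>j<?n. \<Sum>k<?n. \<Sum>t<?n. ?D x2 i b * ?D l j k * ?c i j t * ?c b k y2 * ?X t x1 y1)"
    by (simp add: sum_distrib_left mult_ac)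
  also have "\<dots> = (\<Sum>t<?n. \<Sum>b<?n. \<Sum>i<?n. \<Sum>j<?n. \<Sum>k<?n. ?D x2 i b * ?D l j k * ?c i j t * ?c b k y2 * ?X t x1 y1)"
    by (rule sum_swap_in4[symmetric])
  also have "\<dots> = (\<Sum>t<?n. (\<Sum>b<?n. \<Sum>i<?n. \<Sum>j<?n. \<Sum>k<?n. ?D x2 i b * ?D l j k * ?c i j t * ?c b k y2) * ?X t x1 y1)"
    by (simp add: sum_distrib_right)
  also have "\<dots> = (\<Sum>t<?n. (\<Sum>b<?n. ?c x2 l b * ?D b t y2) * ?X t x1 y1)"
  proof (intro sum.cong refl)
    fix t assume t: "t \<in> {..<?n}"
    have "(\<Sum>b<?n. \<Sum>i<?n. \<Sum>j<?n. \<Sum>k<?n. ?D x2 i b * ?D l j k * ?c i j t * ?c b k y2)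
        = (\<Sum>i<?n. \<Sum>b<?n. \<Sum>j<?n. \<Sum>k<?n. ?D x2 i b * ?D l j k * ?c i j t * ?c b k y2)"
      by (rule sum.swap)
    also have "\<dots> = (\<Sum>b<?n. ?c x2 l b * ?D b t y2)"
      using hopf_comul_mult[OF x2 l _ y2, of t] t by simp
    finally show "(\<Sum>b<?n. \<Sum>i<?n. \<Sum>j<?n. \<Sum>k<?n. ?D x2 i b * ?D l j k * ?c i j t * ?c b k y2) * ?X t x1 y1
       = (\<Sum>b<?n. ?c x2 l b * ?D b t y2) * ?X t x1 y1" by simp
  qed
  also have "\<dots> = (\<Sum>t<?n. \<Sum>b<?n. ?c x2 l b * ?D b t y2 * ?X t x1 y1)"
    by (simp add: sum_distrib_right)
  also have "\<dots> = (\<Sum>b<?n. \<Sum>t<?n. ?c x2 l b * ?D b t y2 * ?X t x1 y1)"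
    by (rule sum.swap)
  also have "\<dots> = (\<Sum>b<?n. ?c x2 l b * (free_iso H X) (x1 * ?n + b) y)"
    by (intro sum.cong refl) (simp add: free_iso_def sum_distrib_left mult_ac y1_def y2_def)
  also have "\<dots> = (\<Sum>p'<?d. \<Sum>b<?n. act ?Hd l x (p' * ?n + b) * free_iso H X (p' * ?n + b) y)"
  proof -
    have "(\<Sum>p'<?d. \<Sum>b<?n. act ?Hd l x (p' * ?n + b) * free_iso H X (p' * ?n + b) y)
        = (\<Sum>p'<?d. if x1 = p' then (\<Sum>b<?n. ?c x2 l b * free_iso H X (p' * ?n + b) y) else 0)"
      by (intro sum.cong refl) (auto simp: aHd x1_def x2_def)
    also have "\<dots> = (\<Sum>b<?n. ?c x2 l b * (free_iso H X) (x1 * ?n + b) y)"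
      using x1 by (simp add: sum.delta)
    finally show ?thesis by simp
  qed
  also have "\<dots> = (\<Sum>q<?d * ?n. act ?Hd l x q * (free_iso H X) q y)"
    by (rule sum_lessThan_mult[symmetric])
  finally show "(\<Sum>q<?d * ?n. (free_iso H X) x q * act ?TH l q y) = (\<Sum>q<?d * ?n. act ?Hd l x q * (free_iso H X) q y)" .
qed

lemma tensmod_regmod_free:
  assumes X: "is_rmod H X"
  shows "is_summand H (tensmod H X (regmod H)) (dsumpow (regmod H) (mdim X))"
proof -
  note iso = free_iso_mhom[OF X]
    and inv_iso = matmul_free_iso_inv_free_iso[OF X] and iso_inv = matmul_free_iso_free_iso_inv[OF X]
  have "mhom H (tensmod H X (regmod H)) (dsumpow (regmod H) (mdim X)) (free_iso_inv H X)"
    by (rule mhom_inverse[OF iso]) (simp_all add: inv_iso iso_inv)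
  then show ?thesis unfolding is_summand_def using iso inv_iso by auto
qed

lemma id_tensor_mhom:
  assumes G: "mhom H Y Y' G"
  shows "mhom H (tensmod H X Y) (tensmod H X Y') (id_tensor (mdim Y) (mdim Y') G)"
  unfolding mhom_def
proof (intro allI impI)
  let ?n = "hdim H" and ?dX = "mdim X" and ?dY = "mdim Y" and ?dY' = "mdim Y'"
  let ?D = "hcomul H"
  fix l a b assume l: "l < ?n" and a: "a < mdim (tensmod H X Y)" and b: "b < mdim (tensmod H X Y')"
  have a': "a < ?dX * ?dY" and b': "b < ?dX * ?dY'" using a b by auto
  define a1 where "a1 = a div ?dY"
  define a2 where "a2 = a mod ?dY"
  define b1 where "b1 = b div ?dY'"
  define b2 where "b2 = b mod ?dY'"
  have a1: "a1 < ?dX" and a2: "a2 < ?dY" and b1: "b1 < ?dX" and b2: "b2 < ?dY'"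
    using a' b' less_mult_divmod_bounds unfolding a1_def a2_def b1_def b2_def by auto
  have GH: "\<And>j. j < ?n \<Longrightarrow> (\<Sum>q<?dY'. G a2 q * act Y' j q b2) = (\<Sum>q<?dY. act Y j a2 q * G q b2)"
    using G a2 b2 unfolding mhom_def by blast
  have "(\<Sum>q<mdim (tensmod H X Y'). id_tensor ?dY ?dY' G a q * act (tensmod H X Y') l q b)
     = (\<Sum>q1<?dX. \<Sum>q2<?dY'. kd a1 q1 * (G a2 q2 * (\<Sum>i<?n. \<Sum>j<?n. ?D l i j * act X i q1 b1 * act Y' j q2 b2)))"
    by (simp add: sum_lessThan_mult id_tensor_def tensmod_def a1_def a2_def b1_def b2_def mult_ac)
  also have "\<dots> = (\<Sum>q1<?dX. kd a1 q1 * (\<Sum>q2<?dY'. G a2 q2 * (\<Sum>i<?n. \<Sum>j<?n. ?D l i j * act X i q1 b1 * act Y' j q2 b2)))"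
    by (simp add: sum_distrib_left)
  also have "\<dots> = (\<Sum>q2<?dY'. G a2 q2 * (\<Sum>i<?n. \<Sum>j<?n. ?D l i j * act X i a1 b1 * act Y' j q2 b2))"
    using a1 by (simp add: sum_kd_left)
  also have "\<dots> = (\<Sum>q2<?dY'. \<Sum>i<?n. \<Sum>j<?n. ?D l i j * act X i a1 b1 * (G a2 q2 * act Y' j q2 b2))"
    by (simp add: sum_distrib_left mult_ac)
  also have "\<dots> = (\<Sum>i<?n. \<Sum>j<?n. \<Sum>q2<?dY'. ?D l i j * act X i a1 b1 * (G a2 q2 * act Y' j q2 b2))"
    by (rule sum_swap_in2)
  also have "\<dots> = (\<Sum>i<?n. \<Sum>j<?n. ?D l i j * act X i a1 b1 * (\<Sum>q2<?dY'. G a2 q2 * act Y' j q2 b2))"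
    by (simp add: sum_distrib_left)
  also have "\<dots> = (\<Sum>i<?n. \<Sum>j<?n. ?D l i j * act X i a1 b1 * (\<Sum>q2<?dY. act Y j a2 q2 * G q2 b2))"
    by (intro sum.cong refl) (simp add: GH)
  also have "\<dots> = (\<Sum>i<?n. \<Sum>j<?n. \<Sum>q2<?dY. ?D l i j * act X i a1 b1 * (act Y j a2 q2 * G q2 b2))"
    by (simp add: sum_distrib_left)
  also have "\<dots> = (\<Sum>q2<?dY. \<Sum>i<?n. \<Sum>j<?n. ?D l i j * act X i a1 b1 * (act Y j a2 q2 * G q2 b2))"
    by (rule sum_swap_in2[symmetric])
  also have "\<dots> = (\<Sum>q2<?dY. (\<Sum>i<?n. \<Sum>j<?n. ?D l i j * act X i a1 b1 * act Y j a2 q2) * G q2 b2)"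
    by (simp add: sum_distrib_right sum_distrib_left mult_ac)
  also have "\<dots> = (\<Sum>q1<?dX. \<Sum>q2<?dY. (\<Sum>i<?n. \<Sum>j<?n. ?D l i j * act X i a1 q1 * act Y j a2 q2) * G q2 b2 * kd q1 b1)"
    using b1 by (simp add: sum_kd_right sum.swap[of _ "{..<?dX}"] sum_distrib_right[symmetric])
  also have "\<dots> = (\<Sum>q<mdim (tensmod H X Y). act (tensmod H X Y) l a q * id_tensor ?dY ?dY' G q b)"
    by (simp add: sum_lessThan_mult id_tensor_def tensmod_def a1_def a2_def b1_def b2_def mult_ac)
  finally show "(\<Sum>q<mdim (tensmod H X Y'). id_tensor ?dY ?dY' G a q * act (tensmod H X Y') l q b)
     = (\<Sum>q<mdim (tensmod H X Y). act (tensmod H X Y) l a q * id_tensor ?dY ?dY' G q b)" .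
qed

lemma is_summand_tensmod_right:
  assumes "is_summand H Y Y'"
  shows "is_summand H (tensmod H X Y) (tensmod H X Y')"
proof -
  obtain F G where F: "mhom H Y Y' F" and G: "mhom H Y' Y G" and FG: "\<forall>p<mdim Y. \<forall>p'<mdim Y. matmul (mdim Y') F G p p' = kd p p'"
    using assms unfolding is_summand_def by blast
  have "\<forall>p<mdim X * mdim Y. \<forall>p'<mdim X * mdim Y. matmul (mdim X * mdim Y') (id_tensor (mdim Y) (mdim Y') F) (id_tensor (mdim Y') (mdim Y) G) p p' = kd p p'"
  proof (intro allI impI)
    fix p p' assume p: "p < mdim X * mdim Y" and p': "p' < mdim X * mdim Y"
    show "matmul (mdim X * mdim Y') (id_tensor (mdim Y) (mdim Y') F) (id_tensor (mdim Y') (mdim Y) G) p p' = kd p p'"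
      using matmul_id_tensor[OF p, where dY'="mdim Y'" and F=F and dZ="mdim Y" and G=G and b=p'] FG[rule_format, OF less_mult_mod_bound[OF p] less_mult_mod_bound[OF p']]
      by (simp add: kd_divmod[of p p' "mdim Y"]) (simp add: kd_def)
  qed
  then show ?thesis unfolding is_summand_def using id_tensor_mhom[OF F, of X] id_tensor_mhom[OF G, of X]
    by (intro exI[of _ "id_tensor (mdim Y) (mdim Y') F"] exI[of _ "id_tensor (mdim Y') (mdim Y) G"]) simp
qed

lemma projective_tensmod:
  assumes X: "is_rmod H X" and Q: "projective H Q"
  shows "projective H (tensmod H X Q)"
proof -
  obtain a where a: "is_summand H Q (dsumpow (regmod H) a)" using Q unfolding projective_def by blast
  have "is_summand H (tensmod H X Q) (tensmod H X (dsumpow (regmod H) a))"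
    by (rule is_summand_tensmod_right[OF a])
  also have "is_summand H \<dots> (dsumpow (tensmod H X (regmod H)) a)"
    by (rule tensmod_dsumpow_summand)
  also have "is_summand H \<dots> (dsumpow (dsumpow (regmod H) (mdim X)) a)"
    by (rule is_summand_dsumpow[OF tensmod_regmod_free[OF X]])
  also have "is_summand H \<dots> (dsumpow (regmod H) (a * mdim X))"
    by (rule dsumpow_dsumpow_summand(1))
  finally show ?thesis unfolding projective_def by blast
qed

lemma diag_map_mhom:
  assumes PK: "mhom H (regmod H) X PK" and PR: "mhom H (regmod H) Y PR"
  shows "mhom H (regmod H) (tensmod H X Y) (diag_map H (mdim Y) PK PR)"
  unfolding mhom_def
proof (intro allI impI)
  let ?n = "hdim H" and ?dX = "mdim X" and ?dY = "mdim Y" and ?c = "hmul H" and ?D = "hcomul H"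
  let ?T = "tensmod H X Y" and ?J = "diag_map H (mdim Y) PK PR"
  have PKH: "\<And>l p r. l < ?n \<Longrightarrow> p < ?n \<Longrightarrow> r < ?dX \<Longrightarrow> (\<Sum>q<?dX. PK p q * act X l q r) = (\<Sum>q<?n. ?c p l q * PK q r)"
    using PK unfolding mhom_def regmod_def by simp
  have PRH: "\<And>l p r. l < ?n \<Longrightarrow> p < ?n \<Longrightarrow> r < ?dY \<Longrightarrow> (\<Sum>q<?dY. PR p q * act Y l q r) = (\<Sum>q<?n. ?c p l q * PR q r)"
    using PR unfolding mhom_def regmod_def by simp
  fix l a z assume l: "l < ?n" and a: "a < mdim (regmod H)" and z: "z < mdim ?T"
  have a': "a < ?n" using a by simp
  have z': "z < ?dX * ?dY" using z by simp
  define x where "x = z div ?dY"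
  define y where "y = z mod ?dY"
  have x: "x < ?dX" and y: "y < ?dY" using less_mult_divmod_bounds[OF z'] unfolding x_def y_def by auto
  have "(\<Sum>w<mdim ?T. ?J a w * act ?T l w z) = (\<Sum>x'<?dX. \<Sum>y'<?dY.
      (\<Sum>i<?n. \<Sum>j<?n. ?D a i j * PK i x' * PR j y') * (\<Sum>p<?n. \<Sum>q<?n. ?D l p q * act X p x' x * act Y q y' y))"
    by (simp add: sum_lessThan_mult diag_map_def tensmod_def x_def y_def)
  also have "\<dots> = (\<Sum>x'<?dX. \<Sum>y'<?dY. \<Sum>i<?n. \<Sum>j<?n. \<Sum>p<?n. \<Sum>q<?n.
      ?D a i j * ?D l p q * (PK i x' * act X p x' x) * (PR j y' * act Y q y' y))"
    by (simp only: sum_product_2_2) (simp add: mult_ac)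
  also have "\<dots> = (\<Sum>i<?n. \<Sum>j<?n. \<Sum>p<?n. \<Sum>q<?n. \<Sum>x'<?dX. \<Sum>y'<?dY.
      ?D a i j * ?D l p q * (PK i x' * act X p x' x) * (PR j y' * act Y q y' y))"
    by (rule sum_swap_2_4)
  also have "\<dots> = (\<Sum>i<?n. \<Sum>j<?n. \<Sum>p<?n. \<Sum>q<?n.
      ?D a i j * ?D l p q * (\<Sum>x'<?dX. PK i x' * act X p x' x) * (\<Sum>y'<?dY. PR j y' * act Y q y' y))"
    by (simp add: sum_distrib_left sum_distrib_right mult_ac)
  also have "\<dots> = (\<Sum>i<?n. \<Sum>j<?n. \<Sum>p<?n. \<Sum>q<?n.
      ?D a i j * ?D l p q * (\<Sum>s<?n. ?c i p s * PK s x) * (\<Sum>t<?n. ?c j q t * PR t y))"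
    by (intro sum.cong refl) (simp add: PKH PRH x y)
  also have "\<dots> = (\<Sum>i<?n. \<Sum>j<?n. \<Sum>p<?n. \<Sum>q<?n. \<Sum>s<?n. \<Sum>t<?n.
      ?D a i j * ?D l p q * ?c i p s * ?c j q t * (PK s x * PR t y))"
    by (simp only: sum_product_scaled) (simp add: mult_ac)
  also have "\<dots> = (\<Sum>s<?n. \<Sum>t<?n. \<Sum>i<?n. \<Sum>j<?n. \<Sum>p<?n. \<Sum>q<?n.
      ?D a i j * ?D l p q * ?c i p s * ?c j q t * (PK s x * PR t y))"
    by (rule sum_swap_2_4[symmetric])
  also have "\<dots> = (\<Sum>s<?n. \<Sum>t<?n. (\<Sum>i<?n. \<Sum>j<?n. \<Sum>p<?n. \<Sum>q<?n.
      ?D a i j * ?D l p q * ?c i p s * ?c j q t) * (PK s x * PR t y))"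
    by (simp add: sum_distrib_right)
  also have "\<dots> = (\<Sum>s<?n. \<Sum>t<?n. (\<Sum>q'<?n. ?c a l q' * ?D q' s t) * (PK s x * PR t y))"
    by (intro sum.cong refl) (simp add: hopf_comul_mult[OF a' l])
  also have "\<dots> = (\<Sum>s<?n. \<Sum>t<?n. \<Sum>q'<?n. ?c a l q' * (?D q' s t * PK s x * PR t y))"
    by (simp add: sum_distrib_right sum_distrib_left mult_ac)
  also have "\<dots> = (\<Sum>q'<?n. \<Sum>s<?n. \<Sum>t<?n. ?c a l q' * (?D q' s t * PK s x * PR t y))"
    by (rule sum_swap_in2[symmetric])
  also have "\<dots> = (\<Sum>q'<?n. act (regmod H) l a q' * ?J q' z)"
    by (simp add: diag_map_def regmod_def sum_distrib_left x_def y_def)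
  finally show "(\<Sum>w<mdim ?T. ?J a w * act ?T l w z) = (\<Sum>q'<mdim (regmod H). act (regmod H) l a q' * ?J q' z)"
    by simp
qed

lemma comul_counit_decomp:
  assumes dec: "\<forall>i<hdim H. \<forall>j<hdim H. ecomul H b i j = (\<Sum>t<m. X t i * Y t j)"
    and b: "b \<in> vecs (hdim H)" and X: "\<forall>t<m. X t \<in> vecs (hdim H)"
  shows "(\<lambda>i. \<Sum>t<m. eeps H (Y t) * X t i) = b"
proof (rule ext)
  let ?n = "hdim H" and ?e = "heps H" and ?D = "hcomul H"
  fix i show "(\<Sum>t<m. eeps H (Y t) * X t i) = b i"
  proof (cases "i < ?n")
    case i: True
    have "(\<Sum>t<m. eeps H (Y t) * X t i) = (\<Sum>t<m. \<Sum>j<?n. ?e j * (X t i * Y t j))"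
      by (simp add: eeps_def sum_distrib_left sum_distrib_right mult_ac)
    also have "\<dots> = (\<Sum>j<?n. ?e j * (\<Sum>t<m. X t i * Y t j))"
      by (subst sum.swap) (simp add: sum_distrib_left)
    also have "\<dots> = (\<Sum>j<?n. ?e j * ecomul H b i j)"
      by (intro sum.cong refl) (use dec i in auto)
    also have "\<dots> = (\<Sum>j<?n. \<Sum>l<?n. b l * (?e j * ?D l i j))"
      by (simp add: ecomul_def sum_distrib_left mult_ac)
    also have "\<dots> = (\<Sum>l<?n. b l * (\<Sum>j<?n. ?e j * ?D l i j))"
      by (subst sum.swap) (simp add: sum_distrib_left)
    also have "\<dots> = (\<Sum>l<?n. b l * kd l i)"
      by (intro sum.cong refl) (use i in \<open>simp add: hopf_counit_right\<close>)
    also have "\<dots> = b i" using i by (simp add: sum_kd_right)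
    finally show ?thesis .
  next
    case False
    then have "\<forall>t<m. X t i = 0" using X unfolding vecs_def by auto
    then show ?thesis using b False by (simp add: vecs_def)
  qed
qed

lemma matmul_diag_map_id_tensor:
  assumes PER: "\<forall>j<hdim H. matmul dY PR E j 0 = heps H j" and a: "a < hdim H" and x: "x < dX"
  shows "matmul (dX * dY) (diag_map H dY PX PR) (id_tensor dY 1 E) a x = PX a x"
proof -
  let ?n = "hdim H" and ?D = "hcomul H" and ?J = "diag_map H dY PX PR"
  have "matmul (dX * dY) ?J (id_tensor dY 1 E) a x
      = (\<Sum>w1<dX. \<Sum>w2<dY. ?J a (w1 * dY + w2) * (kd w1 x * E w2 0))"
    unfolding matmul_def id_tensor_def by (simp add: sum_lessThan_mult)
  also have "\<dots> = (\<Sum>w1<dX. kd w1 x * (\<Sum>w2<dY. ?J a (w1 * dY + w2) * E w2 0))"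
    by (simp add: sum_distrib_left mult_ac)
  also have "\<dots> = (\<Sum>w2<dY. ?J a (x * dY + w2) * E w2 0)"
    by (rule sum_kd_left'[OF x])
  also have "\<dots> = (\<Sum>w2<dY. \<Sum>i<?n. \<Sum>j<?n. ?D a i j * PX i x * (PR j w2 * E w2 0))"
    by (intro sum.cong refl) (simp add: diag_map_def sum_distrib_right sum_distrib_left mult_ac)
  also have "\<dots> = (\<Sum>i<?n. \<Sum>j<?n. ?D a i j * PX i x * matmul dY PR E j 0)"
    by (subst sum_swap_in2) (simp add: matmul_def sum_distrib_left)
  also have "\<dots> = (\<Sum>i<?n. PX i x * (\<Sum>j<?n. heps H j * ?D a i j))"
    by (simp add: PER sum_distrib_left mult_ac)
  also have "\<dots> = (\<Sum>i<?n. PX i x * kd a i)"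
    by (intro sum.cong refl) (use a in \<open>simp add: hopf_counit_right\<close>)
  also have "\<dots> = PX a x" using a by (simp add: sum_kd_right')
  finally show ?thesis .
qed

lemma free_lift:
  assumes Y: "is_rmod H Y" and S: "mhom H Y Z S" and f: "mhom H (dsumpow (regmod H) a) Z f"
    and img: "\<And>t. t < a \<Longrightarrow> \<exists>y. \<forall>z<mdim Z. (\<Sum>r<mdim Y. y r * S r z) = (\<Sum>i<hdim H. hunit H i * f (t * hdim H + i) z)"
  shows "\<exists>g. mhom H (dsumpow (regmod H) a) Y g \<and> (\<forall>x<a * hdim H. \<forall>z<mdim Z. matmul (mdim Y) g S x z = f x z)"
proof -
  let ?n = "hdim H" and ?dY = "mdim Y" and ?dZ = "mdim Z" and ?Ha = "dsumpow (regmod H) a"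
  let ?c = "hmul H" and ?u = "hunit H"
  obtain y where y: "\<And>t z. t < a \<Longrightarrow> z < ?dZ \<Longrightarrow> (\<Sum>r<?dY. y t r * S r z) = (\<Sum>i<?n. ?u i * f (t * ?n + i) z)"
    using img by metis
  have aHa: "\<And>l x q. act ?Ha l x q = (if x div ?n = q div ?n then ?c (x mod ?n) l (q mod ?n) else 0)"
    by (simp add: dsumpow_def regmod_def)
  define g where "g = free_map H Y y"
  have gH: "mhom H ?Ha Y g"
    unfolding g_def by (rule free_map_mhom[OF Y])
  have gS: "matmul ?dY g S x z = f x z" if x: "x < a * ?n" and z: "z < ?dZ" for x z
  proof -
    have x1: "x div ?n < a" and x2: "x mod ?n < ?n" using less_mult_divmod_bounds[OF x] by auto
    have SH: "\<And>r. r < ?dY \<Longrightarrow> (\<Sum>q<?dZ. S r q * act Z (x mod ?n) q z) = (\<Sum>q<?dY. act Y (x mod ?n) r q * S q z)"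
      using S x2 z unfolding mhom_def by blast
    have fH: "\<And>p. p < a * ?n \<Longrightarrow> (\<Sum>q<?dZ. f p q * act Z (x mod ?n) q z) = (\<Sum>q<a * ?n. act ?Ha (x mod ?n) p q * f q z)"
      using f x2 z unfolding mhom_def by simp
    have "matmul ?dY g S x z = (\<Sum>r<?dY. y (x div ?n) r * (\<Sum>q<?dY. act Y (x mod ?n) r q * S q z))"
      unfolding matmul_def g_def free_map_def by (rule sum_mult_swap)
    also have "\<dots> = (\<Sum>r<?dY. y (x div ?n) r * (\<Sum>q<?dZ. S r q * act Z (x mod ?n) q z))"
      by (intro sum.cong refl) (simp add: SH)
    also have "\<dots> = (\<Sum>q<?dZ. (\<Sum>r<?dY. y (x div ?n) r * S r q) * act Z (x mod ?n) q z)"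
      by (rule sum_mult_swap[symmetric])
    also have "\<dots> = (\<Sum>q<?dZ. (\<Sum>i<?n. ?u i * f (x div ?n * ?n + i) q) * act Z (x mod ?n) q z)"
      by (intro sum.cong refl) (simp add: y x1)
    also have "\<dots> = (\<Sum>i<?n. ?u i * (\<Sum>q<?dZ. f (x div ?n * ?n + i) q * act Z (x mod ?n) q z))"
      by (rule sum_mult_swap)
    also have "\<dots> = (\<Sum>i<?n. ?u i * (\<Sum>q<a * ?n. act ?Ha (x mod ?n) (x div ?n * ?n + i) q * f q z))"
    proof (intro sum.cong refl)
      fix i assume i: "i \<in> {..<?n}"
      have "x div ?n * ?n + i < a * ?n" using mult_add_less_mult[OF x1, of i ?n] i by simp
      then show "?u i * (\<Sum>q<?dZ. f (x div ?n * ?n + i) q * act Z (x mod ?n) q z) =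
          ?u i * (\<Sum>q<a * ?n. act ?Ha (x mod ?n) (x div ?n * ?n + i) q * f q z)" by (simp add: fH)
    qed
    also have "\<dots> = (\<Sum>i<?n. ?u i * (\<Sum>m<?n. ?c i (x mod ?n) m * f (x div ?n * ?n + m) z))"
    proof (intro sum.cong refl)
      fix i assume i: "i \<in> {..<?n}"
      have "(\<Sum>q<a * ?n. act ?Ha (x mod ?n) (x div ?n * ?n + i) q * f q z)
          = (\<Sum>t<a. \<Sum>m<?n. act ?Ha (x mod ?n) (x div ?n * ?n + i) (t * ?n + m) * f (t * ?n + m) z)"
        by (rule sum_lessThan_mult)
      also have "\<dots> = (\<Sum>t<a. if x div ?n = t then (\<Sum>m<?n. ?c i (x mod ?n) m * f (t * ?n + m) z) else 0)"
        by (intro sum.cong refl) (use i in \<open>auto simp: aHa\<close>)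
      also have "\<dots> = (\<Sum>m<?n. ?c i (x mod ?n) m * f (x div ?n * ?n + m) z)"
        using x1 by (simp add: sum.delta)
      finally show "?u i * (\<Sum>q<a * ?n. act ?Ha (x mod ?n) (x div ?n * ?n + i) q * f q z) =
         ?u i * (\<Sum>m<?n. ?c i (x mod ?n) m * f (x div ?n * ?n + m) z)" by simp
    qed
    also have "\<dots> = (\<Sum>m<?n. (\<Sum>i<?n. ?u i * ?c i (x mod ?n) m) * f (x div ?n * ?n + m) z)"
      by (rule sum_mult_swap[symmetric])
    also have "\<dots> = (\<Sum>m<?n. kd (x mod ?n) m * f (x div ?n * ?n + m) z)"
      by (intro sum.cong refl) (simp add: hopf_unit_left x2)
    also have "\<dots> = f x z" using x2 by (simp add: sum_kd_left)
    finally show ?thesis .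
  qed
  show ?thesis using gH gS by blast
qed

lemma projective_lift:
  assumes P: "projective H P" and Y: "is_rmod H Y" and S: "mhom H Y Z S" and f: "mhom H P Z f"
    and img: "\<And>v. v \<in> vecs (mdim P) \<Longrightarrow> \<exists>y. vm (mdim Y) (mdim Z) y S = vm (mdim P) (mdim Z) v f"
  shows "\<exists>g. mhom H P Y g \<and> (\<forall>x<mdim P. \<forall>z<mdim Z. matmul (mdim Y) g S x z = f x z)"
proof -
  let ?n = "hdim H"
  obtain a where "is_summand H P (dsumpow (regmod H) a)" using P unfolding projective_def by blast
  then obtain \<iota> \<pi> where \<iota>: "mhom H P (dsumpow (regmod H) a) \<iota>" and \<pi>: "mhom H (dsumpow (regmod H) a) P \<pi>"
    and ip: "\<forall>p<mdim P. \<forall>p'<mdim P. matmul (a * ?n) \<iota> \<pi> p p' = kd p p'"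
    unfolding is_summand_def by auto
  define f' where "f' = matmul (mdim P) \<pi> f"
  have f': "mhom H (dsumpow (regmod H) a) Z f'" unfolding f'_def using mhom_comp[OF \<pi> f] .
  have img': "\<exists>y. \<forall>z<mdim Z. (\<Sum>r<mdim Y. y r * S r z) = (\<Sum>i<?n. hunit H i * f' (t * ?n + i) z)" if t: "t < a" for t
  proof -
    define u where "u = (\<lambda>x. if x div ?n = t \<and> x < a * ?n then hunit H (x mod ?n) else 0)"
    define v where "v = vm (a * ?n) (mdim P) u \<pi>"
    obtain y where y: "vm (mdim Y) (mdim Z) y S = vm (mdim P) (mdim Z) v f"
      using img[of v] vm_vecs unfolding v_def by blast
    have "\<forall>z<mdim Z. (\<Sum>r<mdim Y. y r * S r z) = (\<Sum>i<?n. hunit H i * f' (t * ?n + i) z)"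
    proof (intro allI impI)
      fix z assume z: "z < mdim Z"
      have "(\<Sum>r<mdim Y. y r * S r z) = vm (mdim Y) (mdim Z) y S z" using z by (simp add: vm_def)
      also have "\<dots> = vm (a * ?n) (mdim Z) u f' z" using y unfolding v_def f'_def by (simp add: vm_matmul)
      also have "\<dots> = (\<Sum>x<a * ?n. u x * f' x z)" using z by (simp add: vm_def)
      also have "\<dots> = (\<Sum>s<a. \<Sum>i<?n. u (s * ?n + i) * f' (s * ?n + i) z)" by (rule sum_lessThan_mult)
      also have "\<dots> = (\<Sum>s<a. if s = t then (\<Sum>i<?n. hunit H i * f' (s * ?n + i) z) else 0)"
      proof (intro sum.cong refl)
        fix s assume s: "s \<in> {..<a}"
        show "(\<Sum>i<?n. u (s * ?n + i) * f' (s * ?n + i) z) = (if s = t then (\<Sum>i<?n. hunit H i * f' (s * ?n + i) z) else 0)"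
          using s mult_add_less_mult[of s a _ ?n] by (auto simp: u_def intro!: sum.cong)
      qed
      also have "\<dots> = (\<Sum>i<?n. hunit H i * f' (t * ?n + i) z)" using t by (simp add: sum.delta')
      finally show "(\<Sum>r<mdim Y. y r * S r z) = (\<Sum>i<?n. hunit H i * f' (t * ?n + i) z)" .
    qed
    then show ?thesis by blast
  qed
  obtain g where g: "mhom H (dsumpow (regmod H) a) Y g" and gS: "\<forall>x<a * ?n. \<forall>z<mdim Z. matmul (mdim Y) g S x z = f' x z"
    using free_lift[OF Y S f' img'] by blast
  have "mhom H P Y (matmul (a * ?n) \<iota> g)" using mhom_comp[OF \<iota> g] by simp
  moreover have "\<forall>x<mdim P. \<forall>z<mdim Z. matmul (mdim Y) (matmul (a * ?n) \<iota> g) S x z = f x z"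
  proof (intro allI impI)
    fix x z assume x: "x < mdim P" and z: "z < mdim Z"
    have "matmul (mdim Y) (matmul (a * ?n) \<iota> g) S x z = matmul (a * ?n) \<iota> (matmul (mdim Y) g S) x z" by (simp add: matmul_assoc)
    also have "\<dots> = matmul (a * ?n) \<iota> f' x z" by (rule matmul_cong_right) (use gS z in auto)
    also have "\<dots> = matmul (mdim P) (matmul (a * ?n) \<iota> \<pi>) f x z" unfolding f'_def by (simp add: matmul_assoc)
    also have "\<dots> = matmul (mdim P) kd f x z" by (rule matmul_cong_left) (use ip x in auto)
    also have "\<dots> = f x z" using x by (simp add: matmul_kd_left)
    finally show "matmul (mdim Y) (matmul (a * ?n) \<iota> g) S x z = f x z" .
  qed
  ultimately show ?thesis by blast
qed

end

section \<open>The quotient modules H/B^+H\<close>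

lemma quot_map_descends:
  assumes P: "mhom H (regmod H) Q P"
    and surj: "\<forall>w\<in>vecs (mdim Q). \<exists>v\<in>vecs (hdim H). vm (hdim H) (mdim Q) v P = w"
    and ker: "\<forall>v\<in>vecs (hdim H). vm (hdim H) (mdim Q) v P = (\<lambda>_. 0) \<longleftrightarrow> v \<in> K"
    and Q: "is_rmod H Q"
    and T: "mhom H (regmod H) Y T"
    and kill: "\<And>v. v \<in> vecs (hdim H) \<Longrightarrow> v \<in> K \<Longrightarrow> vm (hdim H) (mdim Y) v T = (\<lambda>_. 0)"
  shows "\<exists>J. mhom H Q Y J \<and> (\<forall>v\<in>vecs (hdim H). vm (mdim Q) (mdim Y) (vm (hdim H) (mdim Q) v P) J = vm (hdim H) (mdim Y) v T)"
proof -
  let ?n = "hdim H" and ?dQ = "mdim Q" and ?dY = "mdim Y"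
  have ex: "\<forall>q. \<exists>v. q < ?dQ \<longrightarrow> v \<in> vecs ?n \<and> vm ?n ?dQ v P = unit_vec q"
    using surj unit_vec_vecs by blast
  obtain L where L: "\<And>q. q < ?dQ \<Longrightarrow> L q \<in> vecs ?n \<and> vm ?n ?dQ (L q) P = unit_vec q"
    using choice[OF ex] by blast
  define J where "J = (\<lambda>q. vm ?n ?dY (L q) T)"
  have key: "vm ?dQ ?dY (vm ?n ?dQ v P) J = vm ?n ?dY v T" if v: "v \<in> vecs ?n" for v
  proof -
    define w where "w = vm ?n ?dQ v P"
    define v' where "v' = (\<lambda>i. v i - (\<Sum>q<?dQ. w q * L q i))"
    have v'v: "v' \<in> vecs ?n" unfolding v'_def using v L by (intro vecs_diff vecs_sum) auto
    have "vm ?n ?dQ v' P = (\<lambda>_. 0)"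
    proof (rule vm_vecs_eq)
      show "(\<lambda>_. 0) \<in> vecs ?dQ" by (simp add: vecs_def)
      fix y assume y: "y < ?dQ"
      have "vm ?n ?dQ v' P y = w y - (\<Sum>q<?dQ. w q * vm ?n ?dQ (L q) P y)"
        unfolding v'_def vm_diff vm_sum w_def by simp
      also have "\<dots> = w y - (\<Sum>q<?dQ. w q * unit_vec q y)" using L by simp
      also have "\<dots> = 0" using y by (simp add: unit_vec_def sum.delta' if_distrib[of "\<lambda>x. _ * x"] cong: if_cong)
      finally show "vm ?n ?dQ v' P y = 0" .
    qed
    then have "v' \<in> K" using ker v'v by blast
    then have z: "vm ?n ?dY v' T = (\<lambda>_. 0)" using kill v'v by blast
    show ?thesis
    proof (rule ext)
      fix y
      have "vm ?n ?dY v T y = vm ?n ?dY v' T y + (\<Sum>q<?dQ. w q * vm ?n ?dY (L q) T y)"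
        unfolding v'_def vm_diff vm_sum by simp
      also have "\<dots> = (\<Sum>q<?dQ. w q * J q y)" using z by (simp add: J_def)
      also have "\<dots> = vm ?dQ ?dY w J y"
        by (cases "y < ?dY") (auto simp: vm_def J_def w_def)
      finally show "vm ?dQ ?dY (vm ?n ?dQ v P) J y = vm ?n ?dY v T y" by (simp add: w_def)
    qed
  qed
  have JH: "mhom H Q Y J"
    unfolding mhom_def
  proof (intro allI impI)
    fix l q r assume l: "l < ?n" and q: "q < ?dQ" and r: "r < ?dY"
    have LP: "vm ?n ?dQ (L q) P = unit_vec q" using L[OF q] by auto
    have "(\<Sum>y<?dY. J q y * act Y l y r) = vm ?dY ?dY (J q) (act Y l) r"
      using r by (simp add: vm_def)
    also have "\<dots> = vm ?n ?dY (L q) (matmul ?dY T (act Y l)) r" unfolding J_def by (simp add: vm_matmul)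
    also have "\<dots> = vm ?n ?dY (L q) (matmul ?n (act (regmod H) l) T) r"
      by (subst vm_cong_mat[where B="matmul ?n (act (regmod H) l) T"]) (use T l in \<open>auto simp: mhom_iff_matmul\<close>)
    also have "\<dots> = vm ?n ?dY (vm ?n ?n (L q) (act (regmod H) l)) T r" by (simp add: vm_matmul)
    also have "\<dots> = vm ?dQ ?dY (vm ?n ?dQ (vm ?n ?n (L q) (act (regmod H) l)) P) J r"
      using key[OF vm_vecs] by simp
    also have "\<dots> = vm ?dQ ?dY (vm ?n ?dQ (L q) (matmul ?n (act (regmod H) l) P)) J r" by (simp add: vm_matmul)
    also have "\<dots> = vm ?dQ ?dY (vm ?n ?dQ (L q) (matmul ?dQ P (act Q l))) J r"
      by (subst vm_cong_mat[where A="matmul ?n (act (regmod H) l) P" and B="matmul ?dQ P (act Q l)"]) (use P l in \<open>auto simp: mhom_iff_matmul\<close>)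
    also have "\<dots> = vm ?dQ ?dY (vm ?dQ ?dQ (unit_vec q) (act Q l)) J r" using LP by (simp add: vm_matmul[symmetric])
    also have "\<dots> = (\<Sum>q'<?dQ. act Q l q q' * J q' r)"
      using q r by (simp only: vm_unit_vec[OF q]) (simp add: vm_def)
    finally show "(\<Sum>y<?dY. J q y * act Y l y r) = (\<Sum>q'<?dQ. act Q l q q' * J q' r)" .
  qed
  show ?thesis using JH key by blast
qed

lemma vm_emul_kernel:
  fixes H :: "('k::field) hopf"
  assumes T: "mhom H (regmod H) Y T" and bT: "vm (hdim H) (mdim Y) b T = (\<lambda>_. 0)"
  shows "vm (hdim H) (mdim Y) (emul H b h) T = (\<lambda>_. 0)"
proof (rule ext)
  let ?n = "hdim H"
  fix y show "vm ?n (mdim Y) (emul H b h) T y = 0"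
  proof (cases "y < mdim Y")
    case y: True
    have TH: "\<And>i j. i < ?n \<Longrightarrow> j < ?n \<Longrightarrow> (\<Sum>l<?n. hmul H i j l * T l y) = (\<Sum>q<mdim Y. T i q * act Y j q y)"
      using T y unfolding mhom_def regmod_def by simp
    have bq: "\<And>q. q < mdim Y \<Longrightarrow> (\<Sum>i<?n. b i * T i q) = 0"
      using bT unfolding vm_def fun_eq_iff by metis
    have "vm ?n (mdim Y) (emul H b h) T y = (\<Sum>l<?n. (\<Sum>i<?n. \<Sum>j<?n. b i * h j * hmul H i j l) * T l y)"
      using y by (simp add: vm_def emul_def)
    also have "\<dots> = (\<Sum>l<?n. \<Sum>i<?n. \<Sum>j<?n. b i * h j * (hmul H i j l * T l y))"
      by (simp add: sum_distrib_right sum_distrib_left mult_ac)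
    also have "\<dots> = (\<Sum>i<?n. \<Sum>j<?n. \<Sum>l<?n. b i * h j * (hmul H i j l * T l y))"
      by (rule sum_swap_in2)
    also have "\<dots> = (\<Sum>i<?n. \<Sum>j<?n. b i * h j * (\<Sum>q<mdim Y. T i q * act Y j q y))"
      by (intro sum.cong refl) (simp add: sum_distrib_left[symmetric] TH)
    also have "\<dots> = (\<Sum>j<?n. \<Sum>i<?n. b i * h j * (\<Sum>q<mdim Y. T i q * act Y j q y))"
      by (rule sum.swap)
    also have "\<dots> = (\<Sum>j<?n. \<Sum>i<?n. \<Sum>q<mdim Y. h j * ((b i * T i q) * act Y j q y))"
      by (simp add: sum_distrib_left mult_ac)
    also have "\<dots> = (\<Sum>j<?n. \<Sum>q<mdim Y. \<Sum>i<?n. h j * ((b i * T i q) * act Y j q y))"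
      by (rule sum.cong[OF refl], rule sum.swap)
    also have "\<dots> = (\<Sum>j<?n. \<Sum>q<mdim Y. h j * ((\<Sum>i<?n. b i * T i q) * act Y j q y))"
      by (simp add: sum_distrib_left sum_distrib_right)
    also have "\<dots> = 0" by (simp add: bq)
    finally show ?thesis .
  next
    case False then show ?thesis by (simp add: vm_def)
  qed
qed

lemma vm_bplusH_kernel:
  fixes H :: "('k::field) hopf"
  assumes T: "mhom H (regmod H) Y T"
    and kb: "\<And>b. b \<in> bplus H B \<Longrightarrow> vm (hdim H) (mdim Y) b T = (\<lambda>_. 0)"
    and v: "v \<in> bplusH H B"
  shows "vm (hdim H) (mdim Y) v T = (\<lambda>_. 0)"
proof -
  obtain m :: nat and c :: "nat \<Rightarrow> 'k" and f :: "nat \<Rightarrow> 'k vect" where f: "\<forall>t<m. f t \<in> {emul H b h | b h. b \<in> bplus H B \<and> h \<in> vecs (hdim H)}"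
    and vdef: "v = (\<lambda>i. \<Sum>t<m. c t * f t i)"
    using v unfolding bplusH_def lin_span_def by blast
  have ft: "vm (hdim H) (mdim Y) (f t) T = (\<lambda>_. 0)" if t: "t < m" for t
  proof -
    obtain b h where "f t = emul H b h" and b: "b \<in> bplus H B" using f t by blast
    then show ?thesis using vm_emul_kernel[OF T kb[OF b]] by simp
  qed
  show ?thesis unfolding vdef vm_sum using ft by (simp add: fun_eq_iff)
qed

lemma is_quot_modE:
  assumes "is_quot_mod H B Q"
  obtains P where "is_rmod H Q" "mhom H (regmod H) Q P"
    "\<forall>w\<in>vecs (mdim Q). \<exists>v\<in>vecs (hdim H). vm (hdim H) (mdim Q) v P = w"
    "\<forall>v\<in>vecs (hdim H). vm (hdim H) (mdim Q) v P = (\<lambda>_. 0) \<longleftrightarrow> v \<in> bplusH H B"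
  using assms unfolding is_quot_mod_def by blast

(* 1 - Sp kills R^+H, so it descends to a section Q -> H of the projection. *)
lemma quot_mod_projective_if_split:
  fixes H :: "('k::field) hopf"
  assumes Q: "is_quot_mod H R Q" and sp: "split_incl H R"
  shows "projective H Q"
proof -
  let ?n = "hdim H" and ?dQ = "mdim Q"
  obtain P where Qr: "is_rmod H Q" and P: "mhom H (regmod H) Q P"
    and surj: "\<forall>w\<in>vecs ?dQ. \<exists>v\<in>vecs ?n. vm ?n ?dQ v P = w"
    and ker: "\<forall>v\<in>vecs ?n. vm ?n ?dQ v P = (\<lambda>_. 0) \<longleftrightarrow> v \<in> bplusH H R"
    using is_quot_modE[OF Q] by blast
  obtain Sp where Sp: "mhom H (regmod H) (regmod H) Sp"
    and Spin: "\<forall>v\<in>vecs ?n. vm ?n ?n v Sp \<in> bplusH H R"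
    and Spid: "\<forall>v\<in>bplusH H R. vm ?n ?n v Sp = v"
    using sp unfolding split_incl_def by blast
  define T :: "'k matr" where "T = (\<lambda>p q. kd p q - Sp p q)"
  have TH: "mhom H (regmod H) (regmod H) T"
    using Sp unfolding mhom_def T_def regmod_def
    by (auto simp: algebra_simps sum_subtractf sum_kd_left sum_kd_right sum_kd_left' sum_kd_right')
  have vT: "vm ?n ?n v T = (\<lambda>i. v i - vm ?n ?n v Sp i)" if v: "v \<in> vecs ?n" for v
  proof (rule ext)
    fix i show "vm ?n ?n v T i = v i - vm ?n ?n v Sp i"
    proof (cases "i < ?n")
      case True then show ?thesis
        by (simp add: vm_def T_def algebra_simps sum_subtractf sum_kd_right)
    next
      case False then show ?thesis using v by (simp add: vm_def vecs_def)
    qed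
  qed
  have kill: "vm ?n (mdim (regmod H)) v T = (\<lambda>_. 0)" if "v \<in> vecs ?n" "v \<in> bplusH H R" for v
    using vT[OF that(1)] Spid that(2) by simp
  obtain J where J: "mhom H Q (regmod H) J" and PJ: "\<forall>v\<in>vecs ?n. vm ?dQ ?n (vm ?n ?dQ v P) J = vm ?n ?n v T"
    using quot_map_descends[OF P surj ker Qr TH] kill by auto
  have JP: "matmul ?n J P x x' = kd x x'" if x: "x < ?dQ" and x': "x' < ?dQ" for x x'
  proof (rule mat_eq_rows[OF _ x x'])
    fix z assume z: "z < ?dQ"
    obtain v where v: "v \<in> vecs ?n" and vP: "vm ?n ?dQ v P = unit_vec z" using surj unit_vec_vecs[OF z] by blast
    have "vm ?dQ ?dQ (unit_vec z) (matmul ?n J P) = vm ?n ?dQ (vm ?dQ ?n (vm ?n ?dQ v P) J) P"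
      by (simp add: vP vm_matmul)
    also have "\<dots> = vm ?n ?dQ (\<lambda>i. v i - vm ?n ?n v Sp i) P" using PJ v vT by simp
    also have "\<dots> = (\<lambda>y. vm ?n ?dQ v P y - vm ?n ?dQ (vm ?n ?n v Sp) P y)" by (rule vm_diff)
    also have "\<dots> = unit_vec z"
    proof -
      have "vm ?n ?dQ (vm ?n ?n v Sp) P = (\<lambda>_. 0)" using ker Spin v vm_vecs by blast
      then show ?thesis using vP by (simp add: fun_eq_iff)
    qed
    also have "\<dots> = vm ?dQ ?dQ (unit_vec z) kd" by (simp add: vm_kd unit_vec_vecs[OF z])
    finally show "vm ?dQ ?dQ (unit_vec z) (matmul ?n J P) = vm ?dQ ?dQ (unit_vec z) kd" .
  qed
  have "is_summand H Q (regmod H)" unfolding is_summand_def using J P JP by auto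
  then show ?thesis unfolding projective_def using is_summand_trans dsumpow_one_summand(1) by blast
qed

context
  fixes H :: "('k::field) hopf"
  assumes hopf: "hopf_algebra H"
begin

lemma bplus_in_bplusH:
  assumes B: "B \<subseteq> vecs (hdim H)" and b: "b \<in> bplus H B"
  shows "b \<in> bplusH H B"
proof -
  have bv: "b \<in> vecs (hdim H)" using b B unfolding bplus_def by auto
  have "emul H b (eone H) = b"
  proof (rule ext)
    fix l show "emul H b (eone H) l = b l"
    proof (cases "l < hdim H")
      case True
      have "emul H b (eone H) l = (\<Sum>i<hdim H. b i * (\<Sum>j<hdim H. hunit H j * hmul H i j l))"
        using True by (simp add: emul_def eone_def sum_distrib_left mult_ac)
      also have "\<dots> = (\<Sum>i<hdim H. b i * kd i l)" by (intro sum.cong refl) (use True in \<open>simp add: hopf_unit_right[OF hopf]\<close>)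
      also have "\<dots> = b l" using True by (simp add: sum_kd_right)
      finally show ?thesis .
    next
      case False then show ?thesis using bv by (simp add: emul_def vecs_def)
    qed
  qed
  moreover have "eone H \<in> vecs (hdim H)" by (simp add: eone_def vecs_def)
  ultimately have "b \<in> {emul H b' h | b' h. b' \<in> bplus H B \<and> h \<in> vecs (hdim H)}"
    using b by (intro CollectI exI[of _ b] exI[of _ "eone H"]) auto
  then show ?thesis unfolding bplusH_def lin_span_def
    by (intro CollectI exI[of _ 1] exI[of _ "\<lambda>_. 1"] exI[of _ "\<lambda>_. b"]) auto
qed

lemma eeps_eone: "eeps H (eone H) = 1"
  unfolding eeps_def eone_def using hopf_eps_unit[OF hopf] by simp

lemma mhom_regmod_trivmod_eps: "mhom H (regmod H) (trivmod H) (\<lambda>p q. heps H p)"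
  unfolding mhom_def
  using hopf_eps_mult[OF hopf] by (simp add: trivmod_def regmod_def mult.commute)

lemma quot_mod_counit_map:
  assumes B: "hopf_subalg H B" and Qr: "is_rmod H Q" and P: "mhom H (regmod H) Q P"
    and surj: "\<forall>w\<in>vecs (mdim Q). \<exists>v\<in>vecs (hdim H). vm (hdim H) (mdim Q) v P = w"
    and ker: "\<forall>v\<in>vecs (hdim H). vm (hdim H) (mdim Q) v P = (\<lambda>_. 0) \<longleftrightarrow> v \<in> bplusH H B"
  shows "\<exists>E. mhom H Q (trivmod H) E \<and> (\<forall>j<hdim H. matmul (mdim Q) P E j 0 = heps H j)"
proof -
  let ?n = "hdim H" and ?T = "\<lambda>p q. heps H p"
  have kill: "vm ?n (mdim (trivmod H)) v ?T = (\<lambda>_. 0)" if "v \<in> bplusH H B" for v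
  proof (rule vm_bplusH_kernel[OF mhom_regmod_trivmod_eps _ that])
    fix b assume "b \<in> bplus H B"
    then have "eeps H b = 0" unfolding bplus_def by auto
    then show "vm ?n (mdim (trivmod H)) b ?T = (\<lambda>_. 0)"
      by (auto simp: vm_def eeps_def fun_eq_iff)
  qed
  obtain J where J: "mhom H Q (trivmod H) J"
    and PJ: "\<forall>v\<in>vecs ?n. vm (mdim Q) 1 (vm ?n (mdim Q) v P) J = vm ?n 1 v ?T"
    using quot_map_descends[OF P surj ker Qr mhom_regmod_trivmod_eps] kill by auto
  have "matmul (mdim Q) P J j 0 = heps H j" if j: "j < ?n" for j
  proof -
    have "matmul (mdim Q) P J j 0 = vm ?n 1 (unit_vec j) (matmul (mdim Q) P J) 0"
      using j by (simp add: vm_unit_vec)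
    also have "\<dots> = vm ?n 1 (unit_vec j) ?T 0"
      using PJ[rule_format, OF unit_vec_vecs[OF j]] by (simp add: vm_matmul)
    also have "\<dots> = heps H j" using j by (simp add: vm_unit_vec)
    finally show ?thesis .
  qed
  then show ?thesis using J by blast
qed

lemma quot_mod_counit:
  assumes B: "hopf_subalg H B" and Q: "is_quot_mod H B Q"
  shows "\<exists>E q0. mhom H Q (trivmod H) E \<and> q0 \<in> vecs (mdim Q) \<and> (\<Sum>y<mdim Q. q0 y * E y 0) = 1"
proof -
  let ?n = "hdim H"
  obtain P where Qr: "is_rmod H Q" and P: "mhom H (regmod H) Q P"
    and surj: "\<forall>w\<in>vecs (mdim Q). \<exists>v\<in>vecs ?n. vm ?n (mdim Q) v P = w"
    and ker: "\<forall>v\<in>vecs ?n. vm ?n (mdim Q) v P = (\<lambda>_. 0) \<longleftrightarrow> v \<in> bplusH H B"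
    using is_quot_modE[OF Q] by blast
  obtain E where E: "mhom H Q (trivmod H) E" and PE: "\<forall>j<?n. matmul (mdim Q) P E j 0 = heps H j"
    using quot_mod_counit_map[OF B Qr P surj ker] by blast
  define q0 where "q0 = vm ?n (mdim Q) (eone H) P"
  have "(\<Sum>y<mdim Q. q0 y * E y 0) = vm (mdim Q) 1 q0 E 0"
    by (simp add: vm_def)
  also have "\<dots> = vm ?n 1 (eone H) (matmul (mdim Q) P E) 0"
    by (simp add: q0_def vm_matmul)
  also have "\<dots> = (\<Sum>j<?n. hunit H j * heps H j)"
    by (simp add: vm_def eone_def PE)
  also have "\<dots> = 1" by (rule hopf_eps_unit[OF hopf])
  finally show ?thesis using E vm_vecs unfolding q0_def by blast
qed
lemma vm_subalg_eq_eeps_eone: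
  assumes R: "hopf_subalg H R"
    and ker: "\<And>v. v \<in> vecs (hdim H) \<Longrightarrow> v \<in> bplusH H R \<Longrightarrow> vm (hdim H) d v P = (\<lambda>_. 0)"
    and y: "y \<in> R"
  shows "vm (hdim H) d y P = (\<lambda>z. eeps H y * vm (hdim H) d (eone H) P z)"
proof -
  define w where "w = (\<lambda>i. y i - eeps H y * eone H i)"
  have wR: "w \<in> R"
    unfolding w_def using R y by (intro subspace_of_diff_scale) (auto simp: hopf_subalg_def)
  have "eeps H w = eeps H y - eeps H y * eeps H (eone H)"
    unfolding w_def by (rule eeps_lin)
  then have "w \<in> bplus H R" using wR unfolding bplus_def by (simp add: eeps_eone)
  then have "vm (hdim H) d w P = (\<lambda>_. 0)"
    using ker bplus_in_bplusH[OF hopf_subalg_vecs[OF R]] wR hopf_subalg_vecs[OF R] by blast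
  then show ?thesis unfolding w_def vm_diff by (auto simp: fun_eq_iff vm_def sum_distrib_left mult_ac)
qed

lemma vm_diag_map_bplus:
  assumes K: "hopf_subalg H K" and R: "hopf_subalg H R" and KR: "K \<subseteq> R"
    and kerK: "\<And>v. v \<in> vecs (hdim H) \<Longrightarrow> v \<in> bplusH H K \<Longrightarrow> vm (hdim H) dK v PK = (\<lambda>_. 0)"
    and kerR: "\<And>v. v \<in> vecs (hdim H) \<Longrightarrow> v \<in> bplusH H R \<Longrightarrow> vm (hdim H) dR v PR = (\<lambda>_. 0)"
    and b: "b \<in> bplus H K"
  shows "vm (hdim H) (dK * dR) b (diag_map H dR PK PR) = (\<lambda>_. 0)"
proof (rule ext)
  let ?n = "hdim H" and ?D = "hcomul H"
  have bK: "b \<in> K" using b unfolding bplus_def by auto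
  have bv: "b \<in> vecs ?n" using bK hopf_subalg_vecs[OF K] by auto
  obtain m :: nat and X Y :: "nat \<Rightarrow> 'k vect" where XY: "\<forall>t<m. X t \<in> K \<and> Y t \<in> K"
    and dec: "\<forall>i<?n. \<forall>j<?n. ecomul H b i j = (\<Sum>t<m. X t i * Y t j)"
    using K bK unfolding hopf_subalg_def in_tensor2_def by blast
  have Yred: "vm ?n dR (Y t) PR = (\<lambda>y. eeps H (Y t) * vm ?n dR (eone H) PR y)" if t: "t < m" for t
    using vm_subalg_eq_eeps_eone[OF R kerR] XY t KR by blast
  have bsum: "(\<lambda>i. \<Sum>t<m. eeps H (Y t) * X t i) = b"
    using comul_counit_decomp[OF hopf dec bv] XY hopf_subalg_vecs[OF K] by blast
  have bPK: "vm ?n dK b PK = (\<lambda>_. 0)"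
    using kerK bv bplus_in_bplusH[OF hopf_subalg_vecs[OF K] b] by blast
  fix z show "vm ?n (dK * dR) b (diag_map H dR PK PR) z = 0"
  proof (cases "z < dK * dR")
    case z: True
    define x where "x = z div dR"
    define y where "y = z mod dR"
    have x: "x < dK" and y: "y < dR" using less_mult_divmod_bounds[OF z] unfolding x_def y_def by auto
    have "vm ?n (dK * dR) b (diag_map H dR PK PR) z
        = (\<Sum>a<?n. b a * (\<Sum>i<?n. \<Sum>j<?n. ?D a i j * PK i x * PR j y))"
      using z by (simp add: vm_def diag_map_def x_def y_def)
    also have "\<dots> = (\<Sum>a<?n. \<Sum>i<?n. \<Sum>j<?n. b a * ?D a i j * (PK i x * PR j y))"
      by (simp add: sum_distrib_left mult_ac)
    also have "\<dots> = (\<Sum>i<?n. \<Sum>j<?n. \<Sum>a<?n. b a * ?D a i j * (PK i x * PR j y))"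
      by (rule sum_swap_in2)
    also have "\<dots> = (\<Sum>i<?n. \<Sum>j<?n. ecomul H b i j * (PK i x * PR j y))"
      by (simp add: ecomul_def sum_distrib_right)
    also have "\<dots> = (\<Sum>i<?n. \<Sum>j<?n. (\<Sum>t<m. X t i * Y t j) * (PK i x * PR j y))"
      by (intro sum.cong refl) (use dec in auto)
    also have "\<dots> = (\<Sum>i<?n. \<Sum>j<?n. \<Sum>t<m. (X t i * PK i x) * (Y t j * PR j y))"
      by (simp add: sum_distrib_right sum_distrib_left mult_ac)
    also have "\<dots> = (\<Sum>t<m. \<Sum>i<?n. \<Sum>j<?n. (X t i * PK i x) * (Y t j * PR j y))"
      by (rule sum_swap_in2[symmetric])
    also have "\<dots> = (\<Sum>t<m. (\<Sum>i<?n. X t i * PK i x) * (\<Sum>j<?n. Y t j * PR j y))"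
      by (simp add: sum_product)
    also have "\<dots> = (\<Sum>t<m. vm ?n dK (X t) PK x * vm ?n dR (Y t) PR y)"
      using x y by (simp add: vm_def)
    also have "\<dots> = (\<Sum>t<m. vm ?n dK (X t) PK x * (eeps H (Y t) * vm ?n dR (eone H) PR y))"
      by (intro sum.cong refl) (simp add: Yred)
    also have "\<dots> = vm ?n dK (\<lambda>i. \<Sum>t<m. eeps H (Y t) * X t i) PK x * vm ?n dR (eone H) PR y"
      by (subst vm_sum) (simp add: sum_distrib_right sum_distrib_left mult_ac)
    also have "\<dots> = 0" by (simp add: bsum bPK)
    finally show ?thesis .
  next
    case False then show ?thesis by (simp add: vm_def)
  qed
qed

(* The diagonal map kills K^+H because pi_R is eps on K, so it descends to Q_K -> Q_K (x) Q_R;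
   id (x) eps is a left inverse. *)
lemma quot_mod_summand_tensmod:
  assumes K: "hopf_subalg H K" and R: "hopf_subalg H R" and KR: "K \<subseteq> R"
    and QK: "is_quot_mod H K QK" and QR: "is_quot_mod H R QR"
  shows "is_summand H QK (tensmod H QK QR)"
proof -
  let ?n = "hdim H" and ?dK = "mdim QK" and ?dR = "mdim QR" and ?T = "tensmod H QK QR"
  obtain PK where QKr: "is_rmod H QK" and PK: "mhom H (regmod H) QK PK"
    and surjK: "\<forall>w\<in>vecs ?dK. \<exists>v\<in>vecs ?n. vm ?n ?dK v PK = w"
    and kerK: "\<forall>v\<in>vecs ?n. vm ?n ?dK v PK = (\<lambda>_. 0) \<longleftrightarrow> v \<in> bplusH H K"
    using is_quot_modE[OF QK] by blast
  obtain PR where QRr: "is_rmod H QR" and PR: "mhom H (regmod H) QR PR"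
    and surjR: "\<forall>w\<in>vecs ?dR. \<exists>v\<in>vecs ?n. vm ?n ?dR v PR = w"
    and kerR: "\<forall>v\<in>vecs ?n. vm ?n ?dR v PR = (\<lambda>_. 0) \<longleftrightarrow> v \<in> bplusH H R"
    using is_quot_modE[OF QR] by blast
  obtain ER where ER: "mhom H QR (trivmod H) ER" and PER: "\<forall>j<?n. matmul ?dR PR ER j 0 = heps H j"
    using quot_mod_counit_map[OF R QRr PR surjR kerR] by blast
  define Jt where "Jt = diag_map H ?dR PK PR"
  have JtH: "mhom H (regmod H) ?T Jt"
    unfolding Jt_def by (rule diag_map_mhom[OF hopf PK PR])
  have kb: "vm ?n (mdim ?T) b Jt = (\<lambda>_. 0)" if "b \<in> bplus H K" for b
    unfolding Jt_def mdim_tensmod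
    by (rule vm_diag_map_bplus[OF K R KR _ _ that]) (use kerK kerR in auto)
  have kill: "vm ?n (mdim ?T) v Jt = (\<lambda>_. 0)" if "v \<in> vecs ?n" "v \<in> bplusH H K" for v
    by (rule vm_bplusH_kernel[OF JtH kb that(2)])
  obtain J where J: "mhom H QK ?T J"
    and PJ: "\<forall>v\<in>vecs ?n. vm ?dK (mdim ?T) (vm ?n ?dK v PK) J = vm ?n (mdim ?T) v Jt"
    using quot_map_descends[OF PK surjK kerK QKr JtH] kill by auto
  define E where "E = id_tensor ?dR 1 ER"
  have EH0: "mhom H ?T (tensmod H QK (trivmod H)) E"
    unfolding E_def using id_tensor_mhom[OF hopf ER, of QK] by simp
  have EH: "mhom H ?T QK E"
    by (rule mhom_cong_target[OF EH0]) (simp_all add: act_tensmod_trivmod[OF hopf])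
  have JE: "matmul (mdim ?T) J E x x' = kd x x'" if x: "x < ?dK" and x': "x' < ?dK" for x x'
  proof (rule mat_eq_rows[OF _ x x'])
    fix z assume z: "z < ?dK"
    obtain v where v: "v \<in> vecs ?n" and vP: "vm ?n ?dK v PK = unit_vec z"
      using surjK unit_vec_vecs[OF z] by blast
    have "vm ?dK ?dK (unit_vec z) (matmul (mdim ?T) J E) = vm ?n ?dK v (matmul (mdim ?T) Jt E)"
      using PJ v by (simp add: vP[symmetric] vm_matmul[symmetric])
    also have "\<dots> = vm ?n ?dK v PK"
      by (rule vm_cong_mat) (simp only: Jt_def E_def mdim_tensmod matmul_diag_map_id_tensor[OF hopf PER])
    also have "\<dots> = vm ?dK ?dK (unit_vec z) kd" by (simp add: vP vm_kd unit_vec_vecs[OF z])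
    finally show "vm ?dK ?dK (unit_vec z) (matmul (mdim ?T) J E) = vm ?dK ?dK (unit_vec z) kd" .
  qed
  show ?thesis unfolding is_summand_def using J EH JE by blast
qed

end

section \<open>Trace spaces and finite depth\<close>

(* Coordinate vectors with pointwise scaling, so that the dimension theory of locale vector_space
   applies to subspaces of vecs n. *)
definition scale_vec :: "'k::field \<Rightarrow> (nat \<Rightarrow> 'k) \<Rightarrow> (nat \<Rightarrow> 'k)" where
  "scale_vec a v = (\<lambda>i. a * v i)"

interpretation VS: vector_space "scale_vec :: 'k::field \<Rightarrow> _"
  by unfold_locales (auto simp: scale_vec_def fun_eq_iff algebra_simps)

lemma sum_fun_apply: "finite A \<Longrightarrow> (sum f A) i = (\<Sum>a\<in>A. f a i)"
  by (induction A rule: finite_induct) auto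

lemma vecs_span: "vecs n \<subseteq> VS.span ((unit_vec :: nat \<Rightarrow> 'k::field vect) ` {..<n})"
proof
  fix v :: "'k vect" assume v: "v \<in> vecs n"
  have "v = (\<Sum>i<n. scale_vec (v i) (unit_vec i))"
  proof (rule ext)
    fix j show "v j = (\<Sum>i<n. scale_vec (v i) (unit_vec i)) j"
    proof (cases "j < n")
      case True then show ?thesis by (simp add: sum_fun_apply scale_vec_def unit_vec_def sum.delta' if_distrib[of "\<lambda>x. _ * x"] cong: if_cong)
    next
      case False then show ?thesis using v by (simp add: sum_fun_apply scale_vec_def unit_vec_def vecs_def)
    qed
  qed
  also have "\<dots> \<in> VS.span (unit_vec ` {..<n})"
    by (intro VS.span_sum VS.span_scale VS.span_base) auto
  finally show "v \<in> VS.span (unit_vec ` {..<n})" .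
qed

lemma dim_le_of_vecs: "S \<subseteq> vecs n \<Longrightarrow> VS.dim (S :: 'k::field vect set) \<le> n"
proof -
  assume S: "S \<subseteq> vecs n"
  have "VS.dim S \<le> card ((unit_vec :: nat \<Rightarrow> 'k vect) ` {..<n})"
    by (rule VS.dim_le_card) (use S vecs_span in auto)
  also have "\<dots> \<le> n" using card_image_le[of "{..<n}" unit_vec] by simp
  finally show ?thesis .
qed

lemma dim_strict_mono:
  fixes S T :: "'k::field vect set"
  assumes S: "VS.subspace S" and ST: "S \<subseteq> T" and T: "T \<subseteq> vecs n" and nst: "\<not> T \<subseteq> S"
  shows "VS.dim S < VS.dim T"
proof -
  let ?W = "(unit_vec :: nat \<Rightarrow> 'k vect) ` {..<n}"
  obtain B where B: "B \<subseteq> S" "VS.independent B" "S \<subseteq> VS.span B" "card B = VS.dim S"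
    using VS.basis_exists by blast
  obtain x where x: "x \<in> T" "x \<notin> S" using nst by blast
  have "VS.span B \<subseteq> S" using VS.span_minimal[OF B(1) S] .
  then have xB: "x \<notin> VS.span B" using x by blast
  have ind: "VS.independent (insert x B)" by (rule VS.independent_insertI[OF xB B(2)])
  have "insert x B \<subseteq> T" using B(1) ST x by auto
  then obtain C where C: "insert x B \<subseteq> C" "C \<subseteq> T" "VS.independent C" "T \<subseteq> VS.span C"
    using VS.maximal_independent_subset_extend[OF _ ind] by blast
  have finC: "finite C" using VS.independent_span_bound[of ?W C] C(2,3) T vecs_span by auto
  have cC: "card C = VS.dim T" using VS.basis_card_eq_dim[OF C(2) C(4) C(3)] .
  have finB: "finite B" using finite_subset[OF _ finC] C(1) by auto
  have xnB: "x \<notin> B" using xB VS.span_base[of x B] by blast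
  have "card (insert x B) = card B + 1" using finB xnB by (simp add: card_insert_disjoint)
  moreover have "card (insert x B) \<le> card C" by (rule card_mono[OF finC C(1)])
  ultimately show ?thesis using B(4) cC by simp
qed

lemma vecs_chain_stabilizes:
  fixes S :: "nat \<Rightarrow> 'k::field vect set"
  assumes sub: "\<And>k. VS.subspace (S k)" and inc: "\<And>k. S k \<subseteq> S (Suc k)" and bnd: "\<And>k. S k \<subseteq> vecs n"
  shows "\<exists>N. S (Suc N) \<subseteq> S N"
proof (rule ccontr)
  assume "\<not> ?thesis"
  then have grow: "\<And>N. VS.dim (S N) < VS.dim (S (Suc N))"
    using dim_strict_mono[OF sub inc bnd] by blast
  have "VS.dim (S k) \<ge> k" for k
  proof (induction k)
    case (Suc k) then show ?case using grow[of k] by simp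
  qed simp
  then have "VS.dim (S (Suc n)) \<ge> Suc n" by blast
  moreover have "VS.dim (S (Suc n)) \<le> n" using dim_le_of_vecs[OF bnd] .
  ultimately show False by simp
qed

definition stack_rows :: "nat \<Rightarrow> ('k::comm_ring_1) matr \<Rightarrow> 'k matr \<Rightarrow> 'k matr" where
  "stack_rows k F1 F2 = (\<lambda>q r. if q < k then F1 q r else F2 (q - k) r)"

lemma stack_rows_mhom:
  assumes F1: "mhom H (dsumpow X m1) Z F1" and F2: "mhom H (dsumpow X m2) Z F2"
  shows "mhom H (dsumpow X (m1 + m2)) Z (stack_rows (m1 * mdim X) F1 F2)"
  unfolding mhom_def
proof (intro allI impI)
  let ?d = "mdim X"
  fix l a r assume l: "l < hdim H" and a: "a < mdim (dsumpow X (m1 + m2))" and r: "r < mdim Z"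
  have a': "a < m1 * ?d + m2 * ?d" using a by (simp add: add_mult_distrib)
  have actb: "act (dsumpow X k) l x y = (if x div ?d = y div ?d then act X l (x mod ?d) (y mod ?d) else 0)" for k x y
    by (simp add: dsumpow_def)
  have split: "(\<Sum>q<mdim (dsumpow X (m1 + m2)). act (dsumpow X (m1 + m2)) l a q * stack_rows (m1 * ?d) F1 F2 q r)
     = (\<Sum>q<m1 * ?d. act (dsumpow X m1) l a q * F1 q r) + (\<Sum>q<m2 * ?d. act (dsumpow X m1) l a (m1 * ?d + q) * F2 q r)"
    by (simp add: add_mult_distrib sum_split_add stack_rows_def actb)
  show "(\<Sum>q<mdim Z. stack_rows (m1 * ?d) F1 F2 a q * act Z l q r) =
        (\<Sum>q<mdim (dsumpow X (m1 + m2)). act (dsumpow X (m1 + m2)) l a q * stack_rows (m1 * ?d) F1 F2 q r)"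
  proof (cases "a < m1 * ?d")
    case True
    have z: "(\<Sum>q<m2 * ?d. act (dsumpow X m1) l a (m1 * ?d + q) * F2 q r) = 0"
    proof (rule sum.neutral, intro ballI)
      fix q assume "q \<in> {..<m2 * ?d}"
      have "a div ?d < m1" using True by (simp add: less_mult_imp_div_less)
      moreover have "m1 \<le> (m1 * ?d + q) div ?d" using True by (cases "?d = 0") auto
      ultimately show "act (dsumpow X m1) l a (m1 * ?d + q) * F2 q r = 0" by (auto simp: actb)
    qed
    have "(\<Sum>q<mdim Z. stack_rows (m1 * ?d) F1 F2 a q * act Z l q r) = (\<Sum>q<mdim Z. F1 a q * act Z l q r)"
      using True by (simp add: stack_rows_def)
    also have "\<dots> = (\<Sum>q<m1 * ?d. act (dsumpow X m1) l a q * F1 q r)"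
      using F1 l True r unfolding mhom_def by simp
    finally show ?thesis using split z by simp
  next
    case False
    define a' where "a' = a - m1 * ?d"
    have aa: "a = m1 * ?d + a'" and a'': "a' < m2 * ?d" using False a' unfolding a'_def by auto
    have dpos: "0 < ?d" using a'' by (cases "?d = 0") auto
    have z: "(\<Sum>q<m1 * ?d. act (dsumpow X m1) l a q * F1 q r) = 0"
    proof (rule sum.neutral, intro ballI)
      fix q assume "q \<in> {..<m1 * ?d}"
      then have "q div ?d < m1" by (simp add: less_mult_imp_div_less)
      moreover have "m1 \<le> a div ?d" using aa dpos by simp
      ultimately show "act (dsumpow X m1) l a q * F1 q r = 0" by (auto simp: actb)
    qed
    have e: "act (dsumpow X m1) l a (m1 * ?d + q) = act (dsumpow X m2) l a' q" for q
      using dpos by (simp add: actb aa)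
    have "(\<Sum>q<mdim Z. stack_rows (m1 * ?d) F1 F2 a q * act Z l q r) = (\<Sum>q<mdim Z. F2 a' q * act Z l q r)"
      using False by (simp add: stack_rows_def a'_def)
    also have "\<dots> = (\<Sum>q<m2 * ?d. act (dsumpow X m2) l a' q * F2 q r)"
      using F2 l a'' r unfolding mhom_def by simp
    finally show ?thesis using split z e by simp
  qed
qed

lemma vm_stack_rows_top:
  assumes "w \<in> vecs (m1 * d)"
  shows "vm ((m1 + m2) * d) k w (stack_rows (m1 * d) F1 F2) = vm (m1 * d) k w F1"
proof -
  have e: "\<And>q. (\<Sum>p<m1 * d + m2 * d. w p * stack_rows (m1 * d) F1 F2 p q) = (\<Sum>p<m1 * d. w p * F1 p q)"
    using assms by (simp add: sum_split_add stack_rows_def vecs_def)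
  show ?thesis unfolding vm_def add_mult_distrib e ..
qed

lemma vm_stack_rows_bottom:
  assumes "w \<in> vecs (m2 * d)"
  shows "vm ((m1 + m2) * d) k (\<lambda>p. if p < m1 * d then 0 else w (p - m1 * d)) (stack_rows (m1 * d) F1 F2) = vm (m2 * d) k w F2"
proof -
  have e: "\<And>q. (\<Sum>p<m1 * d + m2 * d. (if p < m1 * d then 0 else w (p - m1 * d)) * stack_rows (m1 * d) F1 F2 p q) = (\<Sum>p<m2 * d. w p * F2 p q)"
    by (simp add: sum_split_add stack_rows_def)
  show ?thesis unfolding vm_def add_mult_distrib e ..
qed

(* The trace of X in Z, as coordinate vectors: all images of module maps from multiples of X. *)
definition trace_vecs :: "('k::field) hopf \<Rightarrow> 'k hmod \<Rightarrow> 'k hmod \<Rightarrow> 'k vect set" where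
  "trace_vecs H X Z = {h. \<exists>m F w. mhom H (dsumpow X m) Z F \<and> w \<in> vecs (m * mdim X) \<and> h = vm (m * mdim X) (mdim Z) w F}"

lemma trace_vecs_common_map:
  fixes k :: nat
  assumes "\<And>p. p < k \<Longrightarrow> h p \<in> trace_vecs H X Z"
  shows "\<exists>m F. mhom H (dsumpow X m) Z F \<and> (\<forall>p<k. \<exists>y\<in>vecs (m * mdim X). vm (m * mdim X) (mdim Z) y F = h p)"
  using assms
proof (induction k)
  case 0
  have "mhom H (dsumpow X 0) Z (\<lambda>_ _. 0)" by (simp add: mhom_def)
  then show ?case by blast
next
  case (Suc k)
  obtain m1 F1 where F1: "mhom H (dsumpow X m1) Z F1" and c1: "\<forall>p<k. \<exists>y\<in>vecs (m1 * mdim X). vm (m1 * mdim X) (mdim Z) y F1 = h p"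
    using Suc by (meson less_SucI)
  obtain m2 F2 w where F2: "mhom H (dsumpow X m2) Z F2" and w: "w \<in> vecs (m2 * mdim X)" and hk: "h k = vm (m2 * mdim X) (mdim Z) w F2"
    using Suc.prems[of k] unfolding trace_vecs_def by auto
  have "\<forall>p<Suc k. \<exists>y\<in>vecs ((m1 + m2) * mdim X). vm ((m1 + m2) * mdim X) (mdim Z) y (stack_rows (m1 * mdim X) F1 F2) = h p"
  proof (intro allI impI)
    fix p assume p: "p < Suc k"
    show "\<exists>y\<in>vecs ((m1 + m2) * mdim X). vm ((m1 + m2) * mdim X) (mdim Z) y (stack_rows (m1 * mdim X) F1 F2) = h p"
    proof (cases "p < k")
      case True
      then obtain y where y: "y \<in> vecs (m1 * mdim X)" "vm (m1 * mdim X) (mdim Z) y F1 = h p" using c1 by blast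
      have "y \<in> vecs ((m1 + m2) * mdim X)" using vecs_mono[OF y(1)] by (simp add: add_mult_distrib)
      then show ?thesis using vm_stack_rows_top[OF y(1), where ?m2.0=m2 and k="mdim Z" and ?F1.0=F1 and ?F2.0=F2] y(2) by auto
    next
      case False then have "p = k" using p by simp
      then show ?thesis using vm_stack_rows_bottom[OF w, where ?m1.0=m1 and k="mdim Z" and ?F1.0=F1 and ?F2.0=F2] vecs_shift[OF w, of m1] hk by auto
    qed
  qed
  then show ?case using stack_rows_mhom[OF F1 F2] by blast
qed

lemma trace_vecs_vecs: "trace_vecs H X Z \<subseteq> vecs (mdim Z)" unfolding trace_vecs_def using vm_vecs by auto

lemma trace_vecs_mono:
  assumes "is_summand H X Y"
  shows "trace_vecs H X Z \<subseteq> trace_vecs H Y Z"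
proof
  fix h assume "h \<in> trace_vecs H X Z"
  then obtain m F w where F: "mhom H (dsumpow X m) Z F" and w: "w \<in> vecs (m * mdim X)" and h: "h = vm (m * mdim X) (mdim Z) w F"
    unfolding trace_vecs_def by blast
  obtain \<iota> \<pi> where \<iota>: "mhom H (dsumpow X m) (dsumpow Y m) \<iota>" and \<pi>: "mhom H (dsumpow Y m) (dsumpow X m) \<pi>"
    and ip: "\<forall>p<m * mdim X. \<forall>p'<m * mdim X. matmul (m * mdim Y) \<iota> \<pi> p p' = kd p p'"
    using is_summand_dsumpow[OF assms, of m] unfolding is_summand_def by auto
  have F': "mhom H (dsumpow Y m) Z (matmul (m * mdim X) \<pi> F)" using mhom_comp[OF \<pi> F] by simp
  have "vm (m * mdim Y) (mdim Z) (vm (m * mdim X) (m * mdim Y) w \<iota>) (matmul (m * mdim X) \<pi> F)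
      = vm (m * mdim X) (mdim Z) w (matmul (m * mdim X) (matmul (m * mdim Y) \<iota> \<pi>) F)"
    by (simp add: vm_matmul matmul_assoc)
  also have "\<dots> = vm (m * mdim X) (mdim Z) w (matmul (m * mdim X) kd F)"
    by (rule vm_cong_mat, rule matmul_cong_left) (use ip in auto)
  also have "\<dots> = h" unfolding h by (rule vm_cong_mat) (simp add: matmul_kd_left)
  finally show "h \<in> trace_vecs H Y Z" unfolding trace_vecs_def using F' vm_vecs by fastforce
qed

lemma trace_vecs_comp:
  assumes h: "h \<in> trace_vecs H X Z" and G: "mhom H Z Z' G"
  shows "vm (mdim Z) (mdim Z') h G \<in> trace_vecs H X Z'"
proof -
  obtain m F w where F: "mhom H (dsumpow X m) Z F" and w: "w \<in> vecs (m * mdim X)" and h: "h = vm (m * mdim X) (mdim Z) w F"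
    using assms unfolding trace_vecs_def by blast
  have "vm (mdim Z) (mdim Z') h G = vm (m * mdim X) (mdim Z') w (matmul (mdim Z) F G)" unfolding h by (simp add: vm_matmul)
  then show ?thesis unfolding trace_vecs_def using mhom_comp[OF F G] w by fastforce
qed

lemma trace_vecs_zero: "(\<lambda>_. 0) \<in> trace_vecs H X Z"
proof -
  have "mhom H (dsumpow X 0) Z (\<lambda>_ _. 0)" by (simp add: mhom_def)
  moreover have "(\<lambda>_. 0) = vm (0 * mdim X) (mdim Z) (\<lambda>_. 0) (\<lambda>_ _. 0)" by (simp add: vm_def fun_eq_iff)
  ultimately show ?thesis unfolding trace_vecs_def by (force simp: vecs_def)
qed

lemma trace_vecs_add:
  assumes h1: "h1 \<in> trace_vecs H X Z" and h2: "h2 \<in> trace_vecs H X Z"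
  shows "(\<lambda>i. h1 i + h2 i) \<in> trace_vecs H X Z"
proof -
  define h where "h = (\<lambda>p::nat. if p = 0 then h1 else h2)"
  obtain m F where F: "mhom H (dsumpow X m) Z F" and c: "\<forall>p<2. \<exists>y\<in>vecs (m * mdim X). vm (m * mdim X) (mdim Z) y F = h p"
    using trace_vecs_common_map[of 2 h H X Z] h1 h2 unfolding h_def by (metis (full_types))
  obtain y1 y2 where y1: "y1 \<in> vecs (m * mdim X)" "vm (m * mdim X) (mdim Z) y1 F = h1"
    and y2: "y2 \<in> vecs (m * mdim X)" "vm (m * mdim X) (mdim Z) y2 F = h2"
    using c[rule_format, of 0] c[rule_format, of 1] unfolding h_def by auto
  have "vm (m * mdim X) (mdim Z) (\<lambda>i. 1 * y1 i + 1 * y2 i) F = (\<lambda>i. h1 i + h2 i)"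
    unfolding vm_lincomb using y1 y2 by simp
  moreover have "(\<lambda>i. 1 * y1 i + 1 * y2 i) \<in> vecs (m * mdim X)" using y1 y2 by (simp add: vecs_def)
  ultimately show ?thesis unfolding trace_vecs_def using F by force
qed

lemma trace_vecs_scale:
  assumes h: "h \<in> trace_vecs H X Z"
  shows "(\<lambda>i. c * h i) \<in> trace_vecs H X Z"
proof -
  obtain m F w where F: "mhom H (dsumpow X m) Z F" and w: "w \<in> vecs (m * mdim X)" and h: "h = vm (m * mdim X) (mdim Z) w F"
    using assms unfolding trace_vecs_def by blast
  have "vm (m * mdim X) (mdim Z) (\<lambda>i. c * w i + 0 * w i) F = (\<lambda>i. c * h i)"
    unfolding vm_lincomb h by simp
  moreover have "(\<lambda>i. c * w i + 0 * w i) \<in> vecs (m * mdim X)" using w by (simp add: vecs_def)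
  ultimately show ?thesis unfolding trace_vecs_def using F by force
qed

lemma trace_vecs_sum:
  fixes T :: "nat set"
  assumes "finite T" "\<And>t. t \<in> T \<Longrightarrow> g t \<in> trace_vecs H X Z"
  shows "(\<lambda>i. \<Sum>t\<in>T. g t i) \<in> trace_vecs H X Z"
  using assms
proof (induction T rule: finite_induct)
  case empty then show ?case using trace_vecs_zero by simp
next
  case (insert x F)
  then show ?case using trace_vecs_add[of "g x" H X Z "\<lambda>i. \<Sum>t\<in>F. g t i"] by simp
qed

lemma trace_vecs_subspace: "VS.subspace (trace_vecs H X Z)"
  unfolding VS.subspace_def
  using trace_vecs_zero trace_vecs_add trace_vecs_scale by (auto simp: plus_fun_def scale_vec_def zero_fun_def)

definition block_proj :: "nat \<Rightarrow> nat \<Rightarrow> ('k::comm_ring_1) matr" where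
  "block_proj n t = (\<lambda>x j. if x div n = t then kd (x mod n) j else 0)"
definition block_incl :: "nat \<Rightarrow> nat \<Rightarrow> ('k::comm_ring_1) matr" where
  "block_incl n t = (\<lambda>j x. if t = x div n then kd j (x mod n) else 0)"

lemma block_proj_mhom: "mhom H (dsumpow (regmod H) a) (regmod H) (block_proj (hdim H) t)"
  unfolding mhom_def
proof (intro allI impI)
  let ?n = "hdim H"
  fix l x r assume l: "l < ?n" and x: "x < mdim (dsumpow (regmod H) a)" and r: "r < mdim (regmod H)"
  have x': "x < a * ?n" and r': "r < ?n" using x r by auto
  have "(\<Sum>q<mdim (dsumpow (regmod H) a). act (dsumpow (regmod H) a) l x q * block_proj ?n t q r)
      = (\<Sum>q<a * ?n. (if x div ?n = q div ?n then hmul H (x mod ?n) l (q mod ?n) else 0) * (if q div ?n = t then kd (q mod ?n) r else 0))"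
    by (simp only: act_dsumpow_regmod block_proj_def mdim_dsumpow mdim_regmod)
  also have "\<dots> = (if x div ?n = t then (\<Sum>p<?n. hmul H (x mod ?n) l p * kd p r) else 0)"
    by (rule sum_blocks) (use x' less_mult_divmod_bounds in auto)
  also have "\<dots> = (\<Sum>q<mdim (regmod H). block_proj ?n t x q * act (regmod H) l q r)"
    using r' less_mult_divmod_bounds[OF x'] by (simp add: block_proj_def act_regmod sum_kd_right sum_kd_left)
  finally show "(\<Sum>q<mdim (regmod H). block_proj ?n t x q * act (regmod H) l q r) =
      (\<Sum>q<mdim (dsumpow (regmod H) a). act (dsumpow (regmod H) a) l x q * block_proj ?n t q r)" by simp
qed

lemma block_incl_mhom:
  assumes t: "t < a"
  shows "mhom H (regmod H) (dsumpow (regmod H) a) (block_incl (hdim H) t)"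
  unfolding mhom_def
proof (intro allI impI)
  let ?n = "hdim H"
  fix l j x assume l: "l < ?n" and j: "j < mdim (regmod H)" and x: "x < mdim (dsumpow (regmod H) a)"
  have x': "x < a * ?n" and j': "j < ?n" using x j by auto
  have "(\<Sum>q<mdim (dsumpow (regmod H) a). block_incl ?n t j q * act (dsumpow (regmod H) a) l q x)
      = (\<Sum>q<a * ?n. (if t = q div ?n then kd j (q mod ?n) else 0) * (if q div ?n = x div ?n then hmul H (q mod ?n) l (x mod ?n) else 0))"
    by (simp only: act_dsumpow_regmod block_incl_def mdim_dsumpow mdim_regmod)
  also have "\<dots> = (if t = x div ?n then (\<Sum>p<?n. kd j p * hmul H p l (x mod ?n)) else 0)"
    by (rule sum_blocks) (use t in auto)
  also have "\<dots> = (\<Sum>q<mdim (regmod H). act (regmod H) l j q * block_incl ?n t q x)"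
    using j' less_mult_divmod_bounds[OF x'] by (simp add: block_incl_def act_regmod sum_kd_right' sum_kd_left sum_kd_right[OF less_mult_mod_bound[OF x']])
  finally show "(\<Sum>q<mdim (dsumpow (regmod H) a). block_incl ?n t j q * act (dsumpow (regmod H) a) l q x) =
      (\<Sum>q<mdim (regmod H). act (regmod H) l j q * block_incl ?n t q x)" .
qed

lemma block_decomp:
  fixes h :: "'k::comm_ring_1 vect"
  assumes h: "h \<in> vecs (a * n)"
  shows "(\<lambda>x. \<Sum>t<a. vm n (a * n) (vm (a * n) n h (block_proj n t)) (block_incl n t) x) = h"
proof (rule ext)
  fix x
  have pi: "vm (a * n) n h (block_proj n t) j = h (t * n + j)" if t: "t < a" and j: "j < n" for t j
  proof -
    have "vm (a * n) n h (block_proj n t) j = (\<Sum>s<a. \<Sum>p<n. h (s * n + p) * (if s = t then kd p j else 0))"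
      using j by (simp add: vm_def block_proj_def sum_lessThan_mult) (intro sum.cong refl, auto simp: sum_kd_right[OF j])
    also have "\<dots> = (\<Sum>s<a. if s = t then h (s * n + j) else 0)"
      by (intro sum.cong refl) (auto simp: sum_kd_right[OF j])
    also have "\<dots> = h (t * n + j)" using t by (simp add: sum.delta')
    finally show ?thesis .
  qed
  show "(\<Sum>t<a. vm n (a * n) (vm (a * n) n h (block_proj n t)) (block_incl n t) x) = h x"
  proof (cases "x < a * n")
    case x: True
    have x1: "x div n < a" and x2: "x mod n < n" using less_mult_divmod_bounds[OF x] by auto
    have "(\<Sum>t<a. vm n (a * n) (vm (a * n) n h (block_proj n t)) (block_incl n t) x)
        = (\<Sum>t<a. if t = x div n then h (t * n + x mod n) else 0)"
    proof (intro sum.cong refl)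
      fix t assume t: "t \<in> {..<a}"
      have "vm n (a * n) (vm (a * n) n h (block_proj n t)) (block_incl n t) x = (\<Sum>j<n. h (t * n + j) * (if t = x div n then kd j (x mod n) else 0))"
        using x t pi by (simp add: vm_def block_incl_def)
      also have "\<dots> = (if t = x div n then h (t * n + x mod n) else 0)"
        using x2 by (auto simp: sum_kd_right)
      finally show "vm n (a * n) (vm (a * n) n h (block_proj n t)) (block_incl n t) x = (if t = x div n then h (t * n + x mod n) else 0)" .
    qed
    also have "\<dots> = h x" using x1 by (simp add: sum.delta')
    finally show ?thesis .
  next
    case False then show ?thesis using h by (simp add: vm_def vecs_def)
  qed
qed

lemma trace_vecs_dsumpow_regmod_mono:
  assumes tr: "trace_vecs H P (regmod H) \<subseteq> trace_vecs H X (regmod H)"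
  shows "trace_vecs H P (dsumpow (regmod H) a) \<subseteq> trace_vecs H X (dsumpow (regmod H) a)"
proof
  let ?n = "hdim H"
  fix h assume h: "h \<in> trace_vecs H P (dsumpow (regmod H) a)"
  have hv: "h \<in> vecs (a * ?n)" using trace_vecs_vecs[of H P "dsumpow (regmod H) a"] h by auto
  have "\<And>t. t \<in> {..<a} \<Longrightarrow> vm ?n (a * ?n) (vm (a * ?n) ?n h (block_proj ?n t)) (block_incl ?n t) \<in> trace_vecs H X (dsumpow (regmod H) a)"
  proof -
    fix t assume t: "t \<in> {..<a}"
    have "vm (a * ?n) ?n h (block_proj ?n t) \<in> trace_vecs H P (regmod H)"
      using trace_vecs_comp[OF h block_proj_mhom] by simp
    then have "vm (a * ?n) ?n h (block_proj ?n t) \<in> trace_vecs H X (regmod H)" using tr by blast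
    then show "vm ?n (a * ?n) (vm (a * ?n) ?n h (block_proj ?n t)) (block_incl ?n t) \<in> trace_vecs H X (dsumpow (regmod H) a)"
      using trace_vecs_comp[OF _ block_incl_mhom, of _ H X t a] t by simp
  qed
  then have "(\<lambda>x. \<Sum>t<a. vm ?n (a * ?n) (vm (a * ?n) ?n h (block_proj ?n t)) (block_incl ?n t) x) \<in> trace_vecs H X (dsumpow (regmod H) a)"
    by (intro trace_vecs_sum) auto
  then show "h \<in> trace_vecs H X (dsumpow (regmod H) a)" using block_decomp[OF hv] by simp
qed

context
  fixes H :: "('k::field) hopf"
  assumes hopf: "hopf_algebra H"
begin

lemma projective_summand_of_trace:
  assumes P: "projective H P" and X: "is_rmod H X"
    and tr: "trace_vecs H P (regmod H) \<subseteq> trace_vecs H X (regmod H)"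
  shows "\<exists>M. is_summand H P (dsumpow X M)"
proof -
  let ?n = "hdim H" and ?dP = "mdim P"
  obtain a where "is_summand H P (dsumpow (regmod H) a)" using P unfolding projective_def by blast
  then obtain \<iota> \<pi> where \<iota>: "mhom H P (dsumpow (regmod H) a) \<iota>" and \<pi>: "mhom H (dsumpow (regmod H) a) P \<pi>"
    and ip: "\<forall>p<?dP. \<forall>p'<?dP. matmul (a * ?n) \<iota> \<pi> p p' = kd p p'"
    unfolding is_summand_def by auto
  let ?Ha = "dsumpow (regmod H) a"
  have \<iota>1: "mhom H (dsumpow P 1) ?Ha \<iota>"
    by (rule mhom_cong_source[OF \<iota>]) (simp_all add: dsumpow_def)
  have rows: "vm ?dP (a * ?n) (unit_vec p) \<iota> \<in> trace_vecs H X ?Ha" if p: "p < ?dP" for p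
  proof -
    have "vm ?dP (a * ?n) (unit_vec p) \<iota> \<in> trace_vecs H P ?Ha"
      unfolding trace_vecs_def using \<iota>1 unit_vec_vecs[OF p] by (intro CollectI exI[of _ 1] exI[of _ \<iota>] exI[of _ "unit_vec p"]) simp
    then show ?thesis using trace_vecs_dsumpow_regmod_mono[OF tr] by blast
  qed
  obtain M F where F: "mhom H (dsumpow X M) ?Ha F"
    and cov: "\<forall>p<?dP. \<exists>y\<in>vecs (M * mdim X). vm (M * mdim X) (a * ?n) y F = vm ?dP (a * ?n) (unit_vec p) \<iota>"
    using trace_vecs_common_map[of ?dP "\<lambda>p. vm ?dP (a * ?n) (unit_vec p) \<iota>" H X ?Ha] rows by auto
  obtain Y where Y: "\<And>p. p < ?dP \<Longrightarrow> Y p \<in> vecs (M * mdim X) \<and> vm (M * mdim X) (a * ?n) (Y p) F = vm ?dP (a * ?n) (unit_vec p) \<iota>"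
    using cov by metis
  have img: "\<exists>y. vm (mdim (dsumpow X M)) (mdim ?Ha) y F = vm ?dP (mdim ?Ha) v \<iota>" if v: "v \<in> vecs ?dP" for v
  proof -
    have "vm (M * mdim X) (a * ?n) (\<lambda>i. \<Sum>p<?dP. v p * Y p i) F = (\<lambda>z. \<Sum>p<?dP. v p * vm (M * mdim X) (a * ?n) (Y p) F z)"
      by (rule vm_sum)
    also have "\<dots> = (\<lambda>z. \<Sum>p<?dP. v p * vm ?dP (a * ?n) (unit_vec p) \<iota> z)" using Y by simp
    also have "\<dots> = vm ?dP (a * ?n) v \<iota>"
      by (auto simp: fun_eq_iff vm_unit_vec vm_def unit_vec_eq_kd sum_kd_left)
    finally show ?thesis by auto
  qed
  obtain g where g: "mhom H P (dsumpow X M) g" and gF: "\<forall>x<?dP. \<forall>z<mdim ?Ha. matmul (mdim (dsumpow X M)) g F x z = \<iota> x z"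
    using projective_lift[OF hopf P dsumpow_rmod[OF hopf X] F \<iota> img] by blast
  have G: "mhom H (dsumpow X M) P (matmul (a * ?n) F \<pi>)" using mhom_comp[OF F \<pi>] by simp
  have "\<forall>p<?dP. \<forall>p'<?dP. matmul (mdim (dsumpow X M)) g (matmul (a * ?n) F \<pi>) p p' = kd p p'"
  proof (intro allI impI)
    fix p p' assume p: "p < ?dP" and p': "p' < ?dP"
    have "matmul (mdim (dsumpow X M)) g (matmul (a * ?n) F \<pi>) p p' = matmul (a * ?n) (matmul (mdim (dsumpow X M)) g F) \<pi> p p'"
      by (simp add: matmul_assoc)
    also have "\<dots> = matmul (a * ?n) \<iota> \<pi> p p'" by (rule matmul_cong_left) (use gF p in auto)
    also have "\<dots> = kd p p'" using ip p p' by blast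
    finally show "matmul (mdim (dsumpow X M)) g (matmul (a * ?n) F \<pi>) p p' = kd p p'" .
  qed
  then show ?thesis unfolding is_summand_def using g G by blast
qed

lemma is_summand_tensmod_counit:
  assumes X: "is_rmod H X" and PX: "projective H X" and Q: "is_rmod H Q"
    and E: "mhom H Q (trivmod H) E" and q0: "q0 \<in> vecs (mdim Q)" and q01: "(\<Sum>y<mdim Q. q0 y * E y 0) = 1"
  shows "is_summand H X (tensmod H X Q)"
proof -
  let ?dX = "mdim X" and ?dQ = "mdim Q"
  define S0 where "S0 = id_tensor ?dQ 1 E"
  have S0a: "mhom H (tensmod H X Q) (tensmod H X (trivmod H)) S0"
    unfolding S0_def using id_tensor_mhom[OF hopf E, of X] by simp
  have S0: "mhom H (tensmod H X Q) X S0"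
    by (rule mhom_cong_target[OF S0a]) (simp_all add: act_tensmod_trivmod[OF hopf])
  have img: "\<exists>y. vm (mdim (tensmod H X Q)) (mdim X) y S0 = vm ?dX ?dX v kd" if v: "v \<in> vecs ?dX" for v
  proof -
    define y where "y = (\<lambda>w. if w < ?dX * ?dQ then v (w div ?dQ) * q0 (w mod ?dQ) else 0)"
    have "vm (?dX * ?dQ) ?dX y S0 = v"
    proof (rule ext)
      fix z show "vm (?dX * ?dQ) ?dX y S0 z = v z"
      proof (cases "z < ?dX")
        case z: True
        have "vm (?dX * ?dQ) ?dX y S0 z = (\<Sum>w1<?dX. \<Sum>w2<?dQ. v w1 * q0 w2 * (kd w1 z * E w2 0))"
          using z by (simp add: vm_def y_def S0_def id_tensor_def sum_lessThan_mult mult_add_less_mult)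
        also have "\<dots> = (\<Sum>w1<?dX. kd w1 z * (v w1 * (\<Sum>w2<?dQ. q0 w2 * E w2 0)))"
          by (simp add: sum_distrib_left mult_ac)
        also have "\<dots> = v z" using z q01 by (simp add: sum_kd_left')
        finally show ?thesis .
      next
        case False then show ?thesis using v by (simp add: vm_def vecs_def)
      qed
    qed
    then show ?thesis using vm_kd[OF v] by auto
  qed
  obtain g where g: "mhom H X (tensmod H X Q) g" and gS: "\<forall>x<?dX. \<forall>z<?dX. matmul (mdim (tensmod H X Q)) g S0 x z = kd x z"
    using projective_lift[OF hopf PX tensmod_rmod[OF hopf X Q] S0 mhom_kd img] by blast
  show ?thesis unfolding is_summand_def using g S0 gS by blast
qed

lemma depth_finite_if_projective:
  assumes Q: "is_rmod H Q" and PQ: "projective H Q"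
    and E: "mhom H Q (trivmod H) E" and q0: "q0 \<in> vecs (mdim Q)" and q01: "(\<Sum>y<mdim Q. q0 y * E y 0) = 1"
  shows "depth H Q \<noteq> \<infinity>"
proof -
  have R: "\<And>n. is_rmod H (tpow H Q n)" using tpow_rmod[OF hopf Q] .
  have P: "\<And>n. projective H (tpow H Q (Suc n))" using projective_tensmod[OF hopf R PQ] by simp
  have sub: "\<And>n. is_summand H (tpow H Q (Suc n)) (tpow H Q (Suc (Suc n)))"
    using is_summand_tensmod_counit[OF R P Q E q0 q01] by simp
  define S where "S = (\<lambda>k. trace_vecs H (tpow H Q (Suc k)) (regmod H))"
  have "\<exists>N. S (Suc N) \<subseteq> S N"
  proof (rule vecs_chain_stabilizes)
    show "\<And>k. VS.subspace (S k)" unfolding S_def by (rule trace_vecs_subspace)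
    show "\<And>k. S k \<subseteq> S (Suc k)" unfolding S_def using trace_vecs_mono[OF sub] by blast
    show "\<And>k. S k \<subseteq> vecs (hdim H)" unfolding S_def using trace_vecs_vecs by fastforce
  qed
  then obtain N where SN: "S (Suc N) \<subseteq> S N" by blast
  obtain M where M: "is_summand H (tpow H Q (Suc (Suc N))) (dsumpow (tpow H Q (Suc N)) M)"
    using projective_summand_of_trace[OF P R] SN unfolding S_def by blast
  have s1: "summand_of H (tpow H Q (Suc N)) (tpow H Q (Suc (Suc N)))"
    unfolding summand_of_iff_is_summand using is_summand_trans[OF sub dsumpow_one_summand(1)] by blast
  have s2: "summand_of H (tpow H Q (Suc (Suc N))) (tpow H Q (Suc N))"
    unfolding summand_of_iff_is_summand using M by blast
  have "similar H (tpow H Q (Suc N)) (tpow H Q (Suc (Suc N)))"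
    unfolding similar_def using s1 s2 by blast
  then have "\<exists>n. similar H (tpow H Q n) (tpow H Q (Suc n))" by blast
  then show ?thesis unfolding depth_def by simp
qed

lemma quot_mod_depth_finite:
  assumes B: "hopf_subalg H B" and Q: "is_quot_mod H B Q" and PQ: "projective H Q"
  shows "depth H Q \<noteq> \<infinity>"
proof -
  have Qr: "is_rmod H Q" using Q unfolding is_quot_mod_def by blast
  obtain E q0 where "mhom H Q (trivmod H) E" "q0 \<in> vecs (mdim Q)" "(\<Sum>y<mdim Q. q0 y * E y 0) = 1"
    using quot_mod_counit[OF hopf B Q] by blast
  then show ?thesis by (rule depth_finite_if_projective[OF Qr PQ])
qed

end

theorem mainTheorem6:
  fixes H :: "('k::field) hopf" and K R :: "'k vect set" and QK QR :: "'k hmod"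
  assumes "hopf_algebra H"
    and "hopf_subalg H K" and "hopf_subalg H R" and "K \<subseteq> R"
    and "split_incl H R"
    and "is_quot_mod H K QK" and "is_quot_mod H R QR"
  shows "depth H QK \<noteq> \<infinity> \<and> depth H QR \<noteq> \<infinity>"
proof -
  have hopf: "hopf_algebra H" by fact
  have PR: "projective H QR"
    by (rule quot_mod_projective_if_split[OF assms(7,5)])
  have "is_rmod H QK" using assms(6) unfolding is_quot_mod_def by blast
  then have PK: "projective H QK"
    using projective_summand[OF quot_mod_summand_tensmod[OF hopf assms(2,3,4,6,7)]]
      projective_tensmod[OF hopf _ PR] by blast
  show ?thesis
    using quot_mod_depth_finite[OF hopf assms(2,6) PK] quot_mod_depth_finite[OF hopf assms(3,7) PR]
    by blast
qed

end
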